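(* Let ${\cal B}$ be a bialgebra over a field ${\bf k}$, let $({\cal E},\rho)$ be a right ${\cal B}$-comodule algebra, and let $T\subset{\cal E}$ be a left Ore set with localization map $i_T:{\cal E}\to T^{-1}{\cal E}$. Then $T$ is $\rho$-compatible if and only if for every $t\in T$ the element $((i_T\otimes{\rm id})\circ\rho)(t)$ is invertible in the algebra $T^{-1}{\cal E}\otimes{\cal B}$.
   Context: A right ${\cal B}$-comodule algebra is an associative unital ${\bf k}$-algebra ${\cal E}$ with a right ${\cal B}$-coaction $\rho:{\cal E}\to{\cal E}\otimes{\cal B}$ which is a homomorphism of unital algebras. A left Ore set in a ring $R$ is a multiplicative subset $S\subset R\setminus\{0\}$ (containing $1$, closed under products) such that for all $s\in S,r\in R$ there exist $s'\in S,r'\in R$ with $r's=s'r$, and such that $ns=0$ with $n\in R,s\in S$ implies $s'n=0$ for some $s'\in S$; $S^{-1}R$ denotes the ring of left fractions $s^{-1}r$ and $i_S:R\to S^{-1}R$, $r\mapsto 1^{-1}r$, the localization map. A left Ore set $T$ in ${\cal E}$ is called $\rho$-compatible if there exists a unique map $\rho_T:T^{-1}{\cal E}\to T^{-1}{\cal E}\otimes{\cal B}$ making $(T^{-1}{\cal E},\rho_T)$ a right ${\cal B}$-comodule algebra and satisfying $\rho_T\circ i_T=(i_T\otimes{\rm id})\circ\rho$. *)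

theory Defs
  imports "HOL-Algebra.Module" "HOL-Algebra.RingHom"
begin

text \<open>A k-algebra is a
HOL-Algebra ring record extended with a scalar multiplication (the module record of
HOL-Algebra, scalars of type 'k), satisfying the usual axioms.\<close>

type_synonym ('k,'a) kalg = "('k,'a) module"

definition kalgebra :: "('k::field,'a) kalg \<Rightarrow> bool" where
  "kalgebra A \<longleftrightarrow> ring A \<and>
    (\<forall>c x. x \<in> carrier A \<longrightarrow> (c \<odot>\<^bsub>A\<^esub> x) \<in> carrier A) \<and>
    (\<forall>c x y. x \<in> carrier A \<longrightarrow> y \<in> carrier A \<longrightarrow>
        (c \<odot>\<^bsub>A\<^esub> (x \<oplus>\<^bsub>A\<^esub> y)) = (c \<odot>\<^bsub>A\<^esub> x) \<oplus>\<^bsub>A\<^esub> (c \<odot>\<^bsub>A\<^esub> y)) \<and>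
    (\<forall>c d x. x \<in> carrier A \<longrightarrow> ((c + d) \<odot>\<^bsub>A\<^esub> x) = (c \<odot>\<^bsub>A\<^esub> x) \<oplus>\<^bsub>A\<^esub> (d \<odot>\<^bsub>A\<^esub> x)) \<and>
    (\<forall>c d x. x \<in> carrier A \<longrightarrow> ((c * d) \<odot>\<^bsub>A\<^esub> x) = (c \<odot>\<^bsub>A\<^esub> (d \<odot>\<^bsub>A\<^esub> x))) \<and>
    (\<forall>x. x \<in> carrier A \<longrightarrow> (1 \<odot>\<^bsub>A\<^esub> x) = x) \<and>
    (\<forall>c x y. x \<in> carrier A \<longrightarrow> y \<in> carrier A \<longrightarrow>
        (c \<odot>\<^bsub>A\<^esub> (x \<otimes>\<^bsub>A\<^esub> y)) = (c \<odot>\<^bsub>A\<^esub> x) \<otimes>\<^bsub>A\<^esub> y \<and>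
        (c \<odot>\<^bsub>A\<^esub> (x \<otimes>\<^bsub>A\<^esub> y)) = x \<otimes>\<^bsub>A\<^esub> (c \<odot>\<^bsub>A\<^esub> y))"

definition alg_hom :: "('k::field,'a) kalg \<Rightarrow> ('k,'b) kalg \<Rightarrow> ('a \<Rightarrow> 'b) \<Rightarrow> bool" where
  "alg_hom A A' f \<longleftrightarrow> f \<in> ring_hom A A' \<and>
     (\<forall>c x. x \<in> carrier A \<longrightarrow> f (c \<odot>\<^bsub>A\<^esub> x) = (c \<odot>\<^bsub>A'\<^esub> f x))"

definition kfield :: "('k::field,'k) kalg" where
  "kfield = \<lparr>carrier = UNIV, mult = (*), one = 1, zero = 0, add = (+), smult = (*)\<rparr>"

text \<open>A \<otimes> B is the free k-vector space on carrier A \<times> carrier B (finitely supported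
functions) modulo the subspace spanned by the bilinearity relations; elements are cosets.\<close>

definition fsupp :: "('x \<Rightarrow> 'k::zero) \<Rightarrow> 'x set" where
  "fsupp f = {p. f p \<noteq> 0}"

definition tdelta :: "'x \<Rightarrow> 'x \<Rightarrow> 'k::{zero,one}" where
  "tdelta p = (\<lambda>q. if q = p then 1 else 0)"

definition tfree :: "('k::field,'a) kalg \<Rightarrow> ('k,'b) kalg \<Rightarrow> ('a \<times> 'b \<Rightarrow> 'k) set" where
  "tfree A B = {f. finite (fsupp f) \<and> fsupp f \<subseteq> carrier A \<times> carrier B}"

inductive_set trel :: "('k::field,'a) kalg \<Rightarrow> ('k,'b) kalg \<Rightarrow> ('a \<times> 'b \<Rightarrow> 'k) set"
  for A B where
  zero: "(\<lambda>_. 0) \<in> trel A B"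
| addl: "\<lbrakk>a \<in> carrier A; a' \<in> carrier A; b \<in> carrier B\<rbrakk> \<Longrightarrow>
    (\<lambda>q. tdelta (a \<oplus>\<^bsub>A\<^esub> a', b) q - tdelta (a, b) q - tdelta (a', b) q) \<in> trel A B"
| addr: "\<lbrakk>a \<in> carrier A; b \<in> carrier B; b' \<in> carrier B\<rbrakk> \<Longrightarrow>
    (\<lambda>q. tdelta (a, b \<oplus>\<^bsub>B\<^esub> b') q - tdelta (a, b) q - tdelta (a, b') q) \<in> trel A B"
| smull: "\<lbrakk>a \<in> carrier A; b \<in> carrier B\<rbrakk> \<Longrightarrow>
    (\<lambda>q. tdelta (c \<odot>\<^bsub>A\<^esub> a, b) q - c * tdelta (a, b) q) \<in> trel A B"
| smulr: "\<lbrakk>a \<in> carrier A; b \<in> carrier B\<rbrakk> \<Longrightarrow>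
    (\<lambda>q. tdelta (a, c \<odot>\<^bsub>B\<^esub> b) q - c * tdelta (a, b) q) \<in> trel A B"
| add: "\<lbrakk>n \<in> trel A B; m \<in> trel A B\<rbrakk> \<Longrightarrow> (\<lambda>q. n q + m q) \<in> trel A B"
| smul: "n \<in> trel A B \<Longrightarrow> (\<lambda>q. c * n q) \<in> trel A B"

definition tcls :: "('k::field,'a) kalg \<Rightarrow> ('k,'b) kalg \<Rightarrow> ('a \<times> 'b \<Rightarrow> 'k) \<Rightarrow> ('a \<times> 'b \<Rightarrow> 'k) set" where
  "tcls A B f = {g. (\<lambda>q. g q - f q) \<in> trel A B}"

definition trep :: "('x \<Rightarrow> 'k) set \<Rightarrow> ('x \<Rightarrow> 'k)" where
  "trep X = (SOME f. f \<in> X)"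

definition tfmul :: "('k::field,'a) kalg \<Rightarrow> ('k,'b) kalg \<Rightarrow> ('a \<times> 'b \<Rightarrow> 'k) \<Rightarrow> ('a \<times> 'b \<Rightarrow> 'k) \<Rightarrow> ('a \<times> 'b \<Rightarrow> 'k)" where
  "tfmul A B f g = (\<lambda>q. \<Sum>p\<in>fsupp f. \<Sum>p'\<in>fsupp g.
      if (fst p \<otimes>\<^bsub>A\<^esub> fst p', snd p \<otimes>\<^bsub>B\<^esub> snd p') = q then f p * g p' else 0)"

definition tensor_alg :: "('k::field,'a) kalg \<Rightarrow> ('k,'b) kalg \<Rightarrow> ('k, ('a \<times> 'b \<Rightarrow> 'k) set) kalg" where
  "tensor_alg A B = \<lparr>carrier = tcls A B ` tfree A B,
     mult = (\<lambda>X Y. tcls A B (tfmul A B (trep X) (trep Y))),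
     one = tcls A B (tdelta (\<one>\<^bsub>A\<^esub>, \<one>\<^bsub>B\<^esub>)),
     zero = tcls A B (\<lambda>_. 0),
     add = (\<lambda>X Y. tcls A B (\<lambda>q. trep X q + trep Y q)),
     smult = (\<lambda>c X. tcls A B (\<lambda>q. c * trep X q))\<rparr>"

definition tens :: "('k::field,'a) kalg \<Rightarrow> ('k,'b) kalg \<Rightarrow> 'a \<Rightarrow> 'b \<Rightarrow> ('a \<times> 'b \<Rightarrow> 'k) set" where
  "tens A B a b = tcls A B (tdelta (a, b))"

definition tmap :: "('k::field,'a') kalg \<Rightarrow> ('k,'b') kalg \<Rightarrow> ('a \<Rightarrow> 'a') \<Rightarrow> ('b \<Rightarrow> 'b')
     \<Rightarrow> ('a \<times> 'b \<Rightarrow> 'k) set \<Rightarrow> ('a' \<times> 'b' \<Rightarrow> 'k) set" where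
  "tmap A' B' F G X = tcls A' B' (\<lambda>q. \<Sum>p\<in>fsupp (trep X).
      if (F (fst p), G (snd p)) = q then trep X p else 0)"

text \<open>Canonical associativity isomorphism (A \<otimes> B) \<otimes> C \<rightarrow> A \<otimes> (B \<otimes> C).\<close>
definition tassoc :: "('k::field,'a) kalg \<Rightarrow> ('k,'b) kalg \<Rightarrow> ('k,'c) kalg
     \<Rightarrow> (('a \<times> 'b \<Rightarrow> 'k) set \<times> 'c \<Rightarrow> 'k) set \<Rightarrow> ('a \<times> ('b \<times> 'c \<Rightarrow> 'k) set \<Rightarrow> 'k) set" where
  "tassoc A B C X = tcls A (tensor_alg B C) (\<lambda>q. \<Sum>p\<in>fsupp (trep X). \<Sum>p'\<in>fsupp (trep (fst p)).
      if (fst p', tens B C (snd p') (snd p)) = q then trep X p * trep (fst p) p' else 0)"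

text \<open>Counit axioms are stated via the canonical identifications A \<otimes> k = A, k \<otimes> A = A,
i.e. (id \<otimes> \<epsilon>)\<Delta>(b) = b \<otimes> 1 and (\<epsilon> \<otimes> id)\<Delta>(b) = 1 \<otimes> b.\<close>
definition bialgebra :: "('k::field,'b) kalg \<Rightarrow> ('b \<Rightarrow> ('b \<times> 'b \<Rightarrow> 'k) set) \<Rightarrow> ('b \<Rightarrow> 'k) \<Rightarrow> bool" where
  "bialgebra B \<Delta> \<epsilon> \<longleftrightarrow> kalgebra B \<and> alg_hom B (tensor_alg B B) \<Delta> \<and> alg_hom B kfield \<epsilon> \<and>
    (\<forall>b\<in>carrier B. tassoc B B B (tmap (tensor_alg B B) B \<Delta> id (\<Delta> b))
                    = tmap B (tensor_alg B B) id \<Delta> (\<Delta> b)) \<and>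
    (\<forall>b\<in>carrier B. tmap B kfield id \<epsilon> (\<Delta> b) = tens B kfield b 1) \<and>
    (\<forall>b\<in>carrier B. tmap kfield B \<epsilon> id (\<Delta> b) = tens kfield B 1 b)"

definition comod_alg :: "('k::field,'b) kalg \<Rightarrow> ('b \<Rightarrow> ('b \<times> 'b \<Rightarrow> 'k) set) \<Rightarrow> ('b \<Rightarrow> 'k)
     \<Rightarrow> ('k,'e) kalg \<Rightarrow> ('e \<Rightarrow> ('e \<times> 'b \<Rightarrow> 'k) set) \<Rightarrow> bool" where
  "comod_alg B \<Delta> \<epsilon> E \<rho> \<longleftrightarrow> kalgebra E \<and> alg_hom E (tensor_alg E B) \<rho> \<and>
    (\<forall>e\<in>carrier E. tassoc E B B (tmap (tensor_alg E B) B \<rho> id (\<rho> e))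
                    = tmap E (tensor_alg B B) id \<Delta> (\<rho> e)) \<and>
    (\<forall>e\<in>carrier E. tmap E kfield id \<epsilon> (\<rho> e) = tens E kfield e 1)"

definition left_ore :: "('k,'a) kalg \<Rightarrow> 'a set \<Rightarrow> bool" where
  "left_ore R S \<longleftrightarrow> S \<subseteq> carrier R - {\<zero>\<^bsub>R\<^esub>} \<and> \<one>\<^bsub>R\<^esub> \<in> S \<and>
    (\<forall>s\<in>S. \<forall>t\<in>S. s \<otimes>\<^bsub>R\<^esub> t \<in> S) \<and>
    (\<forall>s\<in>S. \<forall>r\<in>carrier R. \<exists>s'\<in>S. \<exists>r'\<in>carrier R. r' \<otimes>\<^bsub>R\<^esub> s = s' \<otimes>\<^bsub>R\<^esub> r) \<and>
    (\<forall>n\<in>carrier R. \<forall>s\<in>S. n \<otimes>\<^bsub>R\<^esub> s = \<zero>\<^bsub>R\<^esub> \<longrightarrow> (\<exists>s'\<in>S. s' \<otimes>\<^bsub>R\<^esub> n = \<zero>\<^bsub>R\<^esub>))"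

text \<open>Left fractions s\<inverse>r are pairs (s,r); (s,r) ~ (s',r') iff cs = c's' \<in> S and cr = c'r'
for some c, c'.\<close>
definition oeq :: "('k,'a) kalg \<Rightarrow> 'a set \<Rightarrow> 'a \<times> 'a \<Rightarrow> 'a \<times> 'a \<Rightarrow> bool" where
  "oeq R S p p' \<longleftrightarrow> (\<exists>c\<in>carrier R. \<exists>c'\<in>carrier R.
     c \<otimes>\<^bsub>R\<^esub> fst p = c' \<otimes>\<^bsub>R\<^esub> fst p' \<and> c \<otimes>\<^bsub>R\<^esub> fst p \<in> S \<and>
     c \<otimes>\<^bsub>R\<^esub> snd p = c' \<otimes>\<^bsub>R\<^esub> snd p')"

definition ofrac :: "('k,'a) kalg \<Rightarrow> 'a set \<Rightarrow> 'a \<Rightarrow> 'a \<Rightarrow> ('a \<times> 'a) set" where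
  "ofrac R S s r = {p \<in> S \<times> carrier R. oeq R S (s, r) p}"

definition orep :: "('a \<times> 'a) set \<Rightarrow> 'a \<times> 'a" where
  "orep X = (SOME p. p \<in> X)"

text \<open>s\<inverse>r + s'\<inverse>r' = (us)\<inverse>(ur + vr') where us = vs';
  s\<inverse>r \<cdot> s'\<inverse>r' = (us)\<inverse>(vr') where ur = vs'.\<close>
definition loc :: "('k,'a) kalg \<Rightarrow> 'a set \<Rightarrow> ('k, ('a \<times> 'a) set) kalg" where
  "loc R S = \<lparr>carrier = {ofrac R S s r | s r. s \<in> S \<and> r \<in> carrier R},
     mult = (\<lambda>X Y. let (s, r) = orep X; (s', r') = orep Y;
                      (u, v) = (SOME (u, v). u \<in> S \<and> v \<in> carrier R \<and> u \<otimes>\<^bsub>R\<^esub> r = v \<otimes>\<^bsub>R\<^esub> s')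
                  in ofrac R S (u \<otimes>\<^bsub>R\<^esub> s) (v \<otimes>\<^bsub>R\<^esub> r')),
     one = ofrac R S \<one>\<^bsub>R\<^esub> \<one>\<^bsub>R\<^esub>,
     zero = ofrac R S \<one>\<^bsub>R\<^esub> \<zero>\<^bsub>R\<^esub>,
     add = (\<lambda>X Y. let (s, r) = orep X; (s', r') = orep Y;
                      (u, v) = (SOME (u, v). u \<in> S \<and> v \<in> carrier R \<and> u \<otimes>\<^bsub>R\<^esub> s = v \<otimes>\<^bsub>R\<^esub> s')
                  in ofrac R S (u \<otimes>\<^bsub>R\<^esub> s) ((u \<otimes>\<^bsub>R\<^esub> r) \<oplus>\<^bsub>R\<^esub> (v \<otimes>\<^bsub>R\<^esub> r'))),
     smult = (\<lambda>c X. let (s, r) = orep X in ofrac R S s (c \<odot>\<^bsub>R\<^esub> r))\<rparr>"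

definition iloc :: "('k,'a) kalg \<Rightarrow> 'a set \<Rightarrow> 'a \<Rightarrow> ('a \<times> 'a) set" where
  "iloc R S r = ofrac R S \<one>\<^bsub>R\<^esub> r"

definition rho_compatible :: "('k::field,'b) kalg \<Rightarrow> ('b \<Rightarrow> ('b \<times> 'b \<Rightarrow> 'k) set) \<Rightarrow> ('b \<Rightarrow> 'k)
     \<Rightarrow> ('k,'e) kalg \<Rightarrow> ('e \<Rightarrow> ('e \<times> 'b \<Rightarrow> 'k) set) \<Rightarrow> 'e set \<Rightarrow> bool" where
  "rho_compatible B \<Delta> \<epsilon> E \<rho> T \<longleftrightarrow>
    (\<exists>\<rho>T. (comod_alg B \<Delta> \<epsilon> (loc E T) \<rho>T \<and>
           (\<forall>e\<in>carrier E. \<rho>T (iloc E T e) = tmap (loc E T) B (iloc E T) id (\<rho> e))) \<and>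
         (\<forall>\<rho>'. (comod_alg B \<Delta> \<epsilon> (loc E T) \<rho>' \<and>
                 (\<forall>e\<in>carrier E. \<rho>' (iloc E T e) = tmap (loc E T) B (iloc E T) id (\<rho> e)))
               \<longrightarrow> (\<forall>x\<in>carrier (loc E T). \<rho>' x = \<rho>T x)))"

end

theory Submission
  imports Defs
begin

text \<open>
  If \<open>\<rho>\<^sub>T\<close> exists it is a ring homomorphism with \<open>\<rho>\<^sub>T (i\<^sub>T t) = (i\<^sub>T \<otimes> id) (\<rho> t)\<close>,
  and \<open>i\<^sub>T t\<close> is a unit of \<open>T\<inverse>E\<close>, so \<open>(i\<^sub>T \<otimes> id) (\<rho> t)\<close> is a unit.
  Conversely, if these elements are units, the universal property of the Ore localization
  extends the algebra map \<open>(i\<^sub>T \<otimes> id) \<circ> \<rho>\<close> to an algebra map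
  \<open>\<rho>\<^sub>T (s\<inverse> r) = ((i\<^sub>T \<otimes> id) (\<rho> s))\<inverse> (i\<^sub>T \<otimes> id) (\<rho> r)\<close> on \<open>T\<inverse>E\<close>.
  An algebra map out of \<open>T\<inverse>E\<close> is determined by its values on \<open>i\<^sub>T E\<close>, because
  \<open>s\<inverse> r = (i\<^sub>T s)\<inverse> i\<^sub>T r\<close>. This gives the uniqueness of \<open>\<rho>\<^sub>T\<close>, and it reduces
  coassociativity and the counit law for \<open>\<rho>\<^sub>T\<close>, both equalities of algebra maps out of
  \<open>T\<inverse>E\<close>, to the same laws for \<open>\<rho>\<close> (using naturality of the associativity isomorphism
  of tensor products).
\<close>

section \<open>Algebras over a field\<close>

lemma kalg_ring: "kalgebra A \<Longrightarrow> ring A" by (simp add: kalgebra_def)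
lemma kalg_smul_closed: "kalgebra A \<Longrightarrow> x \<in> carrier A \<Longrightarrow> c \<odot>\<^bsub>A\<^esub> x \<in> carrier A"
  by (simp add: kalgebra_def)
lemma kalg_smul_add: "kalgebra A \<Longrightarrow> x \<in> carrier A \<Longrightarrow> y \<in> carrier A \<Longrightarrow>
   c \<odot>\<^bsub>A\<^esub> (x \<oplus>\<^bsub>A\<^esub> y) = (c \<odot>\<^bsub>A\<^esub> x) \<oplus>\<^bsub>A\<^esub> (c \<odot>\<^bsub>A\<^esub> y)"
  by (simp add: kalgebra_def)
lemma kalg_add_smul: "kalgebra A \<Longrightarrow> x \<in> carrier A \<Longrightarrow>
   (c + d) \<odot>\<^bsub>A\<^esub> x = (c \<odot>\<^bsub>A\<^esub> x) \<oplus>\<^bsub>A\<^esub> (d \<odot>\<^bsub>A\<^esub> x)"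
  by (simp add: kalgebra_def)
lemma kalg_mult_smul: "kalgebra A \<Longrightarrow> x \<in> carrier A \<Longrightarrow>
   (c * d) \<odot>\<^bsub>A\<^esub> x = c \<odot>\<^bsub>A\<^esub> (d \<odot>\<^bsub>A\<^esub> x)"
  by (simp add: kalgebra_def)
lemma kalg_one_smul: "kalgebra A \<Longrightarrow> x \<in> carrier A \<Longrightarrow> 1 \<odot>\<^bsub>A\<^esub> x = x"
  by (simp add: kalgebra_def)
lemma kalg_smul_mult_l: "kalgebra A \<Longrightarrow> x \<in> carrier A \<Longrightarrow> y \<in> carrier A \<Longrightarrow>
   c \<odot>\<^bsub>A\<^esub> (x \<otimes>\<^bsub>A\<^esub> y) = (c \<odot>\<^bsub>A\<^esub> x) \<otimes>\<^bsub>A\<^esub> y"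
  by (simp add: kalgebra_def)
lemma kalg_smul_mult_r: "kalgebra A \<Longrightarrow> x \<in> carrier A \<Longrightarrow> y \<in> carrier A \<Longrightarrow>
   c \<odot>\<^bsub>A\<^esub> (x \<otimes>\<^bsub>A\<^esub> y) = x \<otimes>\<^bsub>A\<^esub> (c \<odot>\<^bsub>A\<^esub> y)"
  unfolding kalgebra_def by blast

lemma alg_hom_id: "kalgebra A \<Longrightarrow> alg_hom A A id"
  unfolding alg_hom_def by (auto intro!: ring_hom_memI)

lemma alg_hom_comp: "alg_hom A B f \<Longrightarrow> alg_hom B C g \<Longrightarrow> alg_hom A C (g \<circ> f)"
  unfolding alg_hom_def using ring_hom_trans[of f A B g C]
  by (auto simp: ring_hom_closed)

lemma ring_hom_Units:
  assumes h: "h \<in> ring_hom R M" and x: "x \<in> Units R"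
  shows "h x \<in> Units M"
proof -
  obtain y where y: "y \<in> carrier R" "x \<otimes>\<^bsub>R\<^esub> y = \<one>\<^bsub>R\<^esub>" "y \<otimes>\<^bsub>R\<^esub> x = \<one>\<^bsub>R\<^esub>"
    using x unfolding Units_def by blast
  have xc: "x \<in> carrier R" using x unfolding Units_def by blast
  have "h x \<otimes>\<^bsub>M\<^esub> h y = \<one>\<^bsub>M\<^esub>" "h y \<otimes>\<^bsub>M\<^esub> h x = \<one>\<^bsub>M\<^esub>"
    using y xc by (simp_all add: ring_hom_mult[OF h, symmetric] ring_hom_one[OF h])
  then show ?thesis
    unfolding Units_def using ring_hom_closed[OF h xc] ring_hom_closed[OF h y(1)] by blast
qed

definition klinear :: "('k::field,'a) kalg \<Rightarrow> ('k,'a2) kalg \<Rightarrow> ('a \<Rightarrow> 'a2) \<Rightarrow> bool" where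
  "klinear A A' F \<longleftrightarrow> (\<forall>x\<in>carrier A. F x \<in> carrier A') \<and>
     (\<forall>x\<in>carrier A. \<forall>y\<in>carrier A. F (x \<oplus>\<^bsub>A\<^esub> y) = F x \<oplus>\<^bsub>A'\<^esub> F y) \<and>
     (\<forall>c. \<forall>x\<in>carrier A. F (c \<odot>\<^bsub>A\<^esub> x) = c \<odot>\<^bsub>A'\<^esub> F x)"

lemma alg_hom_klinear: "alg_hom A A' F \<Longrightarrow> klinear A A' F"
  unfolding alg_hom_def klinear_def by (auto simp: ring_hom_def)

lemma klinear_id: "klinear A A id" by (simp add: klinear_def)

lemma klinear_comp: "klinear A A' F \<Longrightarrow> klinear A' A'' F' \<Longrightarrow> klinear A A'' (F' \<circ> F)"
  unfolding klinear_def by auto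

lemma klinear_closed: "klinear A A' F \<Longrightarrow> x \<in> carrier A \<Longrightarrow> F x \<in> carrier A'"
  unfolding klinear_def by auto

lemma ring_kfield: "ring (kfield :: ('k::field,'k) kalg)"
proof (rule ringI)
  show "abelian_group (kfield :: ('k::field,'k) kalg)"
    by (rule abelian_groupI) (auto simp: kfield_def algebra_simps intro: exI[of _ "- x" for x])
qed (auto intro!: monoidI simp: kfield_def algebra_simps)

lemma kalgebra_kfield: "kalgebra (kfield :: ('k::field,'k) kalg)"
  unfolding kalgebra_def using ring_kfield by (auto simp: kfield_def algebra_simps)

section \<open>Finitely supported functions\<close>

abbreviation finsupp :: "('x \<Rightarrow> 'k::zero) \<Rightarrow> bool" where "finsupp f \<equiv> finite (fsupp f)"

definition lin_ext :: "('x \<Rightarrow> 'k::field) \<Rightarrow> ('x \<Rightarrow> 'y \<Rightarrow> 'k) \<Rightarrow> ('y \<Rightarrow> 'k)" where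
  "lin_ext f \<phi> = (\<lambda>q. \<Sum>p\<in>fsupp f. f p * \<phi> p q)"

lemma lin_ext_superset:
  assumes "finite P" "fsupp f \<subseteq> P"
  shows "lin_ext f \<phi> q = (\<Sum>p\<in>P. f p * \<phi> p q)"
  unfolding lin_ext_def
  by (rule sum.mono_neutral_left) (use assms in \<open>auto simp: fsupp_def\<close>)

lemma fsupp_add: "fsupp (\<lambda>q. f q + (g q::'k::monoid_add)) \<subseteq> fsupp f \<union> fsupp g"
  by (auto simp: fsupp_def)
lemma fsupp_diff: "fsupp (\<lambda>q. f q - (g q::'k::ab_group_add)) \<subseteq> fsupp f \<union> fsupp g"
  by (auto simp: fsupp_def)
lemma fsupp_smul: "fsupp (\<lambda>q. c * (f q::'k::field)) \<subseteq> fsupp f"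
  by (auto simp: fsupp_def)
lemma fsupp_zero[simp]: "fsupp (\<lambda>_. 0) = {}"
  by (auto simp: fsupp_def)
lemma fsupp_tdelta[simp]: "fsupp (tdelta p :: _ \<Rightarrow> 'k::zero_neq_one) = {p}"
  by (auto simp: fsupp_def tdelta_def)

lemma finsupp_add[simp, intro]: "finsupp f \<Longrightarrow> finsupp g \<Longrightarrow> finsupp (\<lambda>q. f q + (g q::'k::monoid_add))"
  by (rule finite_subset[OF fsupp_add]) auto
lemma finsupp_diff[simp, intro]: "finsupp f \<Longrightarrow> finsupp g \<Longrightarrow> finsupp (\<lambda>q. f q - (g q::'k::ab_group_add))"
  by (rule finite_subset[OF fsupp_diff]) auto
lemma finsupp_smul[simp, intro]: "finsupp f \<Longrightarrow> finsupp (\<lambda>q. c * (f q::'k::field))"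
  by (rule finite_subset[OF fsupp_smul]) auto

lemma lin_ext_add:
  assumes "finsupp f" "finsupp g"
  shows "lin_ext (\<lambda>q. f q + g q) \<phi> = (\<lambda>q. lin_ext f \<phi> q + lin_ext g \<phi> q)"
proof
  fix q
  let ?P = "fsupp f \<union> fsupp g"
  have "lin_ext (\<lambda>q. f q + g q) \<phi> q = (\<Sum>p\<in>?P. (f p + g p) * \<phi> p q)"
    by (rule lin_ext_superset) (use assms fsupp_add[of f g] in auto)
  also have "\<dots> = (\<Sum>p\<in>?P. f p * \<phi> p q) + (\<Sum>p\<in>?P. g p * \<phi> p q)"
    by (simp add: distrib_right sum.distrib)
  also have "\<dots> = lin_ext f \<phi> q + lin_ext g \<phi> q"
    using assms lin_ext_superset[of ?P f \<phi> q] lin_ext_superset[of ?P g \<phi> q] by auto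
  finally show "lin_ext (\<lambda>q. f q + g q) \<phi> q = lin_ext f \<phi> q + lin_ext g \<phi> q" .
qed

lemma lin_ext_diff:
  assumes "finsupp f" "finsupp g"
  shows "lin_ext (\<lambda>q. f q - g q) \<phi> = (\<lambda>q. lin_ext f \<phi> q - lin_ext g \<phi> q)"
proof
  fix q
  let ?P = "fsupp f \<union> fsupp g"
  have "lin_ext (\<lambda>q. f q - g q) \<phi> q = (\<Sum>p\<in>?P. (f p - g p) * \<phi> p q)"
    by (rule lin_ext_superset) (use assms fsupp_diff[of f g] in auto)
  also have "\<dots> = (\<Sum>p\<in>?P. f p * \<phi> p q) - (\<Sum>p\<in>?P. g p * \<phi> p q)"
    by (simp add: left_diff_distrib sum_subtractf)
  also have "\<dots> = lin_ext f \<phi> q - lin_ext g \<phi> q"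
    using assms lin_ext_superset[of ?P f \<phi> q] lin_ext_superset[of ?P g \<phi> q] by auto
  finally show "lin_ext (\<lambda>q. f q - g q) \<phi> q = lin_ext f \<phi> q - lin_ext g \<phi> q" .
qed

lemma lin_ext_smul:
  assumes "finsupp f"
  shows "lin_ext (\<lambda>q. c * f q) \<phi> = (\<lambda>q. c * lin_ext f \<phi> q)"
proof
  fix q
  have "lin_ext (\<lambda>q. c * f q) \<phi> q = (\<Sum>p\<in>fsupp f. (c * f p) * \<phi> p q)"
    by (rule lin_ext_superset) (use assms fsupp_smul[of c f] in auto)
  also have "\<dots> = c * lin_ext f \<phi> q"
    by (simp add: lin_ext_def sum_distrib_left mult.assoc)
  finally show "lin_ext (\<lambda>q. c * f q) \<phi> q = c * lin_ext f \<phi> q" .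
qed

lemma lin_ext_zero[simp]: "lin_ext (\<lambda>_. 0) \<phi> = (\<lambda>_. 0)"
  by (simp add: lin_ext_def)

lemma lin_ext_tdelta_left[simp]: "lin_ext (tdelta p) \<phi> = \<phi> p"
  unfolding lin_ext_def fsupp_tdelta by (simp add: tdelta_def)

lemma lin_ext_phi_zero[simp]: "lin_ext f (\<lambda>_ _. 0) = (\<lambda>_. 0)"
  by (simp add: lin_ext_def)

lemma lin_ext_phi_add:
  "lin_ext f (\<lambda>p q. \<phi> p q + \<psi> p q) = (\<lambda>q. lin_ext f \<phi> q + lin_ext f \<psi> q)"
  by (simp add: lin_ext_def distrib_left sum.distrib)

lemma lin_ext_phi_diff:
  "lin_ext f (\<lambda>p q. \<phi> p q - \<psi> p q) = (\<lambda>q. lin_ext f \<phi> q - lin_ext f \<psi> q)"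
  by (simp add: lin_ext_def right_diff_distrib sum_subtractf)

lemma lin_ext_phi_smul:
  "lin_ext f (\<lambda>p q. c * \<phi> p q) = (\<lambda>q. c * lin_ext f \<phi> q)"
  by (simp add: lin_ext_def sum_distrib_left mult.left_commute)

lemma lin_ext_phi_cong:
  "(\<And>p. p \<in> fsupp f \<Longrightarrow> \<phi> p = \<psi> p) \<Longrightarrow> lin_ext f \<phi> = lin_ext f \<psi>"
  unfolding lin_ext_def by (intro ext sum.cong) auto

lemma fsupp_lin_ext:
  "fsupp (lin_ext f \<phi>) \<subseteq> (\<Union>p\<in>fsupp f. fsupp (\<phi> p))"
proof
  fix q assume "q \<in> fsupp (lin_ext f \<phi>)"
  then have "(\<Sum>p\<in>fsupp f. f p * \<phi> p q) \<noteq> 0" by (simp add: fsupp_def lin_ext_def)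
  then obtain p where "p \<in> fsupp f" "f p * \<phi> p q \<noteq> 0"
    by (rule sum.not_neutral_contains_not_neutral)
  then show "q \<in> (\<Union>p\<in>fsupp f. fsupp (\<phi> p))" by (auto simp: fsupp_def)
qed

lemma finsupp_lin_ext[intro]:
  "finsupp f \<Longrightarrow> (\<And>p. p \<in> fsupp f \<Longrightarrow> finsupp (\<phi> p)) \<Longrightarrow> finsupp (lin_ext f \<phi>)"
  by (rule finite_subset[OF fsupp_lin_ext]) auto

lemma lin_ext_lin_ext:
  assumes "finsupp f" "\<And>p. p \<in> fsupp f \<Longrightarrow> finsupp (\<phi> p)"
  shows "lin_ext (lin_ext f \<phi>) \<psi> = lin_ext f (\<lambda>p. lin_ext (\<phi> p) \<psi>)"
proof
  fix q
  let ?P = "\<Union>p\<in>fsupp f. fsupp (\<phi> p)"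
  have fin: "finite ?P" using assms by auto
  have "lin_ext (lin_ext f \<phi>) \<psi> q = (\<Sum>y\<in>?P. lin_ext f \<phi> y * \<psi> y q)"
    by (rule lin_ext_superset[OF fin fsupp_lin_ext])
  also have "\<dots> = (\<Sum>y\<in>?P. \<Sum>p\<in>fsupp f. f p * \<phi> p y * \<psi> y q)"
    by (simp add: lin_ext_def sum_distrib_right)
  also have "\<dots> = (\<Sum>p\<in>fsupp f. \<Sum>y\<in>?P. f p * (\<phi> p y * \<psi> y q))"
    by (subst sum.swap) (simp add: mult.assoc)
  also have "\<dots> = (\<Sum>p\<in>fsupp f. f p * lin_ext (\<phi> p) \<psi> q)"
  proof (rule sum.cong[OF refl])
    fix p assume p: "p \<in> fsupp f"
    have "lin_ext (\<phi> p) \<psi> q = (\<Sum>y\<in>?P. \<phi> p y * \<psi> y q)"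
      by (rule lin_ext_superset[OF fin]) (use p in auto)
    then show "(\<Sum>y\<in>?P. f p * (\<phi> p y * \<psi> y q)) = f p * lin_ext (\<phi> p) \<psi> q"
      by (simp add: sum_distrib_left)
  qed
  also have "\<dots> = lin_ext f (\<lambda>p. lin_ext (\<phi> p) \<psi>) q" by (simp add: lin_ext_def)
  finally show "lin_ext (lin_ext f \<phi>) \<psi> q = lin_ext f (\<lambda>p. lin_ext (\<phi> p) \<psi>) q" .
qed

lemma lin_ext_swap: "lin_ext f (\<lambda>p. lin_ext g (\<lambda>p'. \<chi> p p')) = lin_ext g (\<lambda>p'. lin_ext f (\<lambda>p. \<chi> p p'))"
  unfolding lin_ext_def
  by (auto simp: sum_distrib_left mult.left_commute intro!: ext sum.swap[THEN trans])

lemma lin_ext_tdelta_right: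
  assumes "finsupp f" shows "lin_ext f tdelta = f"
proof
  fix q
  show "lin_ext f tdelta q = f q"
  proof (cases "q \<in> fsupp f")
    case True
    then have "lin_ext f tdelta q = (\<Sum>p\<in>{q}. f p * tdelta p q)"
      unfolding lin_ext_def by (intro sum.mono_neutral_right) (use assms in \<open>auto simp: tdelta_def\<close>)
    then show ?thesis by (simp add: tdelta_def)
  next
    case False
    then show ?thesis by (auto simp: lin_ext_def tdelta_def fsupp_def intro!: sum.neutral)
  qed
qed

definition fun_subspace :: "('y \<Rightarrow> 'k::field) set \<Rightarrow> bool" where
  "fun_subspace Z \<longleftrightarrow> (\<lambda>_. 0) \<in> Z \<and> (\<forall>n m. n \<in> Z \<longrightarrow> m \<in> Z \<longrightarrow> (\<lambda>q. n q + m q) \<in> Z)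
     \<and> (\<forall>c n. n \<in> Z \<longrightarrow> (\<lambda>q. c * n q) \<in> Z)"

lemma fun_subspace_zero: "fun_subspace Z \<Longrightarrow> (\<lambda>_. 0) \<in> Z" by (simp add: fun_subspace_def)
lemma fun_subspace_add: "fun_subspace Z \<Longrightarrow> n \<in> Z \<Longrightarrow> m \<in> Z \<Longrightarrow> (\<lambda>q. n q + m q) \<in> Z" by (simp add: fun_subspace_def)
lemma fun_subspace_smul: "fun_subspace Z \<Longrightarrow> n \<in> Z \<Longrightarrow> (\<lambda>q. c * n q) \<in> Z" by (simp add: fun_subspace_def)
lemma fun_subspace_diff: "fun_subspace Z \<Longrightarrow> n \<in> Z \<Longrightarrow> m \<in> Z \<Longrightarrow> (\<lambda>q. n q - m q) \<in> Z"
proof -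
  assume Z: "fun_subspace Z" "n \<in> Z" "m \<in> Z"
  have "(\<lambda>q. (-1) * m q) \<in> Z" using Z fun_subspace_smul by blast
  then have "(\<lambda>q. n q + (-1) * m q) \<in> Z" using Z fun_subspace_add[of Z n] by blast
  then show ?thesis by simp
qed
lemma fun_subspace_sum:
  assumes "fun_subspace Z" "finite P" "\<And>p. p \<in> P \<Longrightarrow> \<phi> p \<in> Z"
  shows "(\<lambda>q. \<Sum>p\<in>P. f p * \<phi> p q) \<in> Z"
  using assms(2,3)
proof (induction P rule: finite_induct)
  case empty then show ?case using fun_subspace_zero[OF assms(1)] by simp
next
  case (insert x F)
  have "(\<lambda>q. f x * \<phi> x q + (\<Sum>p\<in>F. f p * \<phi> p q)) \<in> Z"
    using insert by (intro fun_subspace_add[OF assms(1)] fun_subspace_smul[OF assms(1)]) auto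
  then show ?case using insert by simp
qed

lemma lin_ext_in_fun_subspace:
  "fun_subspace Z \<Longrightarrow> finsupp f \<Longrightarrow> (\<And>p. p \<in> fsupp f \<Longrightarrow> \<phi> p \<in> Z) \<Longrightarrow> lin_ext f \<phi> \<in> Z"
  unfolding lin_ext_def by (rule fun_subspace_sum)

section \<open>Tensor products of algebras\<close>

lemma trel_finsupp: "n \<in> trel A B \<Longrightarrow> finsupp n"
  by (induction rule: trel.induct) auto

lemma trel_fun_subspace: "fun_subspace (trel A B)"
  by (auto simp: fun_subspace_def intro: trel.intros)

lemma fsupp_tdelta_diff3: "fsupp (\<lambda>q. tdelta x q - tdelta y q - (tdelta z q :: 'k::field)) \<subseteq> {x,y,z}"
  by (auto simp: fsupp_def tdelta_def)
lemma fsupp_tdelta_diff2: "fsupp (\<lambda>q. tdelta x q - c * (tdelta y q :: 'k::field)) \<subseteq> {x,y}"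
  by (auto simp: fsupp_def tdelta_def)

lemma trel_carrier:
  assumes "kalgebra A" "kalgebra B" "n \<in> trel A B"
  shows "fsupp n \<subseteq> carrier A \<times> carrier B"
  using assms(3)
proof (induction rule: trel.induct)
  case (addl a a' b)
  have "a \<oplus>\<^bsub>A\<^esub> a' \<in> carrier A" using addl by (intro ring.ring_simprules(1)[OF kalg_ring[OF assms(1)]])
  then show ?case using addl fsupp_tdelta_diff3[of "(a \<oplus>\<^bsub>A\<^esub> a', b)" "(a, b)" "(a', b)"] by auto
next
  case (addr a b b')
  have "b \<oplus>\<^bsub>B\<^esub> b' \<in> carrier B" using addr by (intro ring.ring_simprules(1)[OF kalg_ring[OF assms(2)]])
  then show ?case using addr fsupp_tdelta_diff3[of "(a, b \<oplus>\<^bsub>B\<^esub> b')" "(a, b)" "(a, b')"] by auto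
next
  case (smull a b c)
  then show ?case using fsupp_tdelta_diff2[of "(c \<odot>\<^bsub>A\<^esub> a, b)" c "(a, b)"] kalg_smul_closed[OF assms(1), of a c] by auto
next
  case (smulr a b c)
  then show ?case using fsupp_tdelta_diff2[of "(a, c \<odot>\<^bsub>B\<^esub> b)" c "(a, b)"] kalg_smul_closed[OF assms(2), of b c] by auto
next
  case (add n m)
  then show ?case using fsupp_add[of n m] by auto
next
  case (smul n c)
  then show ?case using fsupp_smul[of c n] by auto
qed simp

lemma trel_tfree: "kalgebra A \<Longrightarrow> kalgebra B \<Longrightarrow> n \<in> trel A B \<Longrightarrow> n \<in> tfree A B"
  using trel_carrier trel_finsupp unfolding tfree_def by blast

lemma tfree_add: "f \<in> tfree A B \<Longrightarrow> g \<in> tfree A B \<Longrightarrow> (\<lambda>q. f q + g q) \<in> tfree A B"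
  unfolding tfree_def using fsupp_add[of f g] by auto
lemma tfree_smul: "f \<in> tfree A B \<Longrightarrow> (\<lambda>q. c * f q) \<in> tfree A B"
  unfolding tfree_def using fsupp_smul[of c f] by auto
lemma tfree_zero: "(\<lambda>_. 0) \<in> tfree A B"
  unfolding tfree_def by simp
lemma tfree_tdelta: "a \<in> carrier A \<Longrightarrow> b \<in> carrier B \<Longrightarrow> tdelta (a, b) \<in> tfree A B"
  unfolding tfree_def by simp
lemma tfree_finsupp: "f \<in> tfree A B \<Longrightarrow> finsupp f" unfolding tfree_def by simp
lemma tfree_supp: "f \<in> tfree A B \<Longrightarrow> p \<in> fsupp f \<Longrightarrow> fst p \<in> carrier A \<and> snd p \<in> carrier B"
  unfolding tfree_def by auto

lemma tcls_eq: "tcls A B f = tcls A B g \<longleftrightarrow> (\<lambda>q. g q - f q) \<in> trel A B"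
proof
  assume "tcls A B f = tcls A B g"
  moreover have "g \<in> tcls A B g" unfolding tcls_def using trel.zero by simp
  ultimately show "(\<lambda>q. g q - f q) \<in> trel A B" unfolding tcls_def by blast
next
  assume h: "(\<lambda>q. g q - f q) \<in> trel A B"
  show "tcls A B f = tcls A B g"
  proof (rule Set.set_eqI, rule iffI)
    fix x assume "x \<in> tcls A B f"
    then have "(\<lambda>q. x q - f q) \<in> trel A B" by (simp add: tcls_def)
    from fun_subspace_diff[OF trel_fun_subspace this h] show "x \<in> tcls A B g" by (simp add: tcls_def)
  next
    fix x assume "x \<in> tcls A B g"
    then have "(\<lambda>q. x q - g q) \<in> trel A B" by (simp add: tcls_def)
    from fun_subspace_add[OF trel_fun_subspace this h] show "x \<in> tcls A B f" by (simp add: tcls_def)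
  qed
qed

lemma tcls_eqI: "(\<lambda>q. f q - g q) \<in> trel A B \<Longrightarrow> tcls A B f = tcls A B g"
  using tcls_eq[of A B g f] by simp

lemma tcls_self: "f \<in> tcls A B f"
  unfolding tcls_def using trel.zero by simp

lemma trep_tcls: "(\<lambda>q. trep (tcls A B f) q - f q) \<in> trel A B"
proof -
  have "trep (tcls A B f) \<in> tcls A B f" unfolding trep_def
    by (rule someI[of "\<lambda>g. g \<in> tcls A B f" f, OF tcls_self])
  then show ?thesis by (simp add: tcls_def)
qed

lemma trep_finsupp: "finsupp f \<Longrightarrow> finsupp (trep (tcls A B f))"
proof -
  assume "finsupp f"
  moreover have "finsupp (\<lambda>q. trep (tcls A B f) q - f q)" using trel_finsupp trep_tcls by blast
  ultimately have "finsupp (\<lambda>q. f q + (trep (tcls A B f) q - f q))" by (rule finsupp_add)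
  moreover have "(\<lambda>q. f q + (trep (tcls A B f) q - f q)) = trep (tcls A B f)" by auto
  ultimately show ?thesis by simp
qed

lemma trep_tfree: "kalgebra A \<Longrightarrow> kalgebra B \<Longrightarrow> f \<in> tfree A B \<Longrightarrow> trep (tcls A B f) \<in> tfree A B"
proof -
  assume k: "kalgebra A" "kalgebra B" and f: "f \<in> tfree A B"
  have "(\<lambda>q. f q + (trep (tcls A B f) q - f q)) \<in> tfree A B"
    by (rule tfree_add[OF f trel_tfree[OF k trep_tcls]])
  moreover have "(\<lambda>q. f q + (trep (tcls A B f) q - f q)) = trep (tcls A B f)" by auto
  ultimately show ?thesis by simp
qed

lemma carrier_tensor: "carrier (tensor_alg A B) = tcls A B ` tfree A B"
  by (simp add: tensor_alg_def)

lemma tensor_carrierE: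
  assumes "X \<in> carrier (tensor_alg A B)"
  obtains f where "f \<in> tfree A B" "X = tcls A B f"
  using assms by (auto simp: carrier_tensor)

lemma trep_carrier_tfree:
  assumes k: "kalgebra A" "kalgebra B" and x: "x \<in> carrier (tensor_alg A B)"
  shows "trep x \<in> tfree A B"
  using x trep_tfree[OF k] by (auto elim: tensor_carrierE)

lemma tensor_add: "X \<oplus>\<^bsub>tensor_alg A B\<^esub> Y = tcls A B (\<lambda>q. trep X q + trep Y q)"
  by (simp add: tensor_alg_def)
lemma tensor_add_tcls: "tcls A B f \<oplus>\<^bsub>tensor_alg A B\<^esub> tcls A B g = tcls A B (\<lambda>q. f q + g q)"
proof -
  have "(\<lambda>q. (f q + g q) - (trep (tcls A B f) q + trep (tcls A B g) q))
      = (\<lambda>q. (-1) * (trep (tcls A B f) q - f q) + (-1) * (trep (tcls A B g) q - g q))"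
    by (simp add: algebra_simps)
  also have "\<dots> \<in> trel A B"
    by (intro trel.add trel.smul trep_tcls)
  finally show ?thesis unfolding tensor_add tcls_eq .
qed
lemma tensor_smult_tcls: "c \<odot>\<^bsub>tensor_alg A B\<^esub> tcls A B f = tcls A B (\<lambda>q. c * f q)"
proof -
  have "(\<lambda>q. c * f q - c * trep (tcls A B f) q) = (\<lambda>q. (- c) * (trep (tcls A B f) q - f q))"
    by (simp add: algebra_simps)
  also have "\<dots> \<in> trel A B" by (intro trel.smul trep_tcls)
  finally show ?thesis by (simp add: tensor_alg_def tcls_eq)
qed
lemma tensor_zero: "\<zero>\<^bsub>tensor_alg A B\<^esub> = tcls A B (\<lambda>_. 0)"
  by (simp add: tensor_alg_def)
lemma tensor_one: "\<one>\<^bsub>tensor_alg A B\<^esub> = tcls A B (tdelta (\<one>\<^bsub>A\<^esub>, \<one>\<^bsub>B\<^esub>))"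
  by (simp add: tensor_alg_def)
lemma tensor_mult: "X \<otimes>\<^bsub>tensor_alg A B\<^esub> Y = tcls A B (tfmul A B (trep X) (trep Y))"
  by (simp add: tensor_alg_def)

definition respects_trel :: "('k::field,'a) kalg \<Rightarrow> ('k,'b) kalg \<Rightarrow> ('y \<Rightarrow> 'k) set \<Rightarrow> ('a \<times> 'b \<Rightarrow> 'y \<Rightarrow> 'k) \<Rightarrow> bool" where
  "respects_trel A B Z \<phi> \<longleftrightarrow>
    (\<forall>a\<in>carrier A. \<forall>a'\<in>carrier A. \<forall>b\<in>carrier B.
        (\<lambda>q. \<phi> (a \<oplus>\<^bsub>A\<^esub> a', b) q - \<phi> (a, b) q - \<phi> (a', b) q) \<in> Z) \<and>
    (\<forall>a\<in>carrier A. \<forall>b\<in>carrier B. \<forall>b'\<in>carrier B.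
        (\<lambda>q. \<phi> (a, b \<oplus>\<^bsub>B\<^esub> b') q - \<phi> (a, b) q - \<phi> (a, b') q) \<in> Z) \<and>
    (\<forall>c. \<forall>a\<in>carrier A. \<forall>b\<in>carrier B. (\<lambda>q. \<phi> (c \<odot>\<^bsub>A\<^esub> a, b) q - c * \<phi> (a, b) q) \<in> Z) \<and>
    (\<forall>c. \<forall>a\<in>carrier A. \<forall>b\<in>carrier B. (\<lambda>q. \<phi> (a, c \<odot>\<^bsub>B\<^esub> b) q - c * \<phi> (a, b) q) \<in> Z)"

lemma lin_ext_trel:
  assumes Z: "fun_subspace Z" and g: "respects_trel A B Z \<phi>" and n: "n \<in> trel A B"
  shows "lin_ext n \<phi> \<in> Z"
  using n
proof (induction rule: trel.induct)
  case zero
  then show ?case using fun_subspace_zero[OF Z] by simp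
next
  case (addl a a' b)
  then show ?case using g by (simp add: lin_ext_diff respects_trel_def)
next
  case (addr a b b')
  then show ?case using g by (simp add: lin_ext_diff respects_trel_def)
next
  case (smull a b c)
  then show ?case using g by (simp add: lin_ext_diff lin_ext_smul respects_trel_def)
next
  case (smulr a b c)
  then show ?case using g by (simp add: lin_ext_diff lin_ext_smul respects_trel_def)
next
  case (add n m)
  have "finsupp n" "finsupp m" using add.hyps trel_finsupp by auto
  then show ?case using fun_subspace_add[OF Z add.IH] by (simp add: lin_ext_add)
next
  case (smul n c)
  have "finsupp n" using smul.hyps trel_finsupp by auto
  then show ?case using fun_subspace_smul[OF Z smul.IH] by (simp add: lin_ext_smul)
qed

lemma lin_ext_trel_cong:
  assumes Z: "fun_subspace Z" and g: "respects_trel A B Z \<phi>" and f: "finsupp f" "finsupp f'"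
    and d: "(\<lambda>q. f' q - f q) \<in> trel A B"
  shows "(\<lambda>q. lin_ext f' \<phi> q - lin_ext f \<phi> q) \<in> Z"
  using lin_ext_trel[OF Z g d] by (simp add: lin_ext_diff f)

definition pair_mult :: "('k,'a) kalg \<Rightarrow> ('k,'b) kalg \<Rightarrow> 'a \<times> 'b \<Rightarrow> 'a \<times> 'b \<Rightarrow> 'a \<times> 'b" where
  "pair_mult A B p p' = (fst p \<otimes>\<^bsub>A\<^esub> fst p', snd p \<otimes>\<^bsub>B\<^esub> snd p')"

lemma tfmul_lin_ext: "tfmul A B f g = lin_ext f (\<lambda>p. lin_ext g (\<lambda>p'. tdelta (pair_mult A B p p')))"
  unfolding tfmul_def lin_ext_def tdelta_def pair_mult_def
  by (auto simp: sum_distrib_left intro!: ext sum.cong)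

lemma finsupp_tfmul[simp]: "finsupp f \<Longrightarrow> finsupp g \<Longrightarrow> finsupp (tfmul A B f g)"
  unfolding tfmul_lin_ext by (intro finsupp_lin_ext) auto

lemma tfmul_tfree:
  assumes f: "f \<in> tfree A B" and g: "g \<in> tfree A B" and k: "kalgebra A" "kalgebra B"
  shows "tfmul A B f g \<in> tfree A B"
proof -
  interpret A: ring A using k kalg_ring by blast
  interpret B: ring B using k kalg_ring by blast
  have "fsupp (tfmul A B f g) \<subseteq> (\<Union>p\<in>fsupp f. fsupp (lin_ext g (\<lambda>p'. tdelta (pair_mult A B p p'))))"
    unfolding tfmul_lin_ext by (rule fsupp_lin_ext)
  also have "\<dots> \<subseteq> (\<Union>p\<in>fsupp f. \<Union>p'\<in>fsupp g. {pair_mult A B p p'})"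
    using fsupp_lin_ext[of g] by fastforce
  also have "\<dots> \<subseteq> carrier A \<times> carrier B"
    using tfree_supp[OF f] tfree_supp[OF g] by (auto simp: pair_mult_def)
  finally show ?thesis
    using f g tfree_finsupp unfolding tfree_def by auto
qed

lemma tfmul_add_l: "finsupp f \<Longrightarrow> finsupp g \<Longrightarrow> tfmul A B (\<lambda>q. f q + g q) h = (\<lambda>q. tfmul A B f h q + tfmul A B g h q)"
  unfolding tfmul_lin_ext by (rule lin_ext_add)
lemma tfmul_diff_l: "finsupp f \<Longrightarrow> finsupp g \<Longrightarrow> tfmul A B (\<lambda>q. f q - g q) h = (\<lambda>q. tfmul A B f h q - tfmul A B g h q)"
  unfolding tfmul_lin_ext by (rule lin_ext_diff)
lemma tfmul_smul_l: "finsupp f \<Longrightarrow> tfmul A B (\<lambda>q. c * f q) h = (\<lambda>q. c * tfmul A B f h q)"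
  unfolding tfmul_lin_ext by (rule lin_ext_smul)
lemma tfmul_add_r: "finsupp f \<Longrightarrow> finsupp g \<Longrightarrow> tfmul A B h (\<lambda>q. f q + g q) = (\<lambda>q. tfmul A B h f q + tfmul A B h g q)"
  unfolding tfmul_lin_ext by (simp add: lin_ext_add lin_ext_phi_add)
lemma tfmul_diff_r: "finsupp f \<Longrightarrow> finsupp g \<Longrightarrow> tfmul A B h (\<lambda>q. f q - g q) = (\<lambda>q. tfmul A B h f q - tfmul A B h g q)"
  unfolding tfmul_lin_ext by (simp add: lin_ext_diff lin_ext_phi_diff)
lemma tfmul_smul_r: "finsupp f \<Longrightarrow> tfmul A B h (\<lambda>q. c * f q) = (\<lambda>q. c * tfmul A B h f q)"
  unfolding tfmul_lin_ext by (simp add: lin_ext_smul lin_ext_phi_smul)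
lemma tfmul_tdelta: "tfmul A B (tdelta p) (tdelta p') = tdelta (pair_mult A B p p')"
  unfolding tfmul_lin_ext by simp

lemma tfmul_trel_l:
  assumes k: "kalgebra A" "kalgebra B" and n: "n \<in> trel A B" and h: "h \<in> tfree A B"
  shows "tfmul A B n h \<in> trel A B"
proof -
  interpret A: ring A using k kalg_ring by blast
  interpret B: ring B using k kalg_ring by blast
  have "lin_ext n (\<lambda>p. tdelta (pair_mult A B p p')) \<in> trel A B" if p': "p' \<in> fsupp h" for p'
  proof -
    obtain x y where xy: "p' = (x, y)" "x \<in> carrier A" "y \<in> carrier B"
      using tfree_supp[OF h p'] by (cases p') auto
    have "respects_trel A B (trel A B) (\<lambda>p. tdelta (pair_mult A B p p'))"
      unfolding respects_trel_def using xy
      by (auto simp: pair_mult_def A.l_distr B.l_distr kalg_smul_mult_l[OF k(1), symmetric]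
          kalg_smul_mult_l[OF k(2), symmetric] intro: trel.intros)
    then show ?thesis by (rule lin_ext_trel[OF trel_fun_subspace _ n])
  qed
  then show ?thesis
    unfolding tfmul_lin_ext lin_ext_swap[of n h "\<lambda>p p'. tdelta (pair_mult A B p p')"]
    by (rule lin_ext_in_fun_subspace[OF trel_fun_subspace tfree_finsupp[OF h]])
qed

lemma tfmul_trel_r:
  assumes k: "kalgebra A" "kalgebra B" and n: "n \<in> trel A B" and h: "h \<in> tfree A B"
  shows "tfmul A B h n \<in> trel A B"
proof -
  interpret A: ring A using k kalg_ring by blast
  interpret B: ring B using k kalg_ring by blast
  have hs: "\<And>p. p \<in> fsupp h \<Longrightarrow> fst p \<in> carrier A \<and> snd p \<in> carrier B" using tfree_supp[OF h] by blast
  have fh: "finsupp h" using h tfree_finsupp by blast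
  have *: "lin_ext n (\<lambda>p'. tdelta (pair_mult A B p p')) \<in> trel A B" if p: "p \<in> fsupp h" for p
  proof -
    obtain x y where xy: "p = (x, y)" "x \<in> carrier A" "y \<in> carrier B" using hs[OF p] by (cases p) auto
    have "respects_trel A B (trel A B) (\<lambda>p'. tdelta (pair_mult A B p p'))"
      unfolding respects_trel_def using xy
      by (auto simp: pair_mult_def A.r_distr B.r_distr kalg_smul_mult_r[OF k(1), symmetric]
          kalg_smul_mult_r[OF k(2), symmetric] intro: trel.intros)
    then show ?thesis by (rule lin_ext_trel[OF trel_fun_subspace _ n])
  qed
  show ?thesis unfolding tfmul_lin_ext by (rule lin_ext_in_fun_subspace[OF trel_fun_subspace fh]) (rule *)
qed

lemma tensor_mult_tcls:
  assumes k: "kalgebra A" "kalgebra B" and f: "f \<in> tfree A B" and g: "g \<in> tfree A B"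
  shows "tcls A B f \<otimes>\<^bsub>tensor_alg A B\<^esub> tcls A B g = tcls A B (tfmul A B f g)"
proof -
  let ?f = "trep (tcls A B f)" and ?g = "trep (tcls A B g)"
  have f': "?f \<in> tfree A B" and g': "?g \<in> tfree A B" using trep_tfree k f g by blast+
  have ff: "finsupp f" "finsupp g" "finsupp ?f" "finsupp ?g" using f g f' g' tfree_finsupp by blast+
  have "(\<lambda>q. tfmul A B ?f ?g q - tfmul A B f g q)
      = (\<lambda>q. tfmul A B (\<lambda>q. ?f q - f q) ?g q + tfmul A B f (\<lambda>q. ?g q - g q) q)"
    using ff by (simp add: tfmul_diff_l tfmul_diff_r)
  also have "\<dots> \<in> trel A B"
    by (intro trel.add tfmul_trel_l tfmul_trel_r k trep_tcls g' f)
  finally show ?thesis by (simp add: tensor_mult tcls_eqI)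
qed

lemma tfmul_assoc:
  assumes k: "kalgebra A" "kalgebra B" and f: "f \<in> tfree A B" and g: "g \<in> tfree A B" and h: "h \<in> tfree A B"
  shows "tfmul A B (tfmul A B f g) h = tfmul A B f (tfmul A B g h)"
proof -
  interpret A: ring A using k kalg_ring by blast
  interpret B: ring B using k kalg_ring by blast
  have ff: "finsupp f" "finsupp g" "finsupp h" using f g h tfree_finsupp by blast+
  have L: "tfmul A B (tfmul A B f g) h
      = lin_ext f (\<lambda>p. lin_ext g (\<lambda>p'. lin_ext h (\<lambda>p''. tdelta (pair_mult A B (pair_mult A B p p') p''))))"
    unfolding tfmul_lin_ext using ff by (simp add: lin_ext_lin_ext finsupp_lin_ext)
  have R: "tfmul A B f (tfmul A B g h)
      = lin_ext f (\<lambda>p. lin_ext g (\<lambda>p'. lin_ext h (\<lambda>p''. tdelta (pair_mult A B p (pair_mult A B p' p'')))))"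
    unfolding tfmul_lin_ext using ff by (simp add: lin_ext_lin_ext finsupp_lin_ext)
  show ?thesis unfolding L R
    using tfree_supp[OF f] tfree_supp[OF g] tfree_supp[OF h]
    by (intro lin_ext_phi_cong) (auto simp: pair_mult_def A.m_assoc B.m_assoc)
qed

lemma tfmul_one_l:
  assumes k: "kalgebra A" "kalgebra B" and f: "f \<in> tfree A B"
  shows "tfmul A B (tdelta (\<one>\<^bsub>A\<^esub>, \<one>\<^bsub>B\<^esub>)) f = f"
proof -
  interpret A: ring A using k kalg_ring by blast
  interpret B: ring B using k kalg_ring by blast
  have "tfmul A B (tdelta (\<one>\<^bsub>A\<^esub>, \<one>\<^bsub>B\<^esub>)) f = lin_ext f tdelta"
    unfolding tfmul_lin_ext using tfree_supp[OF f]
    by (auto simp: pair_mult_def intro!: lin_ext_phi_cong)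
  then show ?thesis using lin_ext_tdelta_right f tfree_finsupp by metis
qed

lemma tfmul_one_r:
  assumes k: "kalgebra A" "kalgebra B" and f: "f \<in> tfree A B"
  shows "tfmul A B f (tdelta (\<one>\<^bsub>A\<^esub>, \<one>\<^bsub>B\<^esub>)) = f"
proof -
  interpret A: ring A using k kalg_ring by blast
  interpret B: ring B using k kalg_ring by blast
  have "tfmul A B f (tdelta (\<one>\<^bsub>A\<^esub>, \<one>\<^bsub>B\<^esub>)) = lin_ext f tdelta"
    unfolding tfmul_lin_ext using tfree_supp[OF f]
    by (auto simp: pair_mult_def intro!: lin_ext_phi_cong)
  then show ?thesis using lin_ext_tdelta_right f tfree_finsupp by metis
qed

lemma abelian_group_tensor: "abelian_group (tensor_alg A B)"
proof (rule abelian_groupI)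
  note defs = carrier_tensor tensor_add_tcls tensor_zero
  fix x y assume "x \<in> carrier (tensor_alg A B)" "y \<in> carrier (tensor_alg A B)"
  then obtain f g where "f \<in> tfree A B" "g \<in> tfree A B" "x = tcls A B f" "y = tcls A B g"
    by (auto elim!: tensor_carrierE)
  then show "x \<oplus>\<^bsub>tensor_alg A B\<^esub> y \<in> carrier (tensor_alg A B)"
    "x \<oplus>\<^bsub>tensor_alg A B\<^esub> y = y \<oplus>\<^bsub>tensor_alg A B\<^esub> x"
    by (auto simp: defs tfree_add add.commute)
next
  show "\<zero>\<^bsub>tensor_alg A B\<^esub> \<in> carrier (tensor_alg A B)"
    by (simp add: carrier_tensor tensor_zero tfree_zero)
next
  fix x y z assume "x \<in> carrier (tensor_alg A B)" "y \<in> carrier (tensor_alg A B)" "z \<in> carrier (tensor_alg A B)"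
  then obtain f g h where "x = tcls A B f" "y = tcls A B g" "z = tcls A B h"
    by (auto elim!: tensor_carrierE)
  then show "x \<oplus>\<^bsub>tensor_alg A B\<^esub> y \<oplus>\<^bsub>tensor_alg A B\<^esub> z = x \<oplus>\<^bsub>tensor_alg A B\<^esub> (y \<oplus>\<^bsub>tensor_alg A B\<^esub> z)"
    by (simp add: tensor_add_tcls add.assoc)
next
  fix x assume "x \<in> carrier (tensor_alg A B)"
  then obtain f where f: "f \<in> tfree A B" "x = tcls A B f" by (auto elim!: tensor_carrierE)
  then show "\<zero>\<^bsub>tensor_alg A B\<^esub> \<oplus>\<^bsub>tensor_alg A B\<^esub> x = x" by (simp add: tensor_add_tcls tensor_zero)
  have "tcls A B (\<lambda>q. (-1) * f q) \<in> carrier (tensor_alg A B)"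
    using f tfree_smul[of f A B "-1"] by (simp add: carrier_tensor)
  moreover have "tcls A B (\<lambda>q. (-1) * f q) \<oplus>\<^bsub>tensor_alg A B\<^esub> x = \<zero>\<^bsub>tensor_alg A B\<^esub>"
    using f by (simp add: tensor_add_tcls tensor_zero)
  ultimately show "\<exists>y\<in>carrier (tensor_alg A B). y \<oplus>\<^bsub>tensor_alg A B\<^esub> x = \<zero>\<^bsub>tensor_alg A B\<^esub>" by blast
qed

lemma monoid_tensor:
  assumes k: "kalgebra A" "kalgebra B"
  shows "monoid (tensor_alg A B)"
proof (rule monoidI)
  note defs = carrier_tensor tensor_one tensor_mult_tcls[OF k]
  have one: "tdelta (\<one>\<^bsub>A\<^esub>, \<one>\<^bsub>B\<^esub>) \<in> tfree A B"
    using k by (simp add: tfree_tdelta kalg_ring ring.ring_simprules(6))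
  fix x y assume "x \<in> carrier (tensor_alg A B)" "y \<in> carrier (tensor_alg A B)"
  then obtain f g where "f \<in> tfree A B" "g \<in> tfree A B" "x = tcls A B f" "y = tcls A B g"
    by (auto elim!: tensor_carrierE)
  then show "x \<otimes>\<^bsub>tensor_alg A B\<^esub> y \<in> carrier (tensor_alg A B)"
    by (auto simp: defs tfmul_tfree[OF _ _ k])
next
  show "\<one>\<^bsub>tensor_alg A B\<^esub> \<in> carrier (tensor_alg A B)"
    using k by (simp add: carrier_tensor tensor_one tfree_tdelta kalg_ring ring.ring_simprules(6))
next
  fix x y z assume "x \<in> carrier (tensor_alg A B)" "y \<in> carrier (tensor_alg A B)" "z \<in> carrier (tensor_alg A B)"
  then obtain f g h where "f \<in> tfree A B" "g \<in> tfree A B" "h \<in> tfree A B"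
     "x = tcls A B f" "y = tcls A B g" "z = tcls A B h"
    by (auto elim!: tensor_carrierE)
  then show "x \<otimes>\<^bsub>tensor_alg A B\<^esub> y \<otimes>\<^bsub>tensor_alg A B\<^esub> z = x \<otimes>\<^bsub>tensor_alg A B\<^esub> (y \<otimes>\<^bsub>tensor_alg A B\<^esub> z)"
    by (simp add: tensor_mult_tcls[OF k] tfmul_tfree[OF _ _ k] tfmul_assoc[OF k])
next
  have one: "tdelta (\<one>\<^bsub>A\<^esub>, \<one>\<^bsub>B\<^esub>) \<in> tfree A B"
    using k by (simp add: tfree_tdelta kalg_ring ring.ring_simprules(6))
  fix x assume "x \<in> carrier (tensor_alg A B)"
  then obtain f where "f \<in> tfree A B" "x = tcls A B f" by (auto elim!: tensor_carrierE)
  then show "\<one>\<^bsub>tensor_alg A B\<^esub> \<otimes>\<^bsub>tensor_alg A B\<^esub> x = x"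
    "x \<otimes>\<^bsub>tensor_alg A B\<^esub> \<one>\<^bsub>tensor_alg A B\<^esub> = x"
    using one by (simp_all add: tensor_one tensor_mult_tcls[OF k] tfmul_one_l[OF k] tfmul_one_r[OF k])
qed

lemma ring_tensor:
  assumes k: "kalgebra A" "kalgebra B"
  shows "ring (tensor_alg A B)"
proof (rule ringI[OF abelian_group_tensor monoid_tensor[OF k]])
  fix x y z assume "x \<in> carrier (tensor_alg A B)" "y \<in> carrier (tensor_alg A B)" "z \<in> carrier (tensor_alg A B)"
  then obtain f g h where fgh: "f \<in> tfree A B" "g \<in> tfree A B" "h \<in> tfree A B"
     "x = tcls A B f" "y = tcls A B g" "z = tcls A B h"
    by (auto elim!: tensor_carrierE)
  then have "finsupp f" "finsupp g" "finsupp h" using tfree_finsupp by blast+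
  with fgh show "(x \<oplus>\<^bsub>tensor_alg A B\<^esub> y) \<otimes>\<^bsub>tensor_alg A B\<^esub> z
      = x \<otimes>\<^bsub>tensor_alg A B\<^esub> z \<oplus>\<^bsub>tensor_alg A B\<^esub> y \<otimes>\<^bsub>tensor_alg A B\<^esub> z"
    "z \<otimes>\<^bsub>tensor_alg A B\<^esub> (x \<oplus>\<^bsub>tensor_alg A B\<^esub> y)
      = z \<otimes>\<^bsub>tensor_alg A B\<^esub> x \<oplus>\<^bsub>tensor_alg A B\<^esub> z \<otimes>\<^bsub>tensor_alg A B\<^esub> y"
    by (simp_all add: tensor_add_tcls tensor_mult_tcls[OF k] tfree_add tfmul_add_l tfmul_add_r)
qed

lemma kalgebra_tensor:
  assumes k: "kalgebra A" "kalgebra B"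
  shows "kalgebra (tensor_alg A B)"
proof -
  note defs = carrier_tensor tensor_add_tcls tensor_smult_tcls tensor_mult_tcls[OF k]
  show ?thesis
    unfolding kalgebra_def
  proof (intro conjI allI impI)
    show "ring (tensor_alg A B)" by (rule ring_tensor[OF k])
  next
    fix c x assume "x \<in> carrier (tensor_alg A B)"
    then obtain f where "f \<in> tfree A B" "x = tcls A B f" by (auto elim!: tensor_carrierE)
    then show "c \<odot>\<^bsub>tensor_alg A B\<^esub> x \<in> carrier (tensor_alg A B)" by (simp add: defs tfree_smul)
  next
    fix c x y assume "x \<in> carrier (tensor_alg A B)" "y \<in> carrier (tensor_alg A B)"
    then obtain f g where fg: "f \<in> tfree A B" "g \<in> tfree A B" "x = tcls A B f" "y = tcls A B g"
      by (auto elim!: tensor_carrierE)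
    then have fin: "finsupp f" "finsupp g" using tfree_finsupp by blast+
    show "c \<odot>\<^bsub>tensor_alg A B\<^esub> (x \<oplus>\<^bsub>tensor_alg A B\<^esub> y) = c \<odot>\<^bsub>tensor_alg A B\<^esub> x \<oplus>\<^bsub>tensor_alg A B\<^esub> c \<odot>\<^bsub>tensor_alg A B\<^esub> y"
      using fg by (simp add: defs algebra_simps)
    show "c \<odot>\<^bsub>tensor_alg A B\<^esub> (x \<otimes>\<^bsub>tensor_alg A B\<^esub> y) = (c \<odot>\<^bsub>tensor_alg A B\<^esub> x) \<otimes>\<^bsub>tensor_alg A B\<^esub> y"
      using fg fin by (simp add: defs tfmul_tfree[OF _ _ k] tfree_smul tfmul_smul_l)
    show "c \<odot>\<^bsub>tensor_alg A B\<^esub> (x \<otimes>\<^bsub>tensor_alg A B\<^esub> y) = x \<otimes>\<^bsub>tensor_alg A B\<^esub> (c \<odot>\<^bsub>tensor_alg A B\<^esub> y)"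
      using fg fin by (simp add: defs tfmul_tfree[OF _ _ k] tfree_smul tfmul_smul_r)
  next
    fix c d x assume "x \<in> carrier (tensor_alg A B)"
    then obtain f where "f \<in> tfree A B" "x = tcls A B f" by (auto elim!: tensor_carrierE)
    then show "(c + d) \<odot>\<^bsub>tensor_alg A B\<^esub> x = c \<odot>\<^bsub>tensor_alg A B\<^esub> x \<oplus>\<^bsub>tensor_alg A B\<^esub> d \<odot>\<^bsub>tensor_alg A B\<^esub> x"
      "(c * d) \<odot>\<^bsub>tensor_alg A B\<^esub> x = c \<odot>\<^bsub>tensor_alg A B\<^esub> (d \<odot>\<^bsub>tensor_alg A B\<^esub> x)"
      by (simp_all add: defs algebra_simps)
  next
    fix x assume "x \<in> carrier (tensor_alg A B)"
    then obtain f where "f \<in> tfree A B" "x = tcls A B f" by (auto elim!: tensor_carrierE)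
    then show "1 \<odot>\<^bsub>tensor_alg A B\<^esub> x = x" by (simp add: defs)
  qed
qed

definition free_map :: "('a \<Rightarrow> 'a2) \<Rightarrow> ('b \<Rightarrow> 'b2) \<Rightarrow> ('a \<times> 'b \<Rightarrow> 'k::field) \<Rightarrow> ('a2 \<times> 'b2 \<Rightarrow> 'k)" where
  "free_map F G f = lin_ext f (\<lambda>p. tdelta (F (fst p), G (snd p)))"

lemma tmap_free_map: "tmap A' B' F G X = tcls A' B' (free_map F G (trep X))"
  unfolding tmap_def free_map_def lin_ext_def tdelta_def
  by (auto intro!: arg_cong[where f="tcls A' B'"] ext sum.cong)

lemma finsupp_free_map[simp]: "finsupp f \<Longrightarrow> finsupp (free_map F G f)"
  unfolding free_map_def by (intro finsupp_lin_ext) auto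

lemma respects_trel_free_map:
  assumes "klinear A A' F" "klinear B B' G"
  shows "respects_trel A B (trel A' B') (\<lambda>p. tdelta (F (fst p), G (snd p)))"
  using assms unfolding respects_trel_def klinear_def by (auto intro: trel.intros)

lemma free_map_tfree:
  assumes F: "klinear A A' F" and G: "klinear B B' G" and f: "f \<in> tfree A B"
  shows "free_map F G f \<in> tfree A' B'"
proof -
  have "fsupp (free_map F G f) \<subseteq> (\<Union>p\<in>fsupp f. {(F (fst p), G (snd p))})"
    unfolding free_map_def using fsupp_lin_ext[of f "\<lambda>p. tdelta (F (fst p), G (snd p))"] by simp
  also have "\<dots> \<subseteq> carrier A' \<times> carrier B'"
    using tfree_supp[OF f] klinear_closed[OF F] klinear_closed[OF G] by auto
  finally show ?thesis using f tfree_finsupp unfolding tfree_def by auto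
qed

lemma tmap_tcls:
  assumes F: "klinear A A' F" and G: "klinear B B' G" and f: "finsupp f"
  shows "tmap A' B' F G (tcls A B f) = tcls A' B' (free_map F G f)"
  unfolding tmap_free_map free_map_def
  by (rule tcls_eqI, rule lin_ext_trel_cong[OF trel_fun_subspace respects_trel_free_map[OF F G] f trep_finsupp[OF f] trep_tcls])

lemma tmap_closed:
  assumes F: "klinear A A' F" and G: "klinear B B' G" and X: "X \<in> carrier (tensor_alg A B)"
  shows "tmap A' B' F G X \<in> carrier (tensor_alg A' B')"
proof -
  obtain f where f: "f \<in> tfree A B" "X = tcls A B f" using X by (auto elim: tensor_carrierE)
  then show ?thesis using free_map_tfree[OF F G f(1)]
    by (simp add: tmap_tcls[OF F G tfree_finsupp[OF f(1)]] carrier_tensor)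
qed

lemma tmap_comp:
  assumes F: "klinear A A' F" and G: "klinear B B' G" and F': "klinear A' A'' F'" and G': "klinear B' B'' G'"
    and X: "X \<in> carrier (tensor_alg A B)"
  shows "tmap A'' B'' F' G' (tmap A' B' F G X) = tmap A'' B'' (F' \<circ> F) (G' \<circ> G) X"
proof -
  obtain f where f: "f \<in> tfree A B" "X = tcls A B f" using X by (auto elim: tensor_carrierE)
  then have fin: "finsupp f" using tfree_finsupp by blast
  have "free_map F' G' (free_map F G f) = free_map (F' \<circ> F) (G' \<circ> G) f"
    unfolding free_map_def using fin by (simp add: lin_ext_lin_ext)
  then show ?thesis using f fin
    by (simp add: tmap_tcls[OF F G] tmap_tcls[OF F' G'] tmap_tcls[OF klinear_comp[OF F F'] klinear_comp[OF G G']])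
qed

lemma tmap_cong:
  assumes k: "kalgebra A" "kalgebra B" and X: "X \<in> carrier (tensor_alg A B)"
    and FF: "\<And>a. a \<in> carrier A \<Longrightarrow> F a = F2 a" and GG: "\<And>b. b \<in> carrier B \<Longrightarrow> G b = G2 b"
  shows "tmap A' B' F G X = tmap A' B' F2 G2 X"
proof -
  obtain f where f: "f \<in> tfree A B" "X = tcls A B f" using X by (auto elim: tensor_carrierE)
  have t: "trep X \<in> tfree A B" using f trep_tfree[OF k] by blast
  show ?thesis unfolding tmap_free_map free_map_def
    by (rule arg_cong[where f="tcls A' B'"], rule lin_ext_phi_cong) (use tfree_supp[OF t] FF GG in auto)
qed

lemma tmap_id:
  assumes X: "X \<in> carrier (tensor_alg A B)"
  shows "tmap A B id id X = X"
proof -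
  obtain f where f: "f \<in> tfree A B" "X = tcls A B f" using X by (auto elim: tensor_carrierE)
  have "free_map id id f = f" unfolding free_map_def using f tfree_finsupp lin_ext_tdelta_right by auto
  then show ?thesis using f tmap_tcls[OF klinear_id klinear_id] tfree_finsupp by metis
qed

lemma free_map_tfmul:
  assumes F: "alg_hom A A' F" and G: "alg_hom B B' G"
    and f: "f \<in> tfree A B" and g: "g \<in> tfree A B"
  shows "free_map F G (tfmul A B f g) = tfmul A' B' (free_map F G f) (free_map F G g)"
proof -
  have fin: "finsupp f" "finsupp g" using f g tfree_finsupp by blast+
  have L: "free_map F G (tfmul A B f g) = lin_ext f (\<lambda>p. lin_ext g (\<lambda>p'.
      tdelta (F (fst (pair_mult A B p p')), G (snd (pair_mult A B p p')))))"
    unfolding free_map_def tfmul_lin_ext using fin by (simp add: lin_ext_lin_ext finsupp_lin_ext)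
  have R: "tfmul A' B' (free_map F G f) (free_map F G g) = lin_ext f (\<lambda>p. lin_ext g (\<lambda>p'.
      tdelta (pair_mult A' B' (F (fst p), G (snd p)) (F (fst p'), G (snd p')))))"
    unfolding free_map_def tfmul_lin_ext using fin by (simp add: lin_ext_lin_ext finsupp_lin_ext)
  have hF: "F \<in> ring_hom A A'" and hG: "G \<in> ring_hom B B'" using F G by (auto simp: alg_hom_def)
  show ?thesis unfolding L R
    using tfree_supp[OF f] tfree_supp[OF g]
    by (intro lin_ext_phi_cong) (auto simp: pair_mult_def ring_hom_mult[OF hF] ring_hom_mult[OF hG])
qed

lemma klinear_tmap:
  assumes F: "klinear A A' F" and G: "klinear B B' G"
  shows "klinear (tensor_alg A B) (tensor_alg A' B') (tmap A' B' F G)"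
  unfolding klinear_def
proof (intro conjI ballI allI)
  fix x assume "x \<in> carrier (tensor_alg A B)"
  then show "tmap A' B' F G x \<in> carrier (tensor_alg A' B')" by (rule tmap_closed[OF F G])
next
  fix x y assume "x \<in> carrier (tensor_alg A B)" "y \<in> carrier (tensor_alg A B)"
  then obtain f g where fg: "f \<in> tfree A B" "g \<in> tfree A B" "x = tcls A B f" "y = tcls A B g"
    by (auto elim!: tensor_carrierE)
  then have fin: "finsupp f" "finsupp g" using tfree_finsupp by blast+
  show "tmap A' B' F G (x \<oplus>\<^bsub>tensor_alg A B\<^esub> y) = tmap A' B' F G x \<oplus>\<^bsub>tensor_alg A' B'\<^esub> tmap A' B' F G y"
    using fg fin by (simp add: tensor_add_tcls tmap_tcls[OF F G] free_map_def lin_ext_add)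
next
  fix c x assume "x \<in> carrier (tensor_alg A B)"
  then obtain f where f: "f \<in> tfree A B" "x = tcls A B f" by (auto elim: tensor_carrierE)
  then have fin: "finsupp f" using tfree_finsupp by blast
  then show "tmap A' B' F G (c \<odot>\<^bsub>tensor_alg A B\<^esub> x) = c \<odot>\<^bsub>tensor_alg A' B'\<^esub> tmap A' B' F G x"
    using f by (simp add: tensor_smult_tcls tmap_tcls[OF F G] free_map_def lin_ext_smul)
qed

lemma tmap_alg_hom:
  assumes F: "alg_hom A A' F" and G: "alg_hom B B' G"
    and k: "kalgebra A" "kalgebra B" "kalgebra A'" "kalgebra B'"
  shows "alg_hom (tensor_alg A B) (tensor_alg A' B') (tmap A' B' F G)"
proof -
  have lF: "klinear A A' F" and lG: "klinear B B' G" using F G alg_hom_klinear by blast+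
  have hF: "F \<in> ring_hom A A'" and hG: "G \<in> ring_hom B B'" using F G by (auto simp: alg_hom_def)
  note lin = klinear_tmap[OF lF lG, unfolded klinear_def]
  have "tmap A' B' F G \<in> ring_hom (tensor_alg A B) (tensor_alg A' B')"
  proof (rule ring_hom_memI)
    fix x y assume "x \<in> carrier (tensor_alg A B)" "y \<in> carrier (tensor_alg A B)"
    then obtain f g where fg: "f \<in> tfree A B" "g \<in> tfree A B" "x = tcls A B f" "y = tcls A B g"
      by (auto elim!: tensor_carrierE)
    then show "tmap A' B' F G (x \<otimes>\<^bsub>tensor_alg A B\<^esub> y) = tmap A' B' F G x \<otimes>\<^bsub>tensor_alg A' B'\<^esub> tmap A' B' F G y"
      by (simp add: tensor_mult_tcls k tmap_tcls[OF lF lG] tfmul_tfree free_map_tfree[OF lF lG]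
          free_map_tfmul[OF F G] tfree_finsupp)
  next
    show "tmap A' B' F G \<one>\<^bsub>tensor_alg A B\<^esub> = \<one>\<^bsub>tensor_alg A' B'\<^esub>"
      by (simp add: tensor_one tmap_tcls[OF lF lG] free_map_def ring_hom_one[OF hF] ring_hom_one[OF hG])
  qed (use lin in auto)
  then show ?thesis using lin by (simp add: alg_hom_def)
qed

lemma tens_carrier: "a \<in> carrier A \<Longrightarrow> b \<in> carrier B \<Longrightarrow> tens A B a b \<in> carrier (tensor_alg A B)"
  by (simp add: tens_def carrier_tensor tfree_tdelta)

lemma tens_mult:
  assumes k: "kalgebra A" "kalgebra B" and ab: "a \<in> carrier A" "b \<in> carrier B" "a' \<in> carrier A" "b' \<in> carrier B"
  shows "tens A B a b \<otimes>\<^bsub>tensor_alg A B\<^esub> tens A B a' b' = tens A B (a \<otimes>\<^bsub>A\<^esub> a') (b \<otimes>\<^bsub>B\<^esub> b')"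
  using ab by (simp add: tens_def tensor_mult_tcls[OF k] tfree_tdelta tfmul_tdelta pair_mult_def)

lemma tens_add_l:
  assumes ab: "a \<in> carrier A" "a' \<in> carrier A" "b \<in> carrier B"
  shows "tens A B (a \<oplus>\<^bsub>A\<^esub> a') b = tens A B a b \<oplus>\<^bsub>tensor_alg A B\<^esub> tens A B a' b"
proof -
  have m: "(\<lambda>q. tdelta (a \<oplus>\<^bsub>A\<^esub> a', b) q - tdelta (a, b) q - tdelta (a', b) q) \<in> trel A B"
    using ab by (rule trel.addl)
  have e: "(\<lambda>q. tdelta (a \<oplus>\<^bsub>A\<^esub> a', b) q - (tdelta (a, b) q + tdelta (a', b) q :: 'k::field))
      = (\<lambda>q. tdelta (a \<oplus>\<^bsub>A\<^esub> a', b) q - tdelta (a, b) q - tdelta (a', b) q)" by (simp add: algebra_simps)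
  show ?thesis unfolding tens_def tensor_add_tcls by (intro tcls_eqI, subst e, rule m)
qed

lemma tens_add_r:
  assumes ab: "a \<in> carrier A" "b \<in> carrier B" "b' \<in> carrier B"
  shows "tens A B a (b \<oplus>\<^bsub>B\<^esub> b') = tens A B a b \<oplus>\<^bsub>tensor_alg A B\<^esub> tens A B a b'"
proof -
  have m: "(\<lambda>q. tdelta (a, b \<oplus>\<^bsub>B\<^esub> b') q - tdelta (a, b) q - tdelta (a, b') q) \<in> trel A B"
    using ab by (rule trel.addr)
  have e: "(\<lambda>q. tdelta (a, b \<oplus>\<^bsub>B\<^esub> b') q - (tdelta (a, b) q + tdelta (a, b') q :: 'k::field))
      = (\<lambda>q. tdelta (a, b \<oplus>\<^bsub>B\<^esub> b') q - tdelta (a, b) q - tdelta (a, b') q)" by (simp add: algebra_simps)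
  show ?thesis unfolding tens_def tensor_add_tcls by (intro tcls_eqI, subst e, rule m)
qed

lemma tens_smul_l:
  assumes ab: "a \<in> carrier A" "b \<in> carrier B"
  shows "tens A B (c \<odot>\<^bsub>A\<^esub> a) b = c \<odot>\<^bsub>tensor_alg A B\<^esub> tens A B a b"
  unfolding tens_def tensor_smult_tcls by (intro tcls_eqI trel.smull ab)

lemma tens_smul_r:
  assumes ab: "a \<in> carrier A" "b \<in> carrier B"
  shows "tens A B a (c \<odot>\<^bsub>B\<^esub> b) = c \<odot>\<^bsub>tensor_alg A B\<^esub> tens A B a b"
  unfolding tens_def tensor_smult_tcls by (intro tcls_eqI trel.smulr ab)

lemma tmap_tens:
  assumes F: "klinear A A' F" and G: "klinear B B' G"
  shows "tmap A' B' F G (tens A B a b) = tens A' B' (F a) (G b)"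
  unfolding tens_def by (simp add: tmap_tcls[OF F G] free_map_def)

lemma tens_kfield_one_ring_hom:
  fixes A :: "('k::field,'a) kalg"
  assumes A: "kalgebra A"
  shows "(\<lambda>x. tens A kfield x 1) \<in> ring_hom A (tensor_alg A kfield)"
proof (rule ring_hom_memI)
  fix x y assume xy: "x \<in> carrier A" "y \<in> carrier A"
  have one: "(1::'k) \<in> carrier kfield" by (simp add: kfield_def)
  show "tens A kfield x 1 \<in> carrier (tensor_alg A kfield)" using xy(1) one by (rule tens_carrier)
  show "tens A kfield (x \<otimes>\<^bsub>A\<^esub> y) 1 = tens A kfield x 1 \<otimes>\<^bsub>tensor_alg A kfield\<^esub> tens A kfield y 1"
    using tens_mult[OF A kalgebra_kfield xy(1) one xy(2) one] by (simp add: kfield_def)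
  show "tens A kfield (x \<oplus>\<^bsub>A\<^esub> y) 1 = tens A kfield x 1 \<oplus>\<^bsub>tensor_alg A kfield\<^esub> tens A kfield y 1"
    using xy one by (rule tens_add_l)
next
  show "tens A kfield \<one>\<^bsub>A\<^esub> 1 = \<one>\<^bsub>tensor_alg A kfield\<^esub>"
    by (simp add: tensor_one tens_def kfield_def)
qed

lemma tfmul_lin_ext_lin_ext:
  assumes "finsupp F" "finsupp G" "\<And>x. x \<in> fsupp F \<Longrightarrow> finsupp (\<phi> x)" "\<And>y. y \<in> fsupp G \<Longrightarrow> finsupp (\<psi> y)"
  shows "tfmul A B (lin_ext F \<phi>) (lin_ext G \<psi>) = lin_ext F (\<lambda>x. lin_ext G (\<lambda>y. tfmul A B (\<phi> x) (\<psi> y)))"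
proof -
  have "tfmul A B (lin_ext F \<phi>) (lin_ext G \<psi>) = lin_ext F (\<lambda>x. tfmul A B (\<phi> x) (lin_ext G \<psi>))"
    unfolding tfmul_lin_ext using assms by (simp add: lin_ext_lin_ext)
  also have "\<dots> = lin_ext F (\<lambda>x. lin_ext G (\<lambda>y. tfmul A B (\<phi> x) (\<psi> y)))"
  proof (rule lin_ext_phi_cong)
    fix x assume x: "x \<in> fsupp F"
    have "tfmul A B (\<phi> x) (lin_ext G \<psi>) = lin_ext (\<phi> x) (\<lambda>p. lin_ext G (\<lambda>y. lin_ext (\<psi> y) (\<lambda>p'. tdelta (pair_mult A B p p'))))"
      unfolding tfmul_lin_ext using assms by (simp add: lin_ext_lin_ext)
    also have "\<dots> = lin_ext G (\<lambda>y. lin_ext (\<phi> x) (\<lambda>p. lin_ext (\<psi> y) (\<lambda>p'. tdelta (pair_mult A B p p'))))"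
      by (rule lin_ext_swap)
    finally show "tfmul A B (\<phi> x) (lin_ext G \<psi>) = lin_ext G (\<lambda>y. tfmul A B (\<phi> x) (\<psi> y))"
      unfolding tfmul_lin_ext .
  qed
  finally show ?thesis .
qed

definition assoc_slice :: "('k::field,'b) kalg \<Rightarrow> ('k,'c) kalg \<Rightarrow> 'c \<Rightarrow> ('a \<times> 'b \<Rightarrow> 'k) \<Rightarrow> ('a \<times> ('b \<times> 'c \<Rightarrow> 'k) set \<Rightarrow> 'k)" where
  "assoc_slice B C c f = lin_ext f (\<lambda>p'. tdelta (fst p', tens B C (snd p') c))"

definition assoc_free :: "('k::field,'b) kalg \<Rightarrow> ('k,'c) kalg \<Rightarrow> (('a \<times> 'b \<Rightarrow> 'k) set \<times> 'c \<Rightarrow> 'k) \<Rightarrow> ('a \<times> ('b \<times> 'c \<Rightarrow> 'k) set \<Rightarrow> 'k)" where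
  "assoc_free B C F = lin_ext F (\<lambda>p. assoc_slice B C (snd p) (trep (fst p)))"

lemma tassoc_assoc_free: "tassoc A B C X = tcls A (tensor_alg B C) (assoc_free B C (trep X))"
  unfolding tassoc_def assoc_free_def assoc_slice_def lin_ext_def tdelta_def
  by (auto simp: sum_distrib_left mult.assoc intro!: arg_cong[where f="tcls A (tensor_alg B C)"] ext sum.cong)

lemma finsupp_assoc_slice[simp]: "finsupp f \<Longrightarrow> finsupp (assoc_slice B C c f)"
  unfolding assoc_slice_def by (intro finsupp_lin_ext) auto

lemma respects_trel_assoc_slice:
  assumes c: "c \<in> carrier C"
  shows "respects_trel A B (trel A (tensor_alg B C)) (\<lambda>p'. tdelta (fst p', tens B C (snd p') c))"
  unfolding respects_trel_def
proof (intro conjI ballI allI)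
  fix a a' b assume "a \<in> carrier A" "a' \<in> carrier A" "b \<in> carrier B"
  then show "(\<lambda>q. tdelta (fst (a \<oplus>\<^bsub>A\<^esub> a', b), tens B C (snd (a \<oplus>\<^bsub>A\<^esub> a', b)) c) q -
          tdelta (fst (a, b), tens B C (snd (a, b)) c) q - tdelta (fst (a', b), tens B C (snd (a', b)) c) q)
         \<in> trel A (tensor_alg B C)"
    using c by (auto intro: trel.addl tens_carrier)
next
  fix a b b' assume ab: "a \<in> carrier A" "b \<in> carrier B" "b' \<in> carrier B"
  then show "(\<lambda>q. tdelta (fst (a, b \<oplus>\<^bsub>B\<^esub> b'), tens B C (snd (a, b \<oplus>\<^bsub>B\<^esub> b')) c) q -
          tdelta (fst (a, b), tens B C (snd (a, b)) c) q - tdelta (fst (a, b'), tens B C (snd (a, b')) c) q)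
         \<in> trel A (tensor_alg B C)"
    using c by (auto simp: tens_add_l intro: trel.addr tens_carrier)
next
  fix cc a b assume ab: "a \<in> carrier A" "b \<in> carrier B"
  then show "(\<lambda>q. tdelta (fst (cc \<odot>\<^bsub>A\<^esub> a, b), tens B C (snd (cc \<odot>\<^bsub>A\<^esub> a, b)) c) q -
          cc * tdelta (fst (a, b), tens B C (snd (a, b)) c) q) \<in> trel A (tensor_alg B C)"
    using c by (auto intro: trel.smull tens_carrier)
  show "(\<lambda>q. tdelta (fst (a, cc \<odot>\<^bsub>B\<^esub> b), tens B C (snd (a, cc \<odot>\<^bsub>B\<^esub> b)) c) q -
          cc * tdelta (fst (a, b), tens B C (snd (a, b)) c) q) \<in> trel A (tensor_alg B C)"
    using c ab by (auto simp: tens_smul_l intro: trel.smulr tens_carrier)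
qed

lemma assoc_slice_trel_cong:
  assumes c: "c \<in> carrier C"
    and f: "finsupp f" "finsupp f'" and d: "(\<lambda>q. f' q - f q) \<in> trel A B"
  shows "(\<lambda>q. assoc_slice B C c f' q - assoc_slice B C c f q) \<in> trel A (tensor_alg B C)"
  unfolding assoc_slice_def by (rule lin_ext_trel_cong[OF trel_fun_subspace respects_trel_assoc_slice[OF c] f d])

lemma assoc_slice_add: "finsupp f \<Longrightarrow> finsupp g \<Longrightarrow> assoc_slice B C c (\<lambda>q. f q + g q) = (\<lambda>q. assoc_slice B C c f q + assoc_slice B C c g q)"
  unfolding assoc_slice_def by (rule lin_ext_add)
lemma assoc_slice_smul: "finsupp f \<Longrightarrow> assoc_slice B C c (\<lambda>q. d * f q) = (\<lambda>q. d * assoc_slice B C c f q)"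
  unfolding assoc_slice_def by (rule lin_ext_smul)

lemma respects_trel_assoc_free:
  assumes k: "kalgebra A" "kalgebra B" "kalgebra C"
  shows "respects_trel (tensor_alg A B) C (trel A (tensor_alg B C)) (\<lambda>p. assoc_slice B C (snd p) (trep (fst p)))"
  unfolding respects_trel_def
proof (intro conjI ballI allI)
  fix x x' c assume xs: "x \<in> carrier (tensor_alg A B)" "x' \<in> carrier (tensor_alg A B)" and c: "c \<in> carrier C"
  have t: "finsupp (trep x)" "finsupp (trep x')" using trep_carrier_tfree[OF k(1,2)] xs tfree_finsupp by blast+
  have t2: "finsupp (trep (tcls A B (\<lambda>q. trep x q + trep x' q)))" using t by (intro trep_finsupp) simp
  have "(\<lambda>q. assoc_slice B C c (trep (tcls A B (\<lambda>q. trep x q + trep x' q))) q - assoc_slice B C c (\<lambda>q. trep x q + trep x' q) q)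
      \<in> trel A (tensor_alg B C)"
    using t t2 by (intro assoc_slice_trel_cong[OF c] trep_tcls) auto
  then show "(\<lambda>q. assoc_slice B C (snd (x \<oplus>\<^bsub>tensor_alg A B\<^esub> x', c)) (trep (fst (x \<oplus>\<^bsub>tensor_alg A B\<^esub> x', c))) q -
          assoc_slice B C (snd (x, c)) (trep (fst (x, c))) q - assoc_slice B C (snd (x', c)) (trep (fst (x', c))) q)
         \<in> trel A (tensor_alg B C)"
    using t by (simp add: tensor_add assoc_slice_add diff_diff_eq)
next
  fix x c c' assume x: "x \<in> carrier (tensor_alg A B)" and c: "c \<in> carrier C" "c' \<in> carrier C"
  have t: "trep x \<in> tfree A B" using trep_carrier_tfree[OF k(1,2) x] .
  have "lin_ext (trep x) (\<lambda>p' q. tdelta (fst p', tens B C (snd p') (c \<oplus>\<^bsub>C\<^esub> c')) q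
      - tdelta (fst p', tens B C (snd p') c) q - tdelta (fst p', tens B C (snd p') c') q) \<in> trel A (tensor_alg B C)"
    using t c tfree_finsupp[OF t] tfree_supp[OF t]
    by (intro lin_ext_in_fun_subspace[OF trel_fun_subspace]) (auto simp: tens_add_r intro: trel.addr tens_carrier)
  then show "(\<lambda>q. assoc_slice B C (snd (x, c \<oplus>\<^bsub>C\<^esub> c')) (trep (fst (x, c \<oplus>\<^bsub>C\<^esub> c'))) q -
          assoc_slice B C (snd (x, c)) (trep (fst (x, c))) q - assoc_slice B C (snd (x, c')) (trep (fst (x, c'))) q)
         \<in> trel A (tensor_alg B C)"
    by (simp add: assoc_slice_def lin_ext_phi_diff)
next
  fix d x c assume x: "x \<in> carrier (tensor_alg A B)" and c: "c \<in> carrier C"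
  have t: "finsupp (trep x)" using trep_carrier_tfree[OF k(1,2)] x tfree_finsupp by blast+
  have t2: "finsupp (trep (tcls A B (\<lambda>q. d * trep x q)))" using t by (intro trep_finsupp) simp
  have "(\<lambda>q. assoc_slice B C c (trep (tcls A B (\<lambda>q. d * trep x q))) q - assoc_slice B C c (\<lambda>q. d * trep x q) q)
      \<in> trel A (tensor_alg B C)"
    using t t2 by (intro assoc_slice_trel_cong[OF c] trep_tcls) auto
  then show "(\<lambda>q. assoc_slice B C (snd (d \<odot>\<^bsub>tensor_alg A B\<^esub> x, c)) (trep (fst (d \<odot>\<^bsub>tensor_alg A B\<^esub> x, c))) q -
          d * assoc_slice B C (snd (x, c)) (trep (fst (x, c))) q) \<in> trel A (tensor_alg B C)"
    using t by (simp add: tensor_alg_def assoc_slice_smul)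
  have t': "trep x \<in> tfree A B" using trep_carrier_tfree[OF k(1,2) x] .
  have "lin_ext (trep x) (\<lambda>p' q. tdelta (fst p', tens B C (snd p') (d \<odot>\<^bsub>C\<^esub> c)) q
      - d * tdelta (fst p', tens B C (snd p') c) q) \<in> trel A (tensor_alg B C)"
    using t' c tfree_finsupp[OF t'] tfree_supp[OF t']
    by (intro lin_ext_in_fun_subspace[OF trel_fun_subspace]) (auto simp: tens_smul_r intro: trel.smulr tens_carrier)
  then show "(\<lambda>q. assoc_slice B C (snd (x, d \<odot>\<^bsub>C\<^esub> c)) (trep (fst (x, d \<odot>\<^bsub>C\<^esub> c))) q -
          d * assoc_slice B C (snd (x, c)) (trep (fst (x, c))) q) \<in> trel A (tensor_alg B C)"
    by (simp add: assoc_slice_def lin_ext_phi_diff lin_ext_phi_smul)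
qed

lemma finsupp_assoc_free:
  assumes k: "kalgebra A" "kalgebra B" and F: "F \<in> tfree (tensor_alg A B) C"
  shows "finsupp (assoc_free B C F)"
proof -
  have *: "\<And>p. p \<in> fsupp F \<Longrightarrow> finsupp (trep (fst p))"
    using tfree_supp[OF F] trep_carrier_tfree[OF k] tfree_finsupp by blast
  show ?thesis unfolding assoc_free_def by (rule finsupp_lin_ext[OF tfree_finsupp[OF F]], rule finsupp_assoc_slice, rule *)
qed

lemma assoc_free_tfree:
  assumes k: "kalgebra A" "kalgebra B" "kalgebra C" and F: "F \<in> tfree (tensor_alg A B) C"
  shows "assoc_free B C F \<in> tfree A (tensor_alg B C)"
proof -
  have "fsupp (assoc_free B C F) \<subseteq> (\<Union>p\<in>fsupp F. fsupp (assoc_slice B C (snd p) (trep (fst p))))"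
    unfolding assoc_free_def by (rule fsupp_lin_ext)
  also have "\<dots> \<subseteq> (\<Union>p\<in>fsupp F. \<Union>p'\<in>fsupp (trep (fst p)). {(fst p', tens B C (snd p') (snd p))})"
  proof (rule UN_mono[OF subset_refl])
    fix p
    show "fsupp (assoc_slice B C (snd p) (trep (fst p))) \<subseteq> (\<Union>p'\<in>fsupp (trep (fst p)). {(fst p', tens B C (snd p') (snd p))})"
      unfolding assoc_slice_def using fsupp_lin_ext[of "trep (fst p)" "\<lambda>p'. tdelta (fst p', tens B C (snd p') (snd p))"]
      by simp
  qed
  also have "\<dots> \<subseteq> carrier A \<times> carrier (tensor_alg B C)"
  proof (intro subsetI, elim UN_E)
    fix q p p' assume p: "p \<in> fsupp F" and p': "p' \<in> fsupp (trep (fst p))"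
      and q: "q \<in> {(fst p', tens B C (snd p') (snd p))}"
    have "trep (fst p) \<in> tfree A B" using tfree_supp[OF F p] trep_carrier_tfree[OF k(1,2)] by blast
    then show "q \<in> carrier A \<times> carrier (tensor_alg B C)"
      using tfree_supp[OF F p] tfree_supp[OF _ p'] q by (auto intro: tens_carrier)
  qed
  finally show ?thesis using finsupp_assoc_free[OF k(1,2) F] unfolding tfree_def by auto
qed

lemma tassoc_tcls:
  assumes k: "kalgebra A" "kalgebra B" "kalgebra C" and F: "F \<in> tfree (tensor_alg A B) C"
  shows "tassoc A B C (tcls (tensor_alg A B) C F) = tcls A (tensor_alg B C) (assoc_free B C F)"
  unfolding tassoc_assoc_free assoc_free_def
  by (rule tcls_eqI, rule lin_ext_trel_cong[OF trel_fun_subspace respects_trel_assoc_free[OF k] tfree_finsupp[OF F]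
        trep_finsupp[OF tfree_finsupp[OF F]] trep_tcls])

lemma tassoc_closed:
  assumes k: "kalgebra A" "kalgebra B" "kalgebra C" and X: "X \<in> carrier (tensor_alg (tensor_alg A B) C)"
  shows "tassoc A B C X \<in> carrier (tensor_alg A (tensor_alg B C))"
  using X by (auto elim!: tensor_carrierE simp: tassoc_tcls[OF k] carrier_tensor assoc_free_tfree[OF k])

lemma tassoc_tens:
  assumes k: "kalgebra A" "kalgebra B" "kalgebra C"
    and abc: "a \<in> carrier A" "b \<in> carrier B" "c \<in> carrier C"
  shows "tassoc A B C (tens (tensor_alg A B) C (tens A B a b) c) = tens A (tensor_alg B C) a (tens B C b c)"
proof -
  have d: "tdelta (tens A B a b, c) \<in> tfree (tensor_alg A B) C"
    using abc by (intro tfree_tdelta tens_carrier)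
  have d': "tdelta (tcls A B (tdelta (a, b)), c) \<in> tfree (tensor_alg A B) C"
    using d by (simp add: tens_def)
  have "tassoc A B C (tens (tensor_alg A B) C (tens A B a b) c)
     = tcls A (tensor_alg B C) (assoc_slice B C c (trep (tcls A B (tdelta (a, b)))))"
    unfolding tens_def by (simp add: tassoc_tcls[OF k d'] assoc_free_def)
  also have "\<dots> = tcls A (tensor_alg B C) (assoc_slice B C c (tdelta (a, b)))"
    by (rule tcls_eqI, rule assoc_slice_trel_cong[OF abc(3)]) (auto intro: trep_finsupp trep_tcls)
  also have "\<dots> = tens A (tensor_alg B C) a (tens B C b c)"
    by (simp add: assoc_slice_def tens_def[of A])
  finally show ?thesis .
qed

lemma assoc_slice_tfmul:
  assumes k: "kalgebra A" "kalgebra B" "kalgebra C" and c: "c \<in> carrier C" "c' \<in> carrier C"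
    and f: "f \<in> tfree A B" and g: "g \<in> tfree A B"
  shows "assoc_slice B C (c \<otimes>\<^bsub>C\<^esub> c') (tfmul A B f g) = tfmul A (tensor_alg B C) (assoc_slice B C c f) (assoc_slice B C c' g)"
proof -
  have fin: "finsupp f" "finsupp g" using f g tfree_finsupp by blast+
  have L: "assoc_slice B C (c \<otimes>\<^bsub>C\<^esub> c') (tfmul A B f g) = lin_ext f (\<lambda>p. lin_ext g (\<lambda>p'.
      tdelta (fst (pair_mult A B p p'), tens B C (snd (pair_mult A B p p')) (c \<otimes>\<^bsub>C\<^esub> c'))))"
    unfolding assoc_slice_def tfmul_lin_ext using fin by (simp add: lin_ext_lin_ext finsupp_lin_ext)
  have R: "tfmul A (tensor_alg B C) (assoc_slice B C c f) (assoc_slice B C c' g) = lin_ext f (\<lambda>p. lin_ext g (\<lambda>p'.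
      tdelta (pair_mult A (tensor_alg B C) (fst p, tens B C (snd p) c) (fst p', tens B C (snd p') c'))))"
    unfolding assoc_slice_def using fin by (simp add: tfmul_lin_ext_lin_ext tfmul_tdelta)
  show ?thesis unfolding L R
    using tfree_supp[OF f] tfree_supp[OF g] c
    by (intro lin_ext_phi_cong) (auto simp: pair_mult_def tens_mult[OF k(2,3)])
qed

lemma assoc_free_tfmul:
  assumes k: "kalgebra A" "kalgebra B" "kalgebra C"
    and F: "F \<in> tfree (tensor_alg A B) C" and G: "G \<in> tfree (tensor_alg A B) C"
  shows "(\<lambda>q. assoc_free B C (tfmul (tensor_alg A B) C F G) q
      - tfmul A (tensor_alg B C) (assoc_free B C F) (assoc_free B C G) q) \<in> trel A (tensor_alg B C)"
proof -
  have fin: "finsupp F" "finsupp G" using F G tfree_finsupp by blast+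
  have sup: "\<And>p. p \<in> fsupp F \<Longrightarrow> trep (fst p) \<in> tfree A B \<and> snd p \<in> carrier C"
    "\<And>p. p \<in> fsupp G \<Longrightarrow> trep (fst p) \<in> tfree A B \<and> snd p \<in> carrier C"
    using tfree_supp[OF F] tfree_supp[OF G] trep_carrier_tfree[OF k(1,2)] by blast+
  have "assoc_free B C (tfmul (tensor_alg A B) C F G) = lin_ext F (\<lambda>p. lin_ext G (\<lambda>p'.
     assoc_slice B C (snd p \<otimes>\<^bsub>C\<^esub> snd p') (trep (fst p \<otimes>\<^bsub>tensor_alg A B\<^esub> fst p'))))"
    unfolding assoc_free_def tfmul_lin_ext using fin
    by (simp add: lin_ext_lin_ext finsupp_lin_ext pair_mult_def)
  moreover have "tfmul A (tensor_alg B C) (assoc_free B C F) (assoc_free B C G) = lin_ext F (\<lambda>p. lin_ext G (\<lambda>p'.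
     tfmul A (tensor_alg B C) (assoc_slice B C (snd p) (trep (fst p))) (assoc_slice B C (snd p') (trep (fst p')))))"
    unfolding assoc_free_def
    by (intro tfmul_lin_ext_lin_ext fin finsupp_assoc_slice) (use sup tfree_finsupp in blast)+
  moreover have "(\<lambda>q. assoc_slice B C (snd p \<otimes>\<^bsub>C\<^esub> snd p') (trep (fst p \<otimes>\<^bsub>tensor_alg A B\<^esub> fst p')) q
       - tfmul A (tensor_alg B C) (assoc_slice B C (snd p) (trep (fst p)))
           (assoc_slice B C (snd p') (trep (fst p'))) q) \<in> trel A (tensor_alg B C)"
    if p: "p \<in> fsupp F" and p': "p' \<in> fsupp G" for p p'
  proof -
    let ?f = "trep (fst p)" and ?g = "trep (fst p')"
    have f: "?f \<in> tfree A B" and g: "?g \<in> tfree A B" using sup p p' by blast+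
    have c: "snd p \<in> carrier C" "snd p' \<in> carrier C" using sup p p' by blast+
    have cc: "snd p \<otimes>\<^bsub>C\<^esub> snd p' \<in> carrier C"
      using c by (rule ring.ring_simprules(5)[OF kalg_ring[OF k(3)]])
    have ft: "finsupp (tfmul A B ?f ?g)" using f g tfree_finsupp finsupp_tfmul by blast
    show ?thesis
      unfolding assoc_slice_tfmul[OF k c f g, symmetric] tensor_mult
      by (rule assoc_slice_trel_cong[OF cc ft trep_finsupp[OF ft] trep_tcls])
  qed
  ultimately show ?thesis
    by (simp add: lin_ext_phi_diff[symmetric] lin_ext_in_fun_subspace[OF trel_fun_subspace] fin)
qed

lemma tassoc_mult:
  assumes k: "kalgebra A" "kalgebra B" "kalgebra C"
    and X: "X \<in> carrier (tensor_alg (tensor_alg A B) C)" and Y: "Y \<in> carrier (tensor_alg (tensor_alg A B) C)"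
  shows "tassoc A B C (X \<otimes>\<^bsub>tensor_alg (tensor_alg A B) C\<^esub> Y)
      = tassoc A B C X \<otimes>\<^bsub>tensor_alg A (tensor_alg B C)\<^esub> tassoc A B C Y"
proof -
  have kAB: "kalgebra (tensor_alg A B)" and kBC: "kalgebra (tensor_alg B C)"
    using kalgebra_tensor k by blast+
  obtain F G where FG: "F \<in> tfree (tensor_alg A B) C" "G \<in> tfree (tensor_alg A B) C"
    "X = tcls (tensor_alg A B) C F" "Y = tcls (tensor_alg A B) C G"
    using X Y by (auto elim!: tensor_carrierE)
  have "tassoc A B C (X \<otimes>\<^bsub>tensor_alg (tensor_alg A B) C\<^esub> Y)
      = tcls A (tensor_alg B C) (assoc_free B C (tfmul (tensor_alg A B) C F G))"
    unfolding FG(3,4) tensor_mult_tcls[OF kAB k(3) FG(1,2)]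
    by (rule tassoc_tcls[OF k tfmul_tfree[OF FG(1,2) kAB k(3)]])
  also have "\<dots> = tcls A (tensor_alg B C) (tfmul A (tensor_alg B C) (assoc_free B C F) (assoc_free B C G))"
    by (rule tcls_eqI[OF assoc_free_tfmul[OF k FG(1,2)]])
  also have "\<dots> = tassoc A B C X \<otimes>\<^bsub>tensor_alg A (tensor_alg B C)\<^esub> tassoc A B C Y"
    unfolding FG(3,4) tassoc_tcls[OF k FG(1)] tassoc_tcls[OF k FG(2)]
    by (rule tensor_mult_tcls[OF k(1) kBC assoc_free_tfree[OF k FG(1)] assoc_free_tfree[OF k FG(2)], symmetric])
  finally show ?thesis .
qed

lemma tassoc_alg_hom:
  assumes k: "kalgebra A" "kalgebra B" "kalgebra C"
  shows "tassoc A B C \<in> ring_hom (tensor_alg (tensor_alg A B) C) (tensor_alg A (tensor_alg B C))"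
proof (rule ring_hom_memI)
  fix X assume "X \<in> carrier (tensor_alg (tensor_alg A B) C)"
  then show "tassoc A B C X \<in> carrier (tensor_alg A (tensor_alg B C))" by (rule tassoc_closed[OF k])
next
  fix X Y assume XY: "X \<in> carrier (tensor_alg (tensor_alg A B) C)" "Y \<in> carrier (tensor_alg (tensor_alg A B) C)"
  then show "tassoc A B C (X \<otimes>\<^bsub>tensor_alg (tensor_alg A B) C\<^esub> Y)
      = tassoc A B C X \<otimes>\<^bsub>tensor_alg A (tensor_alg B C)\<^esub> tassoc A B C Y"
    by (rule tassoc_mult[OF k])
  obtain F G where "F \<in> tfree (tensor_alg A B) C" "G \<in> tfree (tensor_alg A B) C"
    "X = tcls (tensor_alg A B) C F" "Y = tcls (tensor_alg A B) C G"
    using XY by (auto elim!: tensor_carrierE)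
  then show "tassoc A B C (X \<oplus>\<^bsub>tensor_alg (tensor_alg A B) C\<^esub> Y)
      = tassoc A B C X \<oplus>\<^bsub>tensor_alg A (tensor_alg B C)\<^esub> tassoc A B C Y"
    by (simp add: tensor_add_tcls tassoc_tcls[OF k] tfree_add assoc_free_def lin_ext_add tfree_finsupp)
next
  have "\<one>\<^bsub>A\<^esub> \<in> carrier A" "\<one>\<^bsub>B\<^esub> \<in> carrier B" "\<one>\<^bsub>C\<^esub> \<in> carrier C"
    using k by (simp_all add: kalg_ring ring.ring_simprules(6))
  from tassoc_tens[OF k this]
  show "tassoc A B C \<one>\<^bsub>tensor_alg (tensor_alg A B) C\<^esub> = \<one>\<^bsub>tensor_alg A (tensor_alg B C)\<^esub>"
    by (simp add: tensor_one tens_def)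
qed

lemma free_map_assoc_slice:
  assumes F: "klinear A A' F" and G: "klinear B B' G" and H: "klinear C C' H"
    and f: "f \<in> tfree A B" and c: "c \<in> carrier C"
  shows "free_map F (tmap B' C' G H) (assoc_slice B C c f) = assoc_slice B' C' (H c) (free_map F G f)"
proof -
  have fin: "finsupp f" using f tfree_finsupp by blast
  have "free_map F (tmap B' C' G H) (assoc_slice B C c f) = lin_ext f (\<lambda>p'. tdelta (F (fst p'), tmap B' C' G H (tens B C (snd p') c)))"
    unfolding free_map_def assoc_slice_def by (subst lin_ext_lin_ext[OF fin]) simp_all
  also have "\<dots> = lin_ext f (\<lambda>p'. tdelta (F (fst p'), tens B' C' (G (snd p')) (H c)))"
    by (simp add: tmap_tens[OF G H])
  also have "\<dots> = assoc_slice B' C' (H c) (free_map F G f)"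
    unfolding free_map_def assoc_slice_def by (subst lin_ext_lin_ext[OF fin]) simp_all
  finally show ?thesis .
qed

lemma free_map_assoc_free:
  assumes k: "kalgebra A" "kalgebra B"
    and F: "klinear A A' F" and G: "klinear B B' G" and H: "klinear C C' H"
    and F0: "F0 \<in> tfree (tensor_alg A B) C"
  shows "free_map F (tmap B' C' G H) (assoc_free B C F0)
       = lin_ext F0 (\<lambda>p. assoc_slice B' C' (H (snd p)) (free_map F G (trep (fst p))))"
proof -
  have sup: "\<And>p. p \<in> fsupp F0 \<Longrightarrow> trep (fst p) \<in> tfree A B \<and> snd p \<in> carrier C"
    using tfree_supp[OF F0] trep_carrier_tfree[OF k] by blast
  have "free_map F (tmap B' C' G H) (assoc_free B C F0)
      = lin_ext F0 (\<lambda>p. free_map F (tmap B' C' G H) (assoc_slice B C (snd p) (trep (fst p))))"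
    unfolding assoc_free_def free_map_def
    by (rule lin_ext_lin_ext[OF tfree_finsupp[OF F0] finsupp_assoc_slice[OF tfree_finsupp]])
      (use sup in blast)
  also have "\<dots> = lin_ext F0 (\<lambda>p. assoc_slice B' C' (H (snd p)) (free_map F G (trep (fst p))))"
    using sup by (intro lin_ext_phi_cong free_map_assoc_slice[OF F G H]) auto
  finally show ?thesis .
qed

lemma tassoc_natural:
  assumes k: "kalgebra A" "kalgebra B" "kalgebra C" "kalgebra A'" "kalgebra B'" "kalgebra C'"
    and F: "klinear A A' F" and G: "klinear B B' G" and H: "klinear C C' H"
    and X: "X \<in> carrier (tensor_alg (tensor_alg A B) C)"
  shows "tassoc A' B' C' (tmap (tensor_alg A' B') C' (tmap A' B' F G) H X)
       = tmap A' (tensor_alg B' C') F (tmap B' C' G H) (tassoc A B C X)"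
proof -
  obtain F0 where F0: "F0 \<in> tfree (tensor_alg A B) C" "X = tcls (tensor_alg A B) C F0"
    using X by (auto elim: tensor_carrierE)
  have fin: "finsupp F0" using F0 tfree_finsupp by blast
  have lP: "klinear (tensor_alg A B) (tensor_alg A' B') (tmap A' B' F G)" by (rule klinear_tmap[OF F G])
  have L: "tassoc A' B' C' (tmap (tensor_alg A' B') C' (tmap A' B' F G) H X)
      = tcls A' (tensor_alg B' C') (assoc_free B' C' (free_map (tmap A' B' F G) H F0))"
    unfolding F0(2) tmap_tcls[OF lP H fin] by (rule tassoc_tcls[OF k(4-6) free_map_tfree[OF lP H F0(1)]])
  have R: "tmap A' (tensor_alg B' C') F (tmap B' C' G H) (tassoc A B C X)
      = tcls A' (tensor_alg B' C') (free_map F (tmap B' C' G H) (assoc_free B C F0))"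
    unfolding F0(2) tassoc_tcls[OF k(1-3) F0(1)]
    by (rule tmap_tcls[OF F klinear_tmap[OF G H] finsupp_assoc_free[OF k(1,2) F0(1)]])
  have "assoc_free B' C' (free_map (tmap A' B' F G) H F0)
      = lin_ext F0 (\<lambda>p. assoc_slice B' C' (H (snd p)) (trep (tmap A' B' F G (fst p))))"
    unfolding assoc_free_def free_map_def by (subst lin_ext_lin_ext[OF fin]) simp_all
  then have "(\<lambda>q. assoc_free B' C' (free_map (tmap A' B' F G) H F0) q
      - free_map F (tmap B' C' G H) (assoc_free B C F0) q)
     = lin_ext F0 (\<lambda>p q. assoc_slice B' C' (H (snd p)) (trep (tmap A' B' F G (fst p))) q
                     - assoc_slice B' C' (H (snd p)) (free_map F G (trep (fst p))) q)"
    unfolding free_map_assoc_free[OF k(1,2) F G H F0(1)] by (simp add: lin_ext_phi_diff)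
  also have "\<dots> \<in> trel A' (tensor_alg B' C')"
  proof (rule lin_ext_in_fun_subspace[OF trel_fun_subspace fin])
    fix p assume p: "p \<in> fsupp F0"
    have t: "trep (fst p) \<in> tfree A B" and c: "snd p \<in> carrier C"
      using tfree_supp[OF F0(1) p] trep_carrier_tfree[OF k(1,2)] by auto
    have ft: "finsupp (free_map F G (trep (fst p)))" using tfree_finsupp[OF t] by simp
    show "(\<lambda>q. assoc_slice B' C' (H (snd p)) (trep (tmap A' B' F G (fst p))) q
        - assoc_slice B' C' (H (snd p)) (free_map F G (trep (fst p))) q) \<in> trel A' (tensor_alg B' C')"
      unfolding tmap_free_map
      by (rule assoc_slice_trel_cong[OF klinear_closed[OF H c] ft trep_finsupp[OF ft] trep_tcls])
  qed
  finally show ?thesis unfolding L R by (rule tcls_eqI)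
qed

section \<open>Ore localization\<close>

lemma (in monoid) Units_inv_mult:
  assumes "x \<in> Units G" "y \<in> Units G"
  shows "inv (x \<otimes> y) = inv y \<otimes> inv x"
proof -
  have c: "x \<in> carrier G" "y \<in> carrier G" "inv x \<in> carrier G" "inv y \<in> carrier G" using assms by auto
  have "(x \<otimes> y) \<otimes> (inv y \<otimes> inv x) = \<one>"
    using assms c by (simp add: m_assoc[symmetric]) (simp add: m_assoc)
  moreover have "(inv y \<otimes> inv x) \<otimes> (x \<otimes> y) = \<one>"
    using assms c by (simp add: m_assoc[symmetric]) (simp add: m_assoc)
  ultimately show ?thesis using inv_unique'[of "x \<otimes> y" "inv y \<otimes> inv x"] c by simp
qed

lemma (in monoid) Units_frac_mult:
  assumes U: "u \<in> Units G" "s \<in> Units G" "t \<in> Units G"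
    and C: "a \<in> carrier G" "b \<in> carrier G" "v \<in> carrier G"
    and e: "u \<otimes> a = v \<otimes> t"
  shows "inv (u \<otimes> s) \<otimes> (v \<otimes> b) = (inv s \<otimes> a) \<otimes> (inv t \<otimes> b)"
proof -
  have c: "u \<in> carrier G" "s \<in> carrier G" "t \<in> carrier G" "inv u \<in> carrier G" "inv s \<in> carrier G"
    "inv t \<in> carrier G" using U by auto
  have k: "inv u \<otimes> v = a \<otimes> inv t"
  proof -
    have "inv u \<otimes> v = inv u \<otimes> (v \<otimes> (t \<otimes> inv t))" using U c C by simp
    also have "\<dots> = inv u \<otimes> ((v \<otimes> t) \<otimes> inv t)" using c C by (simp add: m_assoc)
    also have "\<dots> = inv u \<otimes> ((u \<otimes> a) \<otimes> inv t)" using e by simp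
    also have "\<dots> = ((inv u \<otimes> u) \<otimes> a) \<otimes> inv t" using c C by (simp add: m_assoc)
    also have "\<dots> = a \<otimes> inv t" using U c C by simp
    finally show ?thesis .
  qed
  have "inv (u \<otimes> s) \<otimes> (v \<otimes> b) = (inv s \<otimes> inv u) \<otimes> (v \<otimes> b)" using Units_inv_mult U by simp
  also have "\<dots> = inv s \<otimes> ((inv u \<otimes> v) \<otimes> b)" using c C by (simp add: m_assoc)
  also have "\<dots> = inv s \<otimes> ((a \<otimes> inv t) \<otimes> b)" using k by simp
  also have "\<dots> = (inv s \<otimes> a) \<otimes> (inv t \<otimes> b)" using c C by (simp add: m_assoc)
  finally show ?thesis .
qed

lemma (in monoid) Units_frac_expand:
  assumes U: "x \<in> Units G" "c \<otimes> x \<in> Units G" and C: "c \<in> carrier G" "r \<in> carrier G"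
  shows "inv (c \<otimes> x) \<otimes> (c \<otimes> r) = inv x \<otimes> r"
proof -
  have cx: "x \<in> carrier G" "inv x \<in> carrier G" "c \<otimes> x \<in> carrier G" "inv (c \<otimes> x) \<in> carrier G" using U C by auto
  have "c = (c \<otimes> x) \<otimes> inv x" using U C cx by (simp add: m_assoc)
  then have "inv (c \<otimes> x) \<otimes> (c \<otimes> r) = inv (c \<otimes> x) \<otimes> (((c \<otimes> x) \<otimes> inv x) \<otimes> r)" by simp
  also have "\<dots> = (inv (c \<otimes> x) \<otimes> (c \<otimes> x)) \<otimes> (inv x \<otimes> r)" using cx C by (simp add: m_assoc)
  also have "\<dots> = inv x \<otimes> r" using U cx C by simp
  finally show ?thesis .
qed

definition frac_lift :: "('c, 'm) monoid_scheme \<Rightarrow> ('a \<Rightarrow> 'c) \<Rightarrow> ('a \<times> 'a) set \<Rightarrow> 'c" where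
  "frac_lift M f X = inv\<^bsub>M\<^esub> (f (fst (orep X))) \<otimes>\<^bsub>M\<^esub> f (snd (orep X))"

locale ore =
  fixes R :: "('k::field,'a) kalg" (structure) and S :: "'a set"
  assumes kalg: "kalgebra R" and lo: "left_ore R S"
begin

sublocale ring R using kalg kalg_ring by blast

lemma S_carrier: "s \<in> S \<Longrightarrow> s \<in> carrier R"
  using lo unfolding left_ore_def by blast
lemma S_one: "\<one> \<in> S"
  using lo unfolding left_ore_def by blast
lemma S_mult: "s \<in> S \<Longrightarrow> t \<in> S \<Longrightarrow> s \<otimes> t \<in> S"
  using lo unfolding left_ore_def by blast
lemma ore_cond: "s \<in> S \<Longrightarrow> r \<in> carrier R \<Longrightarrow> \<exists>s'\<in>S. \<exists>r'\<in>carrier R. r' \<otimes> s = s' \<otimes> r"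
  using lo unfolding left_ore_def by blast
lemma ore_annihilator: "n \<in> carrier R \<Longrightarrow> s \<in> S \<Longrightarrow> n \<otimes> s = \<zero> \<Longrightarrow> \<exists>s'\<in>S. s' \<otimes> n = \<zero>"
  using lo unfolding left_ore_def by blast

lemma ore_right_cancel:
  assumes xy: "x \<in> carrier R" "y \<in> carrier R" and t: "t \<in> S" and e: "x \<otimes> t = y \<otimes> t"
  shows "\<exists>w\<in>S. w \<otimes> x = w \<otimes> y"
proof -
  have tc: "t \<in> carrier R" using S_carrier t by blast
  have n: "x \<oplus> \<ominus> y \<in> carrier R" using xy by simp
  have "(x \<oplus> \<ominus> y) \<otimes> t = x \<otimes> t \<oplus> (\<ominus> y) \<otimes> t" using xy tc by (simp add: l_distr)
  also have "\<dots> = x \<otimes> t \<oplus> \<ominus> (y \<otimes> t)" using xy tc by (simp add: l_minus)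
  also have "\<dots> = \<zero>" unfolding e using xy tc by (simp add: r_neg)
  finally have z: "(x \<oplus> \<ominus> y) \<otimes> t = \<zero>" .
  obtain w where w: "w \<in> S" "w \<otimes> (x \<oplus> \<ominus> y) = \<zero>" using ore_annihilator[OF n t z] by blast
  have wc: "w \<in> carrier R" using S_carrier w by blast
  have "w \<otimes> x \<oplus> \<ominus> (w \<otimes> y) = \<zero>" using w wc xy by (simp add: r_distr r_minus)
  then have "w \<otimes> x = w \<otimes> y"
    using wc xy by (metis add.inv_closed m_closed minus_equality minus_minus)
  then show ?thesis using w by blast
qed

lemma ore_common_multiple:
  assumes "s \<in> S" "t \<in> S"
  shows "\<exists>e\<in>carrier R. \<exists>f\<in>carrier R. e \<otimes> s \<in> S \<and> e \<otimes> s = f \<otimes> t"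
proof -
  obtain s' r' where "s' \<in> S" "r' \<in> carrier R" "r' \<otimes> t = s' \<otimes> s"
    using ore_cond[OF assms(2) S_carrier[OF assms(1)]] by blast
  then show ?thesis using S_mult[OF \<open>s' \<in> S\<close> assms(1)] S_carrier[OF \<open>s' \<in> S\<close>]
    by (intro bexI[of _ s'] bexI[of _ r']) auto
qed

lemma oeq_def': "oeq R S (s, r) (s', r') \<longleftrightarrow> (\<exists>c\<in>carrier R. \<exists>c'\<in>carrier R.
     c \<otimes> s = c' \<otimes> s' \<and> c \<otimes> s \<in> S \<and> c \<otimes> r = c' \<otimes> r')"
  by (simp add: oeq_def)

lemma oeq_refl: "s \<in> S \<Longrightarrow> r \<in> carrier R \<Longrightarrow> oeq R S (s, r) (s, r)"
  unfolding oeq_def' using S_carrier by (intro bexI[of _ \<one>]) auto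

lemma oeq_sym: "oeq R S p p' \<Longrightarrow> oeq R S p' p"
proof -
  assume "oeq R S p p'"
  then obtain c c' where "c \<in> carrier R" "c' \<in> carrier R" "c \<otimes> fst p = c' \<otimes> fst p'"
    "c \<otimes> fst p \<in> S" "c \<otimes> snd p = c' \<otimes> snd p'" unfolding oeq_def by blast
  then show "oeq R S p' p" unfolding oeq_def by (intro bexI[of _ c'] bexI[of _ c]) auto
qed

lemma oeq_trans:
  assumes p1: "oeq R S (s1, r1) (s2, r2)" and p2: "oeq R S (s2, r2) (s3, r3)"
    and s: "s1 \<in> S" "s2 \<in> S" "s3 \<in> S" and r: "r1 \<in> carrier R" "r2 \<in> carrier R" "r3 \<in> carrier R"
  shows "oeq R S (s1, r1) (s3, r3)"
proof -
  obtain c1 c2 where c: "c1 \<in> carrier R" "c2 \<in> carrier R" "c1 \<otimes> s1 = c2 \<otimes> s2" "c1 \<otimes> s1 \<in> S"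
    "c1 \<otimes> r1 = c2 \<otimes> r2" using p1 unfolding oeq_def' by blast
  obtain d2 d3 where d: "d2 \<in> carrier R" "d3 \<in> carrier R" "d2 \<otimes> s2 = d3 \<otimes> s3" "d2 \<otimes> s2 \<in> S"
    "d2 \<otimes> r2 = d3 \<otimes> r3" using p2 unfolding oeq_def' by blast
  have sc: "s1 \<in> carrier R" "s2 \<in> carrier R" "s3 \<in> carrier R" using s S_carrier by auto
  txt \<open>Take a common left multiple of \<open>c1 s1 = c2 s2\<close> and \<open>d2 s2\<close>; the two
    resulting left factors of \<open>s2\<close> then agree after multiplication by some \<open>w \<in> S\<close>.\<close>
  obtain s' r' where sr: "s' \<in> S" "r' \<in> carrier R" "r' \<otimes> (c1 \<otimes> s1) = s' \<otimes> (d2 \<otimes> s2)"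
    using ore_cond[OF c(4) m_closed[OF d(1) sc(2)]] by blast
  have s'c: "s' \<in> carrier R" using sr S_carrier by blast
  have "(r' \<otimes> c2) \<otimes> s2 = (s' \<otimes> d2) \<otimes> s2"
    using sr(2,3) c(1,2) d(1) sc s'c by (simp add: m_assoc c(3)[symmetric])
  then obtain w where w: "w \<in> S" "w \<otimes> (r' \<otimes> c2) = w \<otimes> (s' \<otimes> d2)"
    using ore_right_cancel[OF m_closed[OF sr(2) c(2)] m_closed[OF s'c d(1)] s(2)] by blast
  have wc: "w \<in> carrier R" using w S_carrier by blast
  let ?e = "w \<otimes> r' \<otimes> c1" and ?e' = "w \<otimes> s' \<otimes> d3"
  have e1: "?e \<otimes> s1 = w \<otimes> (s' \<otimes> (d2 \<otimes> s2))" using sr c wc sc by (simp add: m_assoc)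
  have e2: "?e' \<otimes> s3 = w \<otimes> (s' \<otimes> (d2 \<otimes> s2))" using d wc s'c sc by (simp add: m_assoc)
  have e3: "w \<otimes> (s' \<otimes> (d2 \<otimes> s2)) \<in> S" using w sr d S_mult by blast
  have "?e \<otimes> r1 = w \<otimes> (r' \<otimes> c2) \<otimes> r2" using c wc sr r sc by (simp add: m_assoc)
  also have "\<dots> = w \<otimes> (s' \<otimes> d2) \<otimes> r2" using w by simp
  also have "\<dots> = ?e' \<otimes> r3" using d wc s'c r by (simp add: m_assoc)
  finally have e4: "?e \<otimes> r1 = ?e' \<otimes> r3" .
  have ec: "?e \<in> carrier R" "?e' \<in> carrier R" using wc sr s'c c d by auto
  have e5: "?e \<otimes> s1 = ?e' \<otimes> s3" using e1 e2 by simp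
  have e6: "?e \<otimes> s1 \<in> S" using e1 e3 by simp
  show ?thesis unfolding oeq_def' using ec e4 e5 e6 by blast
qed

lemma ofrac_mem: "s \<in> S \<Longrightarrow> r \<in> carrier R \<Longrightarrow> (s, r) \<in> ofrac R S s r"
  unfolding ofrac_def using oeq_refl by auto

lemma ofrac_eq_iff:
  assumes "s \<in> S" "s' \<in> S" "r \<in> carrier R" "r' \<in> carrier R"
  shows "ofrac R S s r = ofrac R S s' r' \<longleftrightarrow> oeq R S (s, r) (s', r')"
proof
  assume "ofrac R S s r = ofrac R S s' r'"
  then have "(s', r') \<in> ofrac R S s r" using ofrac_mem assms by blast
  then show "oeq R S (s, r) (s', r')" by (simp add: ofrac_def)
next
  assume h: "oeq R S (s, r) (s', r')"
  have h': "oeq R S (s', r') (s, r)" using oeq_sym[OF h] .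
  show "ofrac R S s r = ofrac R S s' r'"
  proof (rule Set.set_eqI)
    fix p :: "'a \<times> 'a"
    obtain a b where p: "p = (a, b)" by (cases p)
    have "oeq R S (s, r) (a, b) \<longleftrightarrow> oeq R S (s', r') (a, b)" if ab: "a \<in> S" "b \<in> carrier R"
    proof
      assume "oeq R S (s, r) (a, b)"
      then show "oeq R S (s', r') (a, b)" using oeq_trans[OF h' _ assms(2,1) ab(1) assms(4,3) ab(2)] by blast
    next
      assume "oeq R S (s', r') (a, b)"
      then show "oeq R S (s, r) (a, b)" using oeq_trans[OF h _ assms(1,2) ab(1) assms(3,4) ab(2)] by blast
    qed
    then show "p \<in> ofrac R S s r \<longleftrightarrow> p \<in> ofrac R S s' r'"
      unfolding ofrac_def p by blast
  qed
qed

lemma ofrac_expand: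
  assumes c: "c \<in> carrier R" "c \<otimes> s \<in> S" and s: "s \<in> S" and r: "r \<in> carrier R"
  shows "ofrac R S (c \<otimes> s) (c \<otimes> r) = ofrac R S s r"
proof -
  have sc: "s \<in> carrier R" using s S_carrier by blast
  have "oeq R S (c \<otimes> s, c \<otimes> r) (s, r)"
    unfolding oeq_def' using c sc r by (intro bexI[of _ \<one>] bexI[of _ c]) auto
  then show ?thesis using ofrac_eq_iff c s r by auto
qed

lemma orep_ofrac:
  assumes "s \<in> S" "r \<in> carrier R"
  obtains s0 r0 where "orep (ofrac R S s r) = (s0, r0)" "s0 \<in> S" "r0 \<in> carrier R" "oeq R S (s, r) (s0, r0)"
proof -
  have "orep (ofrac R S s r) \<in> ofrac R S s r"
    unfolding orep_def by (rule someI[of "\<lambda>p. p \<in> ofrac R S s r", OF ofrac_mem[OF assms]])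
  then show ?thesis using that by (cases "orep (ofrac R S s r)") (auto simp: ofrac_def)
qed

lemma carrier_loc: "carrier (loc R S) = {ofrac R S s r | s r. s \<in> S \<and> r \<in> carrier R}"
  by (simp add: loc_def)

lemma loc_carrierE:
  assumes "x \<in> carrier (loc R S)"
  obtains s r where "s \<in> S" "r \<in> carrier R" "x = ofrac R S s r"
  using assms by (auto simp: carrier_loc)

text \<open>A pair with \<open>u a = v t\<close> rewrites \<open>a t\<inverse>\<close> as \<open>u\<inverse> v\<close>, hence
  \<open>s\<inverse> a \<cdot> t\<inverse> b = (u s)\<inverse> (v b)\<close>: this is how \<^const>\<open>loc\<close> multiplies.\<close>

definition mult_data :: "'a \<Rightarrow> 'a \<Rightarrow> 'a \<Rightarrow> 'a \<Rightarrow> bool" where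
  "mult_data a t u v \<longleftrightarrow> u \<in> S \<and> v \<in> carrier R \<and> u \<otimes> a = v \<otimes> t"

lemma mult_data_indep:
  assumes s: "s \<in> S" "t \<in> S" and ab: "a \<in> carrier R" "b \<in> carrier R"
    and m1: "mult_data a t u v" and m2: "mult_data a t u' v'"
  shows "ofrac R S (u \<otimes> s) (v \<otimes> b) = ofrac R S (u' \<otimes> s) (v' \<otimes> b)"
proof -
  have u: "u \<in> S" "v \<in> carrier R" "u \<otimes> a = v \<otimes> t" using m1 by (auto simp: mult_data_def)
  have u': "u' \<in> S" "v' \<in> carrier R" "u' \<otimes> a = v' \<otimes> t" using m2 by (auto simp: mult_data_def)
  have c: "s \<in> carrier R" "t \<in> carrier R" "u \<in> carrier R" "u' \<in> carrier R" using s u u' S_carrier by auto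
  obtain \<alpha> \<beta> where ab0: "\<alpha> \<in> S" "\<beta> \<in> carrier R" "\<beta> \<otimes> u = \<alpha> \<otimes> u'"
    using ore_cond[OF u(1) c(4)] by blast
  have \<alpha>c: "\<alpha> \<in> carrier R" using ab0 S_carrier by blast
  have "(\<beta> \<otimes> v) \<otimes> t = \<beta> \<otimes> (u \<otimes> a)" using u c ab0 by (simp add: m_assoc)
  also have "\<dots> = (\<beta> \<otimes> u) \<otimes> a" using c ab ab0(2) by (simp add: m_assoc)
  also have "\<dots> = (\<alpha> \<otimes> u') \<otimes> a" using ab0 by simp
  also have "\<dots> = \<alpha> \<otimes> (v' \<otimes> t)" using c ab \<alpha>c u' by (simp add: m_assoc)
  also have "\<dots> = (\<alpha> \<otimes> v') \<otimes> t" using c \<alpha>c u' by (simp add: m_assoc)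
  finally obtain w where w: "w \<in> S" "w \<otimes> (\<beta> \<otimes> v) = w \<otimes> (\<alpha> \<otimes> v')"
    using ore_right_cancel[OF m_closed[OF ab0(2) u(2)] m_closed[OF \<alpha>c u'(2)] s(2)] by blast
  have wc: "w \<in> carrier R" using w S_carrier by blast
  have e1: "(w \<otimes> \<beta>) \<otimes> (u \<otimes> s) = (w \<otimes> \<alpha>) \<otimes> (u' \<otimes> s)"
  proof -
    have "(w \<otimes> \<beta>) \<otimes> (u \<otimes> s) = w \<otimes> ((\<beta> \<otimes> u) \<otimes> s)" using wc ab0(2) c by (simp add: m_assoc)
    also have "\<dots> = w \<otimes> ((\<alpha> \<otimes> u') \<otimes> s)" using ab0 by simp
    also have "\<dots> = (w \<otimes> \<alpha>) \<otimes> (u' \<otimes> s)" using wc \<alpha>c c by (simp add: m_assoc)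
    finally show ?thesis .
  qed
  have e2: "(w \<otimes> \<alpha>) \<otimes> (u' \<otimes> s) \<in> S" by (rule S_mult[OF S_mult[OF w(1) ab0(1)] S_mult[OF u'(1) s(1)]])
  have e3: "(w \<otimes> \<beta>) \<otimes> (v \<otimes> b) = (w \<otimes> \<alpha>) \<otimes> (v' \<otimes> b)"
  proof -
    have "(w \<otimes> \<beta>) \<otimes> (v \<otimes> b) = (w \<otimes> (\<beta> \<otimes> v)) \<otimes> b" using wc ab0(2) u(2) ab by (simp add: m_assoc)
    also have "\<dots> = (w \<otimes> (\<alpha> \<otimes> v')) \<otimes> b" using w by simp
    also have "\<dots> = (w \<otimes> \<alpha>) \<otimes> (v' \<otimes> b)" using wc \<alpha>c u' ab by (simp add: m_assoc)
    finally show ?thesis .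
  qed
  have "oeq R S (u \<otimes> s, v \<otimes> b) (u' \<otimes> s, v' \<otimes> b)"
    unfolding oeq_def' using e1 e2 e3 wc ab0 \<alpha>c by (intro bexI[of _ "w \<otimes> \<beta>"] bexI[of _ "w \<otimes> \<alpha>"]) auto
  then show ?thesis using ofrac_eq_iff S_mult u u' s ab by auto
qed

lemma mult_expand_left:
  assumes s: "s \<in> S" "t \<in> S" and ab: "a \<in> carrier R" "b \<in> carrier R"
    and cc: "c \<in> carrier R" "c \<otimes> s \<in> S" and m: "mult_data a t u v"
  shows "\<exists>u' v'. mult_data (c \<otimes> a) t u' v' \<and> ofrac R S (u' \<otimes> (c \<otimes> s)) (v' \<otimes> b) = ofrac R S (u \<otimes> s) (v \<otimes> b)"
proof -
  have u: "u \<in> S" "v \<in> carrier R" "u \<otimes> a = v \<otimes> t" using m by (auto simp: mult_data_def)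
  have C: "s \<in> carrier R" "t \<in> carrier R" "u \<in> carrier R" using s u S_carrier by auto
  obtain s' r' where sr: "s' \<in> S" "r' \<in> carrier R" "r' \<otimes> u = s' \<otimes> c"
    using ore_cond[OF u(1) cc(1)] by blast
  have s'c: "s' \<in> carrier R" using sr S_carrier by blast
  have mult_data': "mult_data (c \<otimes> a) t s' (r' \<otimes> v)"
  proof -
    have "s' \<otimes> (c \<otimes> a) = (s' \<otimes> c) \<otimes> a" using s'c cc ab by (simp add: m_assoc)
    also have "\<dots> = (r' \<otimes> u) \<otimes> a" using sr by simp
    also have "\<dots> = r' \<otimes> (v \<otimes> t)" using sr(2) C ab u(3) by (simp add: m_assoc)
    also have "\<dots> = (r' \<otimes> v) \<otimes> t" using sr C u by (simp add: m_assoc)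
    finally show ?thesis unfolding mult_data_def using sr u by auto
  qed
  have d: "s' \<otimes> (c \<otimes> s) = r' \<otimes> (u \<otimes> s)"
  proof -
    have "s' \<otimes> (c \<otimes> s) = (s' \<otimes> c) \<otimes> s" using s'c cc C by (simp add: m_assoc)
    also have "\<dots> = (r' \<otimes> u) \<otimes> s" using sr by simp
    also have "\<dots> = r' \<otimes> (u \<otimes> s)" using sr(2) C by (simp add: m_assoc)
    finally show ?thesis .
  qed
  have dS: "r' \<otimes> (u \<otimes> s) \<in> S" using d S_mult sr cc by metis
  have "ofrac R S (s' \<otimes> (c \<otimes> s)) ((r' \<otimes> v) \<otimes> b) = ofrac R S (r' \<otimes> (u \<otimes> s)) (r' \<otimes> (v \<otimes> b))"
    using d sr u ab by (simp add: m_assoc)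
  also have "\<dots> = ofrac R S (u \<otimes> s) (v \<otimes> b)"
    using ofrac_expand[OF sr(2) dS S_mult[OF u(1) s(1)]] u ab by simp
  finally show ?thesis using mult_data' by blast
qed

lemma mult_expand_right:
  assumes s: "s \<in> S" "t \<in> S" and ab: "a \<in> carrier R" "b \<in> carrier R"
    and dd: "d \<in> carrier R" "d \<otimes> t \<in> S" and m: "mult_data a t u v"
  shows "\<exists>u' v'. mult_data a (d \<otimes> t) u' v' \<and> ofrac R S (u' \<otimes> s) (v' \<otimes> (d \<otimes> b)) = ofrac R S (u \<otimes> s) (v \<otimes> b)"
proof -
  have u: "u \<in> S" "v \<in> carrier R" "u \<otimes> a = v \<otimes> t" using m by (auto simp: mult_data_def)
  have C: "s \<in> carrier R" "t \<in> carrier R" "u \<in> carrier R" using s u S_carrier by auto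
  obtain s' r' where sr: "s' \<in> S" "r' \<in> carrier R" "r' \<otimes> (d \<otimes> t) = s' \<otimes> (u \<otimes> a)"
    using ore_cond[OF dd(2) m_closed[OF C(3) ab(1)]] by blast
  have s'c: "s' \<in> carrier R" using sr S_carrier by blast
  have mult_data': "mult_data a (d \<otimes> t) (s' \<otimes> u) r'"
    unfolding mult_data_def using sr S_mult[OF sr(1) u(1)] s'c C ab by (simp add: m_assoc)
  have "(r' \<otimes> d) \<otimes> t = (s' \<otimes> v) \<otimes> t"
    using sr(3) u(3) s'c sr(2) dd C u(2) ab by (simp add: m_assoc)
  then obtain w where w: "w \<in> S" "w \<otimes> (r' \<otimes> d) = w \<otimes> (s' \<otimes> v)"
    using ore_right_cancel[OF m_closed[OF sr(2) dd(1)] m_closed[OF s'c u(2)] s(2)] by blast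
  have wc: "w \<in> carrier R" using w S_carrier by blast
  have e1: "w \<otimes> ((s' \<otimes> u) \<otimes> s) = (w \<otimes> s') \<otimes> (u \<otimes> s)" using wc s'c C by (simp add: m_assoc)
  have e2: "(w \<otimes> s') \<otimes> (u \<otimes> s) \<in> S" by (rule S_mult[OF S_mult[OF w(1) sr(1)] S_mult[OF u(1) s(1)]])
  have e3: "w \<otimes> (r' \<otimes> (d \<otimes> b)) = (w \<otimes> s') \<otimes> (v \<otimes> b)"
  proof -
    have "w \<otimes> (r' \<otimes> (d \<otimes> b)) = (w \<otimes> (r' \<otimes> d)) \<otimes> b" using wc sr dd ab by (simp add: m_assoc)
    also have "\<dots> = (w \<otimes> (s' \<otimes> v)) \<otimes> b" using w by simp
    also have "\<dots> = (w \<otimes> s') \<otimes> (v \<otimes> b)" using wc s'c u ab by (simp add: m_assoc)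
    finally show ?thesis .
  qed
  have "oeq R S ((s' \<otimes> u) \<otimes> s, r' \<otimes> (d \<otimes> b)) (u \<otimes> s, v \<otimes> b)"
    unfolding oeq_def' using e1 e2 e3 wc s'c by (intro bexI[of _ w] bexI[of _ "w \<otimes> s'"]) auto
  then have "ofrac R S ((s' \<otimes> u) \<otimes> s) (r' \<otimes> (d \<otimes> b)) = ofrac R S (u \<otimes> s) (v \<otimes> b)"
    using ofrac_eq_iff S_mult u sr s ab dd by auto
  then show ?thesis using mult_data' by blast
qed

lemma mult_well_defined:
  assumes S: "s \<in> S" "s' \<in> S" "t \<in> S" "t' \<in> S"
    and C: "a \<in> carrier R" "a' \<in> carrier R" "b \<in> carrier R" "b' \<in> carrier R"
    and o1: "oeq R S (s, a) (s', a')" and o2: "oeq R S (t, b) (t', b')"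
    and m: "mult_data a t u v" and m': "mult_data a' t' u' v'"
  shows "ofrac R S (u \<otimes> s) (v \<otimes> b) = ofrac R S (u' \<otimes> s') (v' \<otimes> b')"
proof -
  obtain c c' where c: "c \<in> carrier R" "c' \<in> carrier R" "c \<otimes> s = c' \<otimes> s'" "c \<otimes> s \<in> S" "c \<otimes> a = c' \<otimes> a'"
    using o1 unfolding oeq_def' by blast
  obtain d d' where d: "d \<in> carrier R" "d' \<in> carrier R" "d \<otimes> t = d' \<otimes> t'" "d \<otimes> t \<in> S" "d \<otimes> b = d' \<otimes> b'"
    using o2 unfolding oeq_def' by blast
  have c2: "c' \<otimes> s' \<in> S" "d' \<otimes> t' \<in> S" using c d by auto
  obtain u1 v1 where m1: "mult_data (c \<otimes> a) t u1 v1" and X1: "ofrac R S (u1 \<otimes> (c \<otimes> s)) (v1 \<otimes> b) = ofrac R S (u \<otimes> s) (v \<otimes> b)"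
    using mult_expand_left[OF S(1,3) C(1,3) c(1,4) m] by blast
  obtain u2 v2 where m2: "mult_data (c \<otimes> a) (d \<otimes> t) u2 v2"
    and X2: "ofrac R S (u2 \<otimes> (c \<otimes> s)) (v2 \<otimes> (d \<otimes> b)) = ofrac R S (u1 \<otimes> (c \<otimes> s)) (v1 \<otimes> b)"
    using mult_expand_right[OF c(4) S(3) m_closed[OF c(1) C(1)] C(3) d(1,4) m1] by blast
  obtain u1' v1' where m1': "mult_data (c' \<otimes> a') t' u1' v1'" and X1': "ofrac R S (u1' \<otimes> (c' \<otimes> s')) (v1' \<otimes> b') = ofrac R S (u' \<otimes> s') (v' \<otimes> b')"
    using mult_expand_left[OF S(2,4) C(2,4) c(2) c2(1) m'] by blast
  obtain u2' v2' where m2': "mult_data (c' \<otimes> a') (d' \<otimes> t') u2' v2'"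
    and X2': "ofrac R S (u2' \<otimes> (c' \<otimes> s')) (v2' \<otimes> (d' \<otimes> b')) = ofrac R S (u1' \<otimes> (c' \<otimes> s')) (v1' \<otimes> b')"
    using mult_expand_right[OF c2(1) S(4) m_closed[OF c(2) C(2)] C(4) d(2) c2(2) m1'] by blast
  have m2'': "mult_data (c \<otimes> a) (d \<otimes> t) u2' v2'" using m2' c d by simp
  have "ofrac R S (u2 \<otimes> (c \<otimes> s)) (v2 \<otimes> (d \<otimes> b)) = ofrac R S (u2' \<otimes> (c \<otimes> s)) (v2' \<otimes> (d \<otimes> b))"
    by (rule mult_data_indep[OF c(4) d(4) m_closed[OF c(1) C(1)] m_closed[OF d(1) C(3)] m2 m2''])
  then show ?thesis using X1 X2 X1' X2' c d by simp
qed

lemma loc_mult_ofrac: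
  assumes s: "s \<in> S" "t \<in> S" and ab: "a \<in> carrier R" "b \<in> carrier R" and m: "mult_data a t u v"
  shows "ofrac R S s a \<otimes>\<^bsub>loc R S\<^esub> ofrac R S t b = ofrac R S (u \<otimes> s) (v \<otimes> b)"
proof -
  obtain s0 a0 where o1: "orep (ofrac R S s a) = (s0, a0)" "s0 \<in> S" "a0 \<in> carrier R" "oeq R S (s, a) (s0, a0)"
    using orep_ofrac[OF s(1) ab(1)] by blast
  obtain t0 b0 where o2: "orep (ofrac R S t b) = (t0, b0)" "t0 \<in> S" "b0 \<in> carrier R" "oeq R S (t, b) (t0, b0)"
    using orep_ofrac[OF s(2) ab(2)] by blast
  define P where "P = (\<lambda>p. case p of (u, v) \<Rightarrow> u \<in> S \<and> v \<in> carrier R \<and> u \<otimes> a0 = v \<otimes> t0)"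
  have ex: "\<exists>p. P p"
  proof -
    obtain s' r' where "s' \<in> S" "r' \<in> carrier R" "r' \<otimes> t0 = s' \<otimes> a0"
      using ore_cond[OF o2(2) o1(3)] by blast
    then show ?thesis unfolding P_def by (intro exI[of _ "(s', r')"]) auto
  qed
  obtain u0 v0 where uv: "(SOME p. P p) = (u0, v0)" by (cases "SOME p. P p")
  have "P (u0, v0)" using someI_ex[OF ex] uv by simp
  then have m0: "mult_data a0 t0 u0 v0" unfolding P_def mult_data_def by simp
  have "ofrac R S s a \<otimes>\<^bsub>loc R S\<^esub> ofrac R S t b = ofrac R S (u0 \<otimes> s0) (v0 \<otimes> b0)"
    using uv unfolding P_def by (simp add: loc_def o1(1) o2(1) Let_def)
  also have "\<dots> = ofrac R S (u \<otimes> s) (v \<otimes> b)"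
    by (rule mult_well_defined[OF o1(2) s(1) o2(2) s(2) o1(3) ab(1) o2(3) ab(2) oeq_sym[OF o1(4)] oeq_sym[OF o2(4)] m0 m])
  finally show ?thesis .
qed

lemma mult_data_exists: "t \<in> S \<Longrightarrow> a \<in> carrier R \<Longrightarrow> \<exists>u v. mult_data a t u v"
  using ore_cond unfolding mult_data_def by metis

text \<open>A pair with \<open>u s = v t\<close> gives the common denominator in
  \<open>s\<inverse> a + t\<inverse> b = (u s)\<inverse> (u a + v b)\<close>.\<close>

definition add_data :: "'a \<Rightarrow> 'a \<Rightarrow> 'a \<Rightarrow> 'a \<Rightarrow> bool" where
  "add_data s t u v \<longleftrightarrow> u \<in> S \<and> v \<in> carrier R \<and> u \<otimes> s = v \<otimes> t"

lemma add_data_indep: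
  assumes s: "s \<in> S" "t \<in> S" and ab: "a \<in> carrier R" "b \<in> carrier R"
    and m1: "add_data s t u v" and m2: "add_data s t u' v'"
  shows "ofrac R S (u \<otimes> s) (u \<otimes> a \<oplus> v \<otimes> b) = ofrac R S (u' \<otimes> s) (u' \<otimes> a \<oplus> v' \<otimes> b)"
proof -
  have u: "u \<in> S" "v \<in> carrier R" "u \<otimes> s = v \<otimes> t" using m1 by (auto simp: add_data_def)
  have u': "u' \<in> S" "v' \<in> carrier R" "u' \<otimes> s = v' \<otimes> t" using m2 by (auto simp: add_data_def)
  have c: "s \<in> carrier R" "t \<in> carrier R" "u \<in> carrier R" "u' \<in> carrier R" using s u u' S_carrier by auto
  obtain \<alpha> \<beta> where ab0: "\<alpha> \<in> S" "\<beta> \<in> carrier R" "\<beta> \<otimes> u = \<alpha> \<otimes> u'"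
    using ore_cond[OF u(1) c(4)] by blast
  have \<alpha>c: "\<alpha> \<in> carrier R" using ab0 S_carrier by blast
  have "(\<beta> \<otimes> v) \<otimes> t = \<beta> \<otimes> (u \<otimes> s)" using u c ab0(2) by (simp add: m_assoc)
  also have "\<dots> = (\<beta> \<otimes> u) \<otimes> s" using c ab0(2) by (simp add: m_assoc)
  also have "\<dots> = (\<alpha> \<otimes> u') \<otimes> s" using ab0 by simp
  also have "\<dots> = \<alpha> \<otimes> (v' \<otimes> t)" using c \<alpha>c u' by (simp add: m_assoc)
  also have "\<dots> = (\<alpha> \<otimes> v') \<otimes> t" using c \<alpha>c u' by (simp add: m_assoc)
  finally obtain w where w: "w \<in> S" "w \<otimes> (\<beta> \<otimes> v) = w \<otimes> (\<alpha> \<otimes> v')"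
    using ore_right_cancel[OF m_closed[OF ab0(2) u(2)] m_closed[OF \<alpha>c u'(2)] s(2)] by blast
  have wc: "w \<in> carrier R" using w S_carrier by blast
  have g: "\<And>x. x \<in> carrier R \<Longrightarrow> (w \<otimes> \<beta>) \<otimes> (u \<otimes> x) = (w \<otimes> \<alpha>) \<otimes> (u' \<otimes> x)"
  proof -
    fix x assume x: "x \<in> carrier R"
    have "(w \<otimes> \<beta>) \<otimes> (u \<otimes> x) = w \<otimes> ((\<beta> \<otimes> u) \<otimes> x)" using wc ab0(2) c x by (simp add: m_assoc)
    also have "\<dots> = w \<otimes> ((\<alpha> \<otimes> u') \<otimes> x)" using ab0 by simp
    also have "\<dots> = (w \<otimes> \<alpha>) \<otimes> (u' \<otimes> x)" using wc \<alpha>c c x by (simp add: m_assoc)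
    finally show "(w \<otimes> \<beta>) \<otimes> (u \<otimes> x) = (w \<otimes> \<alpha>) \<otimes> (u' \<otimes> x)" .
  qed
  have e1: "(w \<otimes> \<beta>) \<otimes> (u \<otimes> s) = (w \<otimes> \<alpha>) \<otimes> (u' \<otimes> s)" using g c by blast
  have e2: "(w \<otimes> \<alpha>) \<otimes> (u' \<otimes> s) \<in> S" by (rule S_mult[OF S_mult[OF w(1) ab0(1)] S_mult[OF u'(1) s(1)]])
  have e4: "(w \<otimes> \<beta>) \<otimes> (v \<otimes> b) = (w \<otimes> \<alpha>) \<otimes> (v' \<otimes> b)"
  proof -
    have "(w \<otimes> \<beta>) \<otimes> (v \<otimes> b) = (w \<otimes> (\<beta> \<otimes> v)) \<otimes> b" using wc ab0(2) u(2) ab by (simp add: m_assoc)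
    also have "\<dots> = (w \<otimes> (\<alpha> \<otimes> v')) \<otimes> b" using w by simp
    also have "\<dots> = (w \<otimes> \<alpha>) \<otimes> (v' \<otimes> b)" using wc \<alpha>c u' ab by (simp add: m_assoc)
    finally show ?thesis .
  qed
  have e3: "(w \<otimes> \<beta>) \<otimes> (u \<otimes> a \<oplus> v \<otimes> b) = (w \<otimes> \<alpha>) \<otimes> (u' \<otimes> a \<oplus> v' \<otimes> b)"
    using g[OF ab(1)] e4 wc ab0 \<alpha>c u u' ab c by (simp add: r_distr)
  have "oeq R S (u \<otimes> s, u \<otimes> a \<oplus> v \<otimes> b) (u' \<otimes> s, u' \<otimes> a \<oplus> v' \<otimes> b)"
    unfolding oeq_def' using e1 e2 e3 wc ab0 \<alpha>c by (intro bexI[of _ "w \<otimes> \<beta>"] bexI[of _ "w \<otimes> \<alpha>"]) auto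
  moreover have "u \<otimes> a \<oplus> v \<otimes> b \<in> carrier R" "u' \<otimes> a \<oplus> v' \<otimes> b \<in> carrier R" using u u' ab c by auto
  ultimately show ?thesis using ofrac_eq_iff[OF S_mult[OF u(1) s(1)] S_mult[OF u'(1) s(1)]] by blast
qed

lemma add_expand_left:
  assumes s: "s \<in> S" "t \<in> S" and ab: "a \<in> carrier R" "b \<in> carrier R"
    and cc: "c \<in> carrier R" "c \<otimes> s \<in> S" and m: "add_data s t u v"
  shows "\<exists>u' v'. add_data (c \<otimes> s) t u' v' \<and>
     ofrac R S (u' \<otimes> (c \<otimes> s)) (u' \<otimes> (c \<otimes> a) \<oplus> v' \<otimes> b) = ofrac R S (u \<otimes> s) (u \<otimes> a \<oplus> v \<otimes> b)"
proof -
  have u: "u \<in> S" "v \<in> carrier R" "u \<otimes> s = v \<otimes> t" using m by (auto simp: add_data_def)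
  have C: "s \<in> carrier R" "t \<in> carrier R" "u \<in> carrier R" using s u S_carrier by auto
  obtain s' r' where sr: "s' \<in> S" "r' \<in> carrier R" "r' \<otimes> u = s' \<otimes> c"
    using ore_cond[OF u(1) cc(1)] by blast
  have s'c: "s' \<in> carrier R" using sr S_carrier by blast
  have g: "\<And>x. x \<in> carrier R \<Longrightarrow> s' \<otimes> (c \<otimes> x) = r' \<otimes> (u \<otimes> x)"
  proof -
    fix x assume x: "x \<in> carrier R"
    have "s' \<otimes> (c \<otimes> x) = (s' \<otimes> c) \<otimes> x" using s'c cc x by (simp add: m_assoc)
    also have "\<dots> = (r' \<otimes> u) \<otimes> x" using sr by simp
    also have "\<dots> = r' \<otimes> (u \<otimes> x)" using sr(2) C x by (simp add: m_assoc)
    finally show "s' \<otimes> (c \<otimes> x) = r' \<otimes> (u \<otimes> x)" .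
  qed
  have add_data': "add_data (c \<otimes> s) t s' (r' \<otimes> v)"
  proof -
    have "s' \<otimes> (c \<otimes> s) = r' \<otimes> (u \<otimes> s)" using g C by blast
    also have "\<dots> = (r' \<otimes> v) \<otimes> t" using sr(2) C u by (simp add: m_assoc)
    finally show ?thesis unfolding add_data_def using sr u by auto
  qed
  have d: "s' \<otimes> (c \<otimes> s) = r' \<otimes> (u \<otimes> s)" using g C by blast
  have dS: "r' \<otimes> (u \<otimes> s) \<in> S" using d S_mult sr cc by metis
  have "ofrac R S (s' \<otimes> (c \<otimes> s)) (s' \<otimes> (c \<otimes> a) \<oplus> (r' \<otimes> v) \<otimes> b)
      = ofrac R S (r' \<otimes> (u \<otimes> s)) (r' \<otimes> (u \<otimes> a \<oplus> v \<otimes> b))"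
    using d g[OF ab(1)] sr u ab C by (simp add: m_assoc r_distr)
  also have "\<dots> = ofrac R S (u \<otimes> s) (u \<otimes> a \<oplus> v \<otimes> b)"
    using ofrac_expand[OF sr(2) dS S_mult[OF u(1) s(1)]] u ab C by simp
  finally show ?thesis using add_data' by blast
qed

lemma add_expand_right:
  assumes s: "s \<in> S" "t \<in> S" and ab: "a \<in> carrier R" "b \<in> carrier R"
    and dd: "d \<in> carrier R" "d \<otimes> t \<in> S" and m: "add_data s t u v"
  shows "\<exists>u' v'. add_data s (d \<otimes> t) u' v' \<and>
     ofrac R S (u' \<otimes> s) (u' \<otimes> a \<oplus> v' \<otimes> (d \<otimes> b)) = ofrac R S (u \<otimes> s) (u \<otimes> a \<oplus> v \<otimes> b)"
proof -
  have u: "u \<in> S" "v \<in> carrier R" "u \<otimes> s = v \<otimes> t" using m by (auto simp: add_data_def)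
  have C: "s \<in> carrier R" "t \<in> carrier R" "u \<in> carrier R" using s u S_carrier by auto
  obtain s' r' where sr: "s' \<in> S" "r' \<in> carrier R" "r' \<otimes> (d \<otimes> t) = s' \<otimes> (u \<otimes> s)"
    using ore_cond[OF dd(2) m_closed[OF C(3) C(1)]] by blast
  have s'c: "s' \<in> carrier R" using sr S_carrier by blast
  have add_data': "add_data s (d \<otimes> t) (s' \<otimes> u) r'"
    unfolding add_data_def using sr S_mult[OF sr(1) u(1)] s'c C by (simp add: m_assoc)
  have "(r' \<otimes> d) \<otimes> t = (s' \<otimes> v) \<otimes> t"
    using sr(3) u(3) s'c sr(2) dd C u(2) by (simp add: m_assoc)
  then obtain w where w: "w \<in> S" "w \<otimes> (r' \<otimes> d) = w \<otimes> (s' \<otimes> v)"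
    using ore_right_cancel[OF m_closed[OF sr(2) dd(1)] m_closed[OF s'c u(2)] s(2)] by blast
  have wc: "w \<in> carrier R" using w S_carrier by blast
  have e1: "w \<otimes> ((s' \<otimes> u) \<otimes> s) = (w \<otimes> s') \<otimes> (u \<otimes> s)" using wc s'c C by (simp add: m_assoc)
  have e2: "(w \<otimes> s') \<otimes> (u \<otimes> s) \<in> S" by (rule S_mult[OF S_mult[OF w(1) sr(1)] S_mult[OF u(1) s(1)]])
  have e4: "w \<otimes> (r' \<otimes> (d \<otimes> b)) = (w \<otimes> s') \<otimes> (v \<otimes> b)"
  proof -
    have "w \<otimes> (r' \<otimes> (d \<otimes> b)) = (w \<otimes> (r' \<otimes> d)) \<otimes> b" using wc sr(2) dd ab by (simp add: m_assoc)
    also have "\<dots> = (w \<otimes> (s' \<otimes> v)) \<otimes> b" using w by simp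
    also have "\<dots> = (w \<otimes> s') \<otimes> (v \<otimes> b)" using wc s'c u(2) ab by (simp add: m_assoc)
    finally show ?thesis .
  qed
  have e5: "w \<otimes> ((s' \<otimes> u) \<otimes> a) = (w \<otimes> s') \<otimes> (u \<otimes> a)" using wc s'c C ab by (simp add: m_assoc)
  have e3: "w \<otimes> ((s' \<otimes> u) \<otimes> a \<oplus> r' \<otimes> (d \<otimes> b)) = (w \<otimes> s') \<otimes> (u \<otimes> a \<oplus> v \<otimes> b)"
    using e4 e5 wc s'c C ab sr(2) dd u(2) by (simp add: r_distr)
  have "oeq R S ((s' \<otimes> u) \<otimes> s, (s' \<otimes> u) \<otimes> a \<oplus> r' \<otimes> (d \<otimes> b)) (u \<otimes> s, u \<otimes> a \<oplus> v \<otimes> b)"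
    unfolding oeq_def' using e1 e2 e3 wc s'c by (intro bexI[of _ w] bexI[of _ "w \<otimes> s'"]) auto
  then have "ofrac R S ((s' \<otimes> u) \<otimes> s) ((s' \<otimes> u) \<otimes> a \<oplus> r' \<otimes> (d \<otimes> b)) = ofrac R S (u \<otimes> s) (u \<otimes> a \<oplus> v \<otimes> b)"
  proof -
    have "(s' \<otimes> u) \<otimes> a \<oplus> r' \<otimes> (d \<otimes> b) \<in> carrier R" "u \<otimes> a \<oplus> v \<otimes> b \<in> carrier R"
      using u sr ab dd C s'c by auto
    then show ?thesis using \<open>oeq R S _ _\<close> ofrac_eq_iff[OF S_mult[OF S_mult[OF sr(1) u(1)] s(1)] S_mult[OF u(1) s(1)]] by blast
  qed
  then show ?thesis using add_data' by blast
qed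

lemma add_well_defined:
  assumes S: "s \<in> S" "s' \<in> S" "t \<in> S" "t' \<in> S"
    and C: "a \<in> carrier R" "a' \<in> carrier R" "b \<in> carrier R" "b' \<in> carrier R"
    and o1: "oeq R S (s, a) (s', a')" and o2: "oeq R S (t, b) (t', b')"
    and m: "add_data s t u v" and m': "add_data s' t' u' v'"
  shows "ofrac R S (u \<otimes> s) (u \<otimes> a \<oplus> v \<otimes> b) = ofrac R S (u' \<otimes> s') (u' \<otimes> a' \<oplus> v' \<otimes> b')"
proof -
  obtain c c' where c: "c \<in> carrier R" "c' \<in> carrier R" "c \<otimes> s = c' \<otimes> s'" "c \<otimes> s \<in> S" "c \<otimes> a = c' \<otimes> a'"
    using o1 unfolding oeq_def' by blast
  obtain d d' where d: "d \<in> carrier R" "d' \<in> carrier R" "d \<otimes> t = d' \<otimes> t'" "d \<otimes> t \<in> S" "d \<otimes> b = d' \<otimes> b'"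
    using o2 unfolding oeq_def' by blast
  have c2: "c' \<otimes> s' \<in> S" "d' \<otimes> t' \<in> S" using c d by auto
  obtain u1 v1 where m1: "add_data (c \<otimes> s) t u1 v1"
    and X1: "ofrac R S (u1 \<otimes> (c \<otimes> s)) (u1 \<otimes> (c \<otimes> a) \<oplus> v1 \<otimes> b) = ofrac R S (u \<otimes> s) (u \<otimes> a \<oplus> v \<otimes> b)"
    using add_expand_left[OF S(1,3) C(1,3) c(1,4) m] by blast
  obtain u2 v2 where m2: "add_data (c \<otimes> s) (d \<otimes> t) u2 v2"
    and X2: "ofrac R S (u2 \<otimes> (c \<otimes> s)) (u2 \<otimes> (c \<otimes> a) \<oplus> v2 \<otimes> (d \<otimes> b)) = ofrac R S (u1 \<otimes> (c \<otimes> s)) (u1 \<otimes> (c \<otimes> a) \<oplus> v1 \<otimes> b)"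
    using add_expand_right[OF c(4) S(3) m_closed[OF c(1) C(1)] C(3) d(1,4) m1] by blast
  obtain u1' v1' where m1': "add_data (c' \<otimes> s') t' u1' v1'"
    and X1': "ofrac R S (u1' \<otimes> (c' \<otimes> s')) (u1' \<otimes> (c' \<otimes> a') \<oplus> v1' \<otimes> b') = ofrac R S (u' \<otimes> s') (u' \<otimes> a' \<oplus> v' \<otimes> b')"
    using add_expand_left[OF S(2,4) C(2,4) c(2) c2(1) m'] by blast
  obtain u2' v2' where m2': "add_data (c' \<otimes> s') (d' \<otimes> t') u2' v2'"
    and X2': "ofrac R S (u2' \<otimes> (c' \<otimes> s')) (u2' \<otimes> (c' \<otimes> a') \<oplus> v2' \<otimes> (d' \<otimes> b')) = ofrac R S (u1' \<otimes> (c' \<otimes> s')) (u1' \<otimes> (c' \<otimes> a') \<oplus> v1' \<otimes> b')"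
    using add_expand_right[OF c2(1) S(4) m_closed[OF c(2) C(2)] C(4) d(2) c2(2) m1'] by blast
  have m2'': "add_data (c \<otimes> s) (d \<otimes> t) u2' v2'" using m2' c d by simp
  have "ofrac R S (u2 \<otimes> (c \<otimes> s)) (u2 \<otimes> (c \<otimes> a) \<oplus> v2 \<otimes> (d \<otimes> b)) = ofrac R S (u2' \<otimes> (c \<otimes> s)) (u2' \<otimes> (c \<otimes> a) \<oplus> v2' \<otimes> (d \<otimes> b))"
    by (rule add_data_indep[OF c(4) d(4) m_closed[OF c(1) C(1)] m_closed[OF d(1) C(3)] m2 m2''])
  then show ?thesis using X1 X2 X1' X2' c d by simp
qed

lemma loc_add_ofrac:
  assumes s: "s \<in> S" "t \<in> S" and ab: "a \<in> carrier R" "b \<in> carrier R" and m: "add_data s t u v"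
  shows "ofrac R S s a \<oplus>\<^bsub>loc R S\<^esub> ofrac R S t b = ofrac R S (u \<otimes> s) (u \<otimes> a \<oplus> v \<otimes> b)"
proof -
  obtain s0 a0 where o1: "orep (ofrac R S s a) = (s0, a0)" "s0 \<in> S" "a0 \<in> carrier R" "oeq R S (s, a) (s0, a0)"
    using orep_ofrac[OF s(1) ab(1)] by blast
  obtain t0 b0 where o2: "orep (ofrac R S t b) = (t0, b0)" "t0 \<in> S" "b0 \<in> carrier R" "oeq R S (t, b) (t0, b0)"
    using orep_ofrac[OF s(2) ab(2)] by blast
  define P where "P = (\<lambda>p. case p of (u, v) \<Rightarrow> u \<in> S \<and> v \<in> carrier R \<and> u \<otimes> s0 = v \<otimes> t0)"
  have ex: "\<exists>p. P p"
  proof -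
    obtain s' r' where "s' \<in> S" "r' \<in> carrier R" "r' \<otimes> t0 = s' \<otimes> s0"
      using ore_cond[OF o2(2) S_carrier[OF o1(2)]] by blast
    then show ?thesis unfolding P_def by (intro exI[of _ "(s', r')"]) auto
  qed
  obtain u0 v0 where uv: "(SOME p. P p) = (u0, v0)" by (cases "SOME p. P p")
  have "P (u0, v0)" using someI_ex[OF ex] uv by simp
  then have m0: "add_data s0 t0 u0 v0" unfolding P_def add_data_def by simp
  have "ofrac R S s a \<oplus>\<^bsub>loc R S\<^esub> ofrac R S t b = ofrac R S (u0 \<otimes> s0) (u0 \<otimes> a0 \<oplus> v0 \<otimes> b0)"
    using uv unfolding P_def by (simp add: loc_def o1(1) o2(1) Let_def)
  also have "\<dots> = ofrac R S (u \<otimes> s) (u \<otimes> a \<oplus> v \<otimes> b)"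
    by (rule add_well_defined[OF o1(2) s(1) o2(2) s(2) o1(3) ab(1) o2(3) ab(2) oeq_sym[OF o1(4)] oeq_sym[OF o2(4)] m0 m])
  finally show ?thesis .
qed

lemma zero_loc: "\<zero>\<^bsub>loc R S\<^esub> = ofrac R S \<one> \<zero>" by (simp add: loc_def)
lemma one_loc: "\<one>\<^bsub>loc R S\<^esub> = ofrac R S \<one> \<one>" by (simp add: loc_def)

lemma ofrac_carrier: "s \<in> S \<Longrightarrow> a \<in> carrier R \<Longrightarrow> ofrac R S s a \<in> carrier (loc R S)"
  by (auto simp: carrier_loc)

lemma ofrac_zero_denom: "\<sigma> \<in> S \<Longrightarrow> ofrac R S \<one> \<zero> = ofrac R S \<sigma> \<zero>"
  using ofrac_expand[of \<sigma> \<one> \<zero>] S_one S_carrier by simp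

lemma ofrac_add_same_denom:
  assumes "\<sigma> \<in> S" "a \<in> carrier R" "b \<in> carrier R"
  shows "ofrac R S \<sigma> a \<oplus>\<^bsub>loc R S\<^esub> ofrac R S \<sigma> b = ofrac R S \<sigma> (a \<oplus> b)"
proof -
  have "add_data \<sigma> \<sigma> \<one> \<one>" unfolding add_data_def using S_one assms S_carrier by simp
  from loc_add_ofrac[OF assms(1,1,2,3) this] show ?thesis using assms S_carrier by simp
qed

lemma loc_common_denom2:
  assumes "x \<in> carrier (loc R S)" "y \<in> carrier (loc R S)"
  obtains \<sigma> a b where "\<sigma> \<in> S" "a \<in> carrier R" "b \<in> carrier R" "x = ofrac R S \<sigma> a" "y = ofrac R S \<sigma> b"
proof -
  obtain s a where x: "s \<in> S" "a \<in> carrier R" "x = ofrac R S s a" using assms(1) by (auto elim: loc_carrierE)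
  obtain t b where y: "t \<in> S" "b \<in> carrier R" "y = ofrac R S t b" using assms(2) by (auto elim: loc_carrierE)
  obtain e f where ef: "e \<in> carrier R" "f \<in> carrier R" "e \<otimes> s \<in> S" "e \<otimes> s = f \<otimes> t"
    using ore_common_multiple[OF x(1) y(1)] by blast
  have 1: "x = ofrac R S (e \<otimes> s) (e \<otimes> a)" using ofrac_expand[OF ef(1,3) x(1,2)] x by simp
  have 2: "y = ofrac R S (e \<otimes> s) (f \<otimes> b)" using ofrac_expand[OF ef(2) _ y(1,2)] ef(3,4) y(3) by simp
  show ?thesis by (rule that[OF ef(3) m_closed[OF ef(1) x(2)] m_closed[OF ef(2) y(2)] 1 2])
qed

lemma loc_common_denom3:
  assumes "x \<in> carrier (loc R S)" "y \<in> carrier (loc R S)" "z \<in> carrier (loc R S)"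
  obtains \<sigma> a b c where "\<sigma> \<in> S" "a \<in> carrier R" "b \<in> carrier R" "c \<in> carrier R"
    "x = ofrac R S \<sigma> a" "y = ofrac R S \<sigma> b" "z = ofrac R S \<sigma> c"
proof -
  obtain \<sigma> a b where xy: "\<sigma> \<in> S" "a \<in> carrier R" "b \<in> carrier R" "x = ofrac R S \<sigma> a" "y = ofrac R S \<sigma> b"
    using loc_common_denom2[OF assms(1,2)] by blast
  obtain t c where z: "t \<in> S" "c \<in> carrier R" "z = ofrac R S t c" using assms(3) by (auto elim: loc_carrierE)
  obtain e f where ef: "e \<in> carrier R" "f \<in> carrier R" "e \<otimes> \<sigma> \<in> S" "e \<otimes> \<sigma> = f \<otimes> t"
    using ore_common_multiple[OF xy(1) z(1)] by blast
  have 1: "x = ofrac R S (e \<otimes> \<sigma>) (e \<otimes> a)" using ofrac_expand[OF ef(1,3) xy(1,2)] xy(4) by simp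
  have 2: "y = ofrac R S (e \<otimes> \<sigma>) (e \<otimes> b)" using ofrac_expand[OF ef(1,3) xy(1,3)] xy(5) by simp
  have 3: "z = ofrac R S (e \<otimes> \<sigma>) (f \<otimes> c)" using ofrac_expand[OF ef(2) _ z(1,2)] ef(3,4) z(3) by simp
  show ?thesis by (rule that[OF ef(3) m_closed[OF ef(1) xy(2)] m_closed[OF ef(1) xy(3)] m_closed[OF ef(2) z(2)] 1 2 3])
qed

lemma mult_closed_loc:
  assumes "x \<in> carrier (loc R S)" "y \<in> carrier (loc R S)"
  shows "x \<otimes>\<^bsub>loc R S\<^esub> y \<in> carrier (loc R S)"
proof -
  obtain s a where x: "s \<in> S" "a \<in> carrier R" "x = ofrac R S s a" using assms(1) by (auto elim: loc_carrierE)
  obtain t b where y: "t \<in> S" "b \<in> carrier R" "y = ofrac R S t b" using assms(2) by (auto elim: loc_carrierE)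
  obtain u v where m: "mult_data a t u v" using mult_data_exists[OF y(1) x(2)] by blast
  have "u \<in> S" "v \<in> carrier R" using m by (auto simp: mult_data_def)
  then show ?thesis using loc_mult_ofrac[OF x(1) y(1) x(2) y(2) m] x y S_mult
    by (simp add: ofrac_carrier)
qed

lemma abelian_group_loc: "abelian_group (loc R S)"
proof (rule abelian_groupI)
  fix x y assume xy: "x \<in> carrier (loc R S)" "y \<in> carrier (loc R S)"
  obtain \<sigma> a b where c: "\<sigma> \<in> S" "a \<in> carrier R" "b \<in> carrier R" "x = ofrac R S \<sigma> a" "y = ofrac R S \<sigma> b"
    using loc_common_denom2[OF xy] by blast
  show "x \<oplus>\<^bsub>loc R S\<^esub> y \<in> carrier (loc R S)" using c ofrac_add_same_denom by (simp add: ofrac_carrier)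
  show "x \<oplus>\<^bsub>loc R S\<^esub> y = y \<oplus>\<^bsub>loc R S\<^esub> x" using c ofrac_add_same_denom by (simp add: a_comm)
next
  show "\<zero>\<^bsub>loc R S\<^esub> \<in> carrier (loc R S)" using S_one by (simp add: zero_loc ofrac_carrier)
next
  fix x y z assume xyz: "x \<in> carrier (loc R S)" "y \<in> carrier (loc R S)" "z \<in> carrier (loc R S)"
  obtain \<sigma> a b c where c: "\<sigma> \<in> S" "a \<in> carrier R" "b \<in> carrier R" "c \<in> carrier R"
    "x = ofrac R S \<sigma> a" "y = ofrac R S \<sigma> b" "z = ofrac R S \<sigma> c"
    using loc_common_denom3[OF xyz] by blast
  show "x \<oplus>\<^bsub>loc R S\<^esub> y \<oplus>\<^bsub>loc R S\<^esub> z = x \<oplus>\<^bsub>loc R S\<^esub> (y \<oplus>\<^bsub>loc R S\<^esub> z)"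
    using c ofrac_add_same_denom by (simp add: a_assoc)
next
  fix x assume x: "x \<in> carrier (loc R S)"
  obtain s a where c: "s \<in> S" "a \<in> carrier R" "x = ofrac R S s a" using x by (auto elim: loc_carrierE)
  show "\<zero>\<^bsub>loc R S\<^esub> \<oplus>\<^bsub>loc R S\<^esub> x = x" using c ofrac_add_same_denom ofrac_zero_denom[OF c(1)] by (simp add: zero_loc)
  have "ofrac R S s (\<ominus> a) \<in> carrier (loc R S)" using c by (simp add: ofrac_carrier)
  moreover have "ofrac R S s (\<ominus> a) \<oplus>\<^bsub>loc R S\<^esub> x = \<zero>\<^bsub>loc R S\<^esub>"
    using c ofrac_add_same_denom ofrac_zero_denom[OF c(1)] by (simp add: zero_loc l_neg)
  ultimately show "\<exists>y\<in>carrier (loc R S). y \<oplus>\<^bsub>loc R S\<^esub> x = \<zero>\<^bsub>loc R S\<^esub>" by blast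
qed

lemma loc_mult_assoc:
  assumes xyz: "x \<in> carrier (loc R S)" "y \<in> carrier (loc R S)" "z \<in> carrier (loc R S)"
  shows "x \<otimes>\<^bsub>loc R S\<^esub> y \<otimes>\<^bsub>loc R S\<^esub> z = x \<otimes>\<^bsub>loc R S\<^esub> (y \<otimes>\<^bsub>loc R S\<^esub> z)"
proof -
  obtain s a where x: "s \<in> S" "a \<in> carrier R" "x = ofrac R S s a" using xyz(1) by (auto elim: loc_carrierE)
  obtain t b where y: "t \<in> S" "b \<in> carrier R" "y = ofrac R S t b" using xyz(2) by (auto elim: loc_carrierE)
  obtain r c where z: "r \<in> S" "c \<in> carrier R" "z = ofrac R S r c" using xyz(3) by (auto elim: loc_carrierE)
  have C: "s \<in> carrier R" "t \<in> carrier R" "r \<in> carrier R" using x y z S_carrier by auto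
  obtain u3 v3 where m3: "mult_data b r u3 v3" using mult_data_exists[OF z(1) y(2)] by blast
  obtain u1 v1 where m1: "mult_data a t u1 v1" using mult_data_exists[OF y(1) x(2)] by blast
  have U3: "u3 \<in> S" "v3 \<in> carrier R" "u3 \<otimes> b = v3 \<otimes> r" using m3 by (auto simp: mult_data_def)
  have U1: "u1 \<in> S" "v1 \<in> carrier R" "u1 \<otimes> a = v1 \<otimes> t" using m1 by (auto simp: mult_data_def)
  have U3c: "u3 \<in> carrier R" "u1 \<in> carrier R" using U3 U1 S_carrier by auto
  obtain u5 v5 where U5: "u5 \<in> S" "v5 \<in> carrier R" "v5 \<otimes> u3 = u5 \<otimes> v1"
    using ore_cond[OF U3(1) U1(2)] by blast
  have u5c: "u5 \<in> carrier R" using U5 S_carrier by blast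
  have mA: "mult_data (v1 \<otimes> b) r u5 (v5 \<otimes> v3)"
  proof -
    have "u5 \<otimes> (v1 \<otimes> b) = (u5 \<otimes> v1) \<otimes> b" using u5c U1 y by (simp add: m_assoc)
    also have "\<dots> = (v5 \<otimes> u3) \<otimes> b" using U5 by simp
    also have "\<dots> = v5 \<otimes> (v3 \<otimes> r)" using U5(2) U3c y U3(3) by (simp add: m_assoc)
    also have "\<dots> = (v5 \<otimes> v3) \<otimes> r" using U5(2) U3(2) C by (simp add: m_assoc)
    finally show ?thesis unfolding mult_data_def using U5 U3 by auto
  qed
  have mB: "mult_data a (u3 \<otimes> t) (u5 \<otimes> u1) v5"
  proof -
    have "(u5 \<otimes> u1) \<otimes> a = u5 \<otimes> (v1 \<otimes> t)" using u5c U3c x U1(3) by (simp add: m_assoc)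
    also have "\<dots> = (u5 \<otimes> v1) \<otimes> t" using u5c U1(2) C by (simp add: m_assoc)
    also have "\<dots> = (v5 \<otimes> u3) \<otimes> t" using U5 by simp
    also have "\<dots> = v5 \<otimes> (u3 \<otimes> t)" using U5(2) U3c C by (simp add: m_assoc)
    finally show ?thesis unfolding mult_data_def using U5 U1 S_mult by auto
  qed
  have xy: "x \<otimes>\<^bsub>loc R S\<^esub> y = ofrac R S (u1 \<otimes> s) (v1 \<otimes> b)"
    using loc_mult_ofrac[OF x(1) y(1) x(2) y(2) m1] x y by simp
  have yz: "y \<otimes>\<^bsub>loc R S\<^esub> z = ofrac R S (u3 \<otimes> t) (v3 \<otimes> c)"
    using loc_mult_ofrac[OF y(1) z(1) y(2) z(2) m3] y z by simp
  have "(x \<otimes>\<^bsub>loc R S\<^esub> y) \<otimes>\<^bsub>loc R S\<^esub> z = ofrac R S (u5 \<otimes> (u1 \<otimes> s)) ((v5 \<otimes> v3) \<otimes> c)"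
    unfolding xy z(3) using U1 U3 x y z S_mult by (intro loc_mult_ofrac mA) auto
  also have "\<dots> = ofrac R S ((u5 \<otimes> u1) \<otimes> s) (v5 \<otimes> (v3 \<otimes> c))"
    using u5c U3c C U5 U3 z by (simp add: m_assoc)
  also have "\<dots> = x \<otimes>\<^bsub>loc R S\<^esub> (y \<otimes>\<^bsub>loc R S\<^esub> z)"
    unfolding yz x(3) using U1 U3 x y z S_mult by (intro loc_mult_ofrac[symmetric] mB) auto
  finally show ?thesis .
qed

lemma monoid_loc: "monoid (loc R S)"
proof (rule monoidI)
  fix x y assume "x \<in> carrier (loc R S)" "y \<in> carrier (loc R S)"
  then show "x \<otimes>\<^bsub>loc R S\<^esub> y \<in> carrier (loc R S)" by (rule mult_closed_loc)
next
  show "\<one>\<^bsub>loc R S\<^esub> \<in> carrier (loc R S)" using S_one by (simp add: one_loc ofrac_carrier)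
next
  fix x y z assume "x \<in> carrier (loc R S)" "y \<in> carrier (loc R S)" "z \<in> carrier (loc R S)"
  then show "x \<otimes>\<^bsub>loc R S\<^esub> y \<otimes>\<^bsub>loc R S\<^esub> z = x \<otimes>\<^bsub>loc R S\<^esub> (y \<otimes>\<^bsub>loc R S\<^esub> z)"
    by (rule loc_mult_assoc)
next
  fix x assume "x \<in> carrier (loc R S)"
  then obtain s a where x: "s \<in> S" "a \<in> carrier R" "x = ofrac R S s a" by (auto elim: loc_carrierE)
  have sc: "s \<in> carrier R" using x S_carrier by blast
  have "mult_data \<one> s s \<one>" unfolding mult_data_def using x sc by simp
  from loc_mult_ofrac[OF S_one x(1) one_closed x(2) this]
  show "\<one>\<^bsub>loc R S\<^esub> \<otimes>\<^bsub>loc R S\<^esub> x = x" using x sc by (simp add: one_loc)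
  have "mult_data a \<one> \<one> a" unfolding mult_data_def using x S_one by simp
  from loc_mult_ofrac[OF x(1) S_one x(2) one_closed this]
  show "x \<otimes>\<^bsub>loc R S\<^esub> \<one>\<^bsub>loc R S\<^esub> = x" using x sc by (simp add: one_loc)
qed

lemma loc_l_distr:
  assumes xyz: "x \<in> carrier (loc R S)" "y \<in> carrier (loc R S)" "z \<in> carrier (loc R S)"
  shows "(x \<oplus>\<^bsub>loc R S\<^esub> y) \<otimes>\<^bsub>loc R S\<^esub> z = x \<otimes>\<^bsub>loc R S\<^esub> z \<oplus>\<^bsub>loc R S\<^esub> y \<otimes>\<^bsub>loc R S\<^esub> z"
proof -
  obtain \<sigma> a b where xy: "\<sigma> \<in> S" "a \<in> carrier R" "b \<in> carrier R" "x = ofrac R S \<sigma> a" "y = ofrac R S \<sigma> b"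
    using loc_common_denom2[OF xyz(1,2)] by blast
  obtain t c where z: "t \<in> S" "c \<in> carrier R" "z = ofrac R S t c" using xyz(3) by (auto elim: loc_carrierE)
  have C: "\<sigma> \<in> carrier R" "t \<in> carrier R" using xy z S_carrier by auto
  obtain u1 v1 where m1: "mult_data a t u1 v1" using mult_data_exists[OF z(1) xy(2)] by blast
  have U1: "u1 \<in> S" "v1 \<in> carrier R" "u1 \<otimes> a = v1 \<otimes> t" using m1 by (auto simp: mult_data_def)
  have u1c: "u1 \<in> carrier R" using U1 S_carrier by blast
  obtain u2 v2 where m2: "mult_data (u1 \<otimes> b) t u2 v2" using mult_data_exists[OF z(1)] u1c xy by blast
  have U2: "u2 \<in> S" "v2 \<in> carrier R" "u2 \<otimes> (u1 \<otimes> b) = v2 \<otimes> t" using m2 by (auto simp: mult_data_def)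
  have u2c: "u2 \<in> carrier R" using U2 S_carrier by blast
  have uS: "u2 \<otimes> u1 \<in> S" using U1 U2 S_mult by blast
  have ma: "mult_data a t (u2 \<otimes> u1) (u2 \<otimes> v1)"
    unfolding mult_data_def using uS u2c u1c U1 xy C by (simp add: m_assoc)
  have mb: "mult_data b t (u2 \<otimes> u1) v2"
    unfolding mult_data_def using uS u2c u1c U2 xy C by (simp add: m_assoc)
  have mab: "mult_data (a \<oplus> b) t (u2 \<otimes> u1) (u2 \<otimes> v1 \<oplus> v2)"
  proof -
    have "(u2 \<otimes> u1) \<otimes> (a \<oplus> b) = (u2 \<otimes> u1) \<otimes> a \<oplus> (u2 \<otimes> u1) \<otimes> b"
      using u2c u1c xy by (simp add: r_distr)
    also have "\<dots> = (u2 \<otimes> v1) \<otimes> t \<oplus> v2 \<otimes> t" using ma mb by (simp add: mult_data_def)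
    also have "\<dots> = (u2 \<otimes> v1 \<oplus> v2) \<otimes> t" using u2c U1 U2 C by (simp add: l_distr)
    finally show ?thesis unfolding mult_data_def using uS u2c U1 U2 by auto
  qed
  have "(x \<oplus>\<^bsub>loc R S\<^esub> y) \<otimes>\<^bsub>loc R S\<^esub> z = ofrac R S ((u2 \<otimes> u1) \<otimes> \<sigma>) ((u2 \<otimes> v1 \<oplus> v2) \<otimes> c)"
    using ofrac_add_same_denom xy z loc_mult_ofrac[OF xy(1) z(1) _ z(2) mab] by simp
  also have "\<dots> = ofrac R S ((u2 \<otimes> u1) \<otimes> \<sigma>) ((u2 \<otimes> v1) \<otimes> c) \<oplus>\<^bsub>loc R S\<^esub> ofrac R S ((u2 \<otimes> u1) \<otimes> \<sigma>) (v2 \<otimes> c)"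
    using ofrac_add_same_denom[OF S_mult[OF uS xy(1)]] u2c U1 U2 z by (simp add: l_distr)
  also have "\<dots> = x \<otimes>\<^bsub>loc R S\<^esub> z \<oplus>\<^bsub>loc R S\<^esub> y \<otimes>\<^bsub>loc R S\<^esub> z"
    using loc_mult_ofrac[OF xy(1) z(1) xy(2) z(2) ma] loc_mult_ofrac[OF xy(1) z(1) xy(3) z(2) mb] xy z by simp
  finally show ?thesis .
qed

lemma loc_r_distr:
  assumes xyz: "x \<in> carrier (loc R S)" "y \<in> carrier (loc R S)" "z \<in> carrier (loc R S)"
  shows "z \<otimes>\<^bsub>loc R S\<^esub> (x \<oplus>\<^bsub>loc R S\<^esub> y) = z \<otimes>\<^bsub>loc R S\<^esub> x \<oplus>\<^bsub>loc R S\<^esub> z \<otimes>\<^bsub>loc R S\<^esub> y"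
proof -
  obtain \<sigma> a b where xy: "\<sigma> \<in> S" "a \<in> carrier R" "b \<in> carrier R" "x = ofrac R S \<sigma> a" "y = ofrac R S \<sigma> b"
    using loc_common_denom2[OF xyz(1,2)] by blast
  obtain t c where z: "t \<in> S" "c \<in> carrier R" "z = ofrac R S t c" using xyz(3) by (auto elim: loc_carrierE)
  obtain u v where m: "mult_data c \<sigma> u v" using mult_data_exists[OF xy(1) z(2)] by blast
  have U: "u \<in> S" "v \<in> carrier R" using m by (auto simp: mult_data_def)
  have "z \<otimes>\<^bsub>loc R S\<^esub> (x \<oplus>\<^bsub>loc R S\<^esub> y) = ofrac R S (u \<otimes> t) (v \<otimes> (a \<oplus> b))"
    using ofrac_add_same_denom xy z loc_mult_ofrac[OF z(1) xy(1) z(2) _ m] by simp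
  also have "\<dots> = ofrac R S (u \<otimes> t) (v \<otimes> a) \<oplus>\<^bsub>loc R S\<^esub> ofrac R S (u \<otimes> t) (v \<otimes> b)"
    using ofrac_add_same_denom[OF S_mult[OF U(1) z(1)]] U xy by (simp add: r_distr)
  also have "\<dots> = z \<otimes>\<^bsub>loc R S\<^esub> x \<oplus>\<^bsub>loc R S\<^esub> z \<otimes>\<^bsub>loc R S\<^esub> y"
    using loc_mult_ofrac[OF z(1) xy(1) z(2) xy(2) m] loc_mult_ofrac[OF z(1) xy(1) z(2) xy(3) m] xy z by simp
  finally show ?thesis .
qed

lemma ring_loc: "ring (loc R S)"
  by (rule ringI[OF abelian_group_loc monoid_loc]) (simp_all add: loc_l_distr loc_r_distr)

lemma loc_smult_ofrac:
  assumes s: "s \<in> S" and a: "a \<in> carrier R"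
  shows "c \<odot>\<^bsub>loc R S\<^esub> ofrac R S s a = ofrac R S s (c \<odot> a)"
proof -
  obtain s0 a0 where o1: "orep (ofrac R S s a) = (s0, a0)" "s0 \<in> S" "a0 \<in> carrier R" "oeq R S (s, a) (s0, a0)"
    using orep_ofrac[OF s a] by blast
  obtain e e' where e: "e \<in> carrier R" "e' \<in> carrier R" "e \<otimes> s = e' \<otimes> s0" "e \<otimes> s \<in> S" "e \<otimes> a = e' \<otimes> a0"
    using o1(4) unfolding oeq_def' by blast
  have "e' \<otimes> (c \<odot> a0) = e \<otimes> (c \<odot> a)"
    using e o1 a kalg_smul_mult_r[OF kalg, symmetric] by metis
  then have "oeq R S (s0, c \<odot> a0) (s, c \<odot> a)"
    unfolding oeq_def' using e by (intro bexI[of _ e'] bexI[of _ e]) auto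
  then have "ofrac R S s0 (c \<odot> a0) = ofrac R S s (c \<odot> a)"
    using ofrac_eq_iff[OF o1(2) s kalg_smul_closed[OF kalg o1(3)] kalg_smul_closed[OF kalg a]] by blast
  then show ?thesis by (simp add: loc_def o1(1))
qed

lemma loc_smult_mult:
  assumes xy: "x \<in> carrier (loc R S)" "y \<in> carrier (loc R S)"
  shows "c \<odot>\<^bsub>loc R S\<^esub> (x \<otimes>\<^bsub>loc R S\<^esub> y) = (c \<odot>\<^bsub>loc R S\<^esub> x) \<otimes>\<^bsub>loc R S\<^esub> y"
    and "c \<odot>\<^bsub>loc R S\<^esub> (x \<otimes>\<^bsub>loc R S\<^esub> y) = x \<otimes>\<^bsub>loc R S\<^esub> (c \<odot>\<^bsub>loc R S\<^esub> y)"
proof -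
  obtain s a where x: "s \<in> S" "a \<in> carrier R" "x = ofrac R S s a" using xy(1) by (auto elim: loc_carrierE)
  obtain t b where y: "t \<in> S" "b \<in> carrier R" "y = ofrac R S t b" using xy(2) by (auto elim: loc_carrierE)
  obtain u v where m: "mult_data a t u v" using mult_data_exists[OF y(1) x(2)] by blast
  have U: "u \<in> S" "v \<in> carrier R" "u \<otimes> a = v \<otimes> t" using m by (auto simp: mult_data_def)
  have uc: "u \<in> carrier R" "t \<in> carrier R" using U y S_carrier by auto
  have xyv: "x \<otimes>\<^bsub>loc R S\<^esub> y = ofrac R S (u \<otimes> s) (v \<otimes> b)"
    using loc_mult_ofrac[OF x(1) y(1) x(2) y(2) m] x y by simp
  have l: "c \<odot>\<^bsub>loc R S\<^esub> (x \<otimes>\<^bsub>loc R S\<^esub> y) = ofrac R S (u \<otimes> s) (c \<odot> (v \<otimes> b))"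
    unfolding xyv using S_mult[OF U(1) x(1)] U y by (simp add: loc_smult_ofrac)
  have m2: "mult_data (c \<odot> a) t u (c \<odot> v)"
  proof -
    have "u \<otimes> (c \<odot> a) = c \<odot> (u \<otimes> a)" using kalg_smul_mult_r[OF kalg uc(1) x(2)] by simp
    also have "\<dots> = c \<odot> (v \<otimes> t)" using U by simp
    also have "\<dots> = (c \<odot> v) \<otimes> t" using kalg_smul_mult_l[OF kalg U(2) uc(2)] by simp
    finally show ?thesis unfolding mult_data_def using U kalg_smul_closed[OF kalg] by auto
  qed
  have "(c \<odot>\<^bsub>loc R S\<^esub> x) \<otimes>\<^bsub>loc R S\<^esub> y = ofrac R S (u \<otimes> s) ((c \<odot> v) \<otimes> b)"
    unfolding x(3) y(3) loc_smult_ofrac[OF x(1,2)]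
    by (rule loc_mult_ofrac[OF x(1) y(1) kalg_smul_closed[OF kalg x(2)] y(2) m2])
  also have "\<dots> = ofrac R S (u \<otimes> s) (c \<odot> (v \<otimes> b))" using kalg_smul_mult_l[OF kalg U(2) y(2)] by simp
  finally show "c \<odot>\<^bsub>loc R S\<^esub> (x \<otimes>\<^bsub>loc R S\<^esub> y) = (c \<odot>\<^bsub>loc R S\<^esub> x) \<otimes>\<^bsub>loc R S\<^esub> y" using l by simp
  have "x \<otimes>\<^bsub>loc R S\<^esub> (c \<odot>\<^bsub>loc R S\<^esub> y) = ofrac R S (u \<otimes> s) (v \<otimes> (c \<odot> b))"
    unfolding x(3) y(3) loc_smult_ofrac[OF y(1,2)]
    by (rule loc_mult_ofrac[OF x(1) y(1) x(2) kalg_smul_closed[OF kalg y(2)] m])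
  also have "\<dots> = ofrac R S (u \<otimes> s) (c \<odot> (v \<otimes> b))" using kalg_smul_mult_r[OF kalg U(2) y(2)] by simp
  finally show "c \<odot>\<^bsub>loc R S\<^esub> (x \<otimes>\<^bsub>loc R S\<^esub> y) = x \<otimes>\<^bsub>loc R S\<^esub> (c \<odot>\<^bsub>loc R S\<^esub> y)" using l by simp
qed

lemma kalgebra_loc: "kalgebra (loc R S)"
  unfolding kalgebra_def
proof (intro conjI allI impI)
  show "ring (loc R S)" by (rule ring_loc)
next
  fix c x y assume xy: "x \<in> carrier (loc R S)" "y \<in> carrier (loc R S)"
  then show "c \<odot>\<^bsub>loc R S\<^esub> (x \<otimes>\<^bsub>loc R S\<^esub> y) = (c \<odot>\<^bsub>loc R S\<^esub> x) \<otimes>\<^bsub>loc R S\<^esub> y"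
    "c \<odot>\<^bsub>loc R S\<^esub> (x \<otimes>\<^bsub>loc R S\<^esub> y) = x \<otimes>\<^bsub>loc R S\<^esub> (c \<odot>\<^bsub>loc R S\<^esub> y)"
    by (rule loc_smult_mult)+
  obtain \<sigma> a b where "\<sigma> \<in> S" "a \<in> carrier R" "b \<in> carrier R" "x = ofrac R S \<sigma> a" "y = ofrac R S \<sigma> b"
    using loc_common_denom2[OF xy] by blast
  then show "c \<odot>\<^bsub>loc R S\<^esub> (x \<oplus>\<^bsub>loc R S\<^esub> y) = c \<odot>\<^bsub>loc R S\<^esub> x \<oplus>\<^bsub>loc R S\<^esub> c \<odot>\<^bsub>loc R S\<^esub> y"
    by (simp add: ofrac_add_same_denom loc_smult_ofrac kalg_smul_closed[OF kalg] kalg_smul_add[OF kalg])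
next
  fix c d x assume "x \<in> carrier (loc R S)"
  then obtain s a where x: "s \<in> S" "a \<in> carrier R" "x = ofrac R S s a" by (auto elim: loc_carrierE)
  then show "c \<odot>\<^bsub>loc R S\<^esub> x \<in> carrier (loc R S)"
    using kalg_smul_closed[OF kalg] by (simp add: loc_smult_ofrac ofrac_carrier)
  show "(c + d) \<odot>\<^bsub>loc R S\<^esub> x = c \<odot>\<^bsub>loc R S\<^esub> x \<oplus>\<^bsub>loc R S\<^esub> d \<odot>\<^bsub>loc R S\<^esub> x"
    using x by (simp add: ofrac_add_same_denom loc_smult_ofrac kalg_smul_closed[OF kalg] kalg_add_smul[OF kalg])
  show "(c * d) \<odot>\<^bsub>loc R S\<^esub> x = c \<odot>\<^bsub>loc R S\<^esub> (d \<odot>\<^bsub>loc R S\<^esub> x)"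
    using x by (simp add: loc_smult_ofrac kalg_smul_closed[OF kalg] kalg_mult_smul[OF kalg])
  show "1 \<odot>\<^bsub>loc R S\<^esub> x = x" using x by (simp add: loc_smult_ofrac kalg_one_smul[OF kalg])
qed

lemma iloc_mult: "a \<in> carrier R \<Longrightarrow> b \<in> carrier R \<Longrightarrow>
    iloc R S (a \<otimes> b) = iloc R S a \<otimes>\<^bsub>loc R S\<^esub> iloc R S b"
proof -
  assume ab: "a \<in> carrier R" "b \<in> carrier R"
  have "mult_data a \<one> \<one> a" unfolding mult_data_def using ab S_one by simp
  from loc_mult_ofrac[OF S_one S_one ab this] show ?thesis using ab by (simp add: iloc_def)
qed

lemma iloc_alg_hom: "alg_hom R (loc R S) (iloc R S)"
proof -
  have "iloc R S \<in> ring_hom R (loc R S)"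
  proof (rule ring_hom_memI)
    fix x assume "x \<in> carrier R"
    then show "iloc R S x \<in> carrier (loc R S)" using S_one by (simp add: iloc_def ofrac_carrier)
  next
    fix x y assume "x \<in> carrier R" "y \<in> carrier R"
    then show "iloc R S (x \<otimes> y) = iloc R S x \<otimes>\<^bsub>loc R S\<^esub> iloc R S y" by (rule iloc_mult)
    show "iloc R S (x \<oplus> y) = iloc R S x \<oplus>\<^bsub>loc R S\<^esub> iloc R S y"
      using \<open>x \<in> carrier R\<close> \<open>y \<in> carrier R\<close> S_one by (simp add: iloc_def ofrac_add_same_denom)
  next
    show "iloc R S \<one> = \<one>\<^bsub>loc R S\<^esub>" by (simp add: iloc_def one_loc)
  qed
  moreover have "iloc R S (c \<odot> x) = c \<odot>\<^bsub>loc R S\<^esub> iloc R S x" if "x \<in> carrier R" for c x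
    using that S_one by (simp add: iloc_def loc_smult_ofrac)
  ultimately show ?thesis by (simp add: alg_hom_def)
qed

lemma iloc_inv:
  assumes s: "s \<in> S"
  shows "iloc R S s \<otimes>\<^bsub>loc R S\<^esub> ofrac R S s \<one> = \<one>\<^bsub>loc R S\<^esub>"
    and "ofrac R S s \<one> \<otimes>\<^bsub>loc R S\<^esub> iloc R S s = \<one>\<^bsub>loc R S\<^esub>"
proof -
  have sc: "s \<in> carrier R" using s S_carrier by blast
  have "mult_data s s \<one> \<one>" unfolding mult_data_def using S_one sc by simp
  from loc_mult_ofrac[OF S_one s sc one_closed this]
  show "iloc R S s \<otimes>\<^bsub>loc R S\<^esub> ofrac R S s \<one> = \<one>\<^bsub>loc R S\<^esub>" using sc by (simp add: iloc_def one_loc)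
  have "mult_data \<one> \<one> \<one> \<one>" unfolding mult_data_def using S_one by simp
  from loc_mult_ofrac[OF s S_one one_closed sc this]
  have "ofrac R S s \<one> \<otimes>\<^bsub>loc R S\<^esub> iloc R S s = ofrac R S s s" using sc by (simp add: iloc_def)
  also have "\<dots> = ofrac R S \<one> \<one>" using ofrac_expand[OF sc _ S_one one_closed] s sc by simp
  finally show "ofrac R S s \<one> \<otimes>\<^bsub>loc R S\<^esub> iloc R S s = \<one>\<^bsub>loc R S\<^esub>" by (simp add: one_loc)
qed

lemma iloc_Units: "s \<in> S \<Longrightarrow> iloc R S s \<in> Units (loc R S)"
  unfolding Units_def using iloc_inv[of s] S_one S_carrier
  by (auto simp: iloc_def ofrac_carrier)

lemma ofrac_eq_inv_mult:
  assumes "s \<in> S" "r \<in> carrier R"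
  shows "ofrac R S s r = ofrac R S s \<one> \<otimes>\<^bsub>loc R S\<^esub> iloc R S r"
proof -
  have "mult_data \<one> \<one> \<one> \<one>" unfolding mult_data_def using S_one by simp
  from loc_mult_ofrac[OF assms(1) S_one one_closed assms(2) this]
  show ?thesis using assms S_carrier by (simp add: iloc_def)
qed

lemma loc_hom_unique:
  assumes M: "monoid M" and h1: "h1 \<in> ring_hom (loc R S) M" and h2: "h2 \<in> ring_hom (loc R S) M"
    and eq: "\<And>r. r \<in> carrier R \<Longrightarrow> h1 (iloc R S r) = h2 (iloc R S r)"
    and x: "x \<in> carrier (loc R S)"
  shows "h1 x = h2 x"
proof -
  obtain s r where sr: "s \<in> S" "r \<in> carrier R" "x = ofrac R S s r" using x by (auto elim: loc_carrierE)
  have sc: "s \<in> carrier R" using sr S_carrier by blast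
  have c: "iloc R S s \<in> carrier (loc R S)" "ofrac R S s \<one> \<in> carrier (loc R S)"
    using sr sc S_one by (auto simp: iloc_def ofrac_carrier)
  have inv: "h (ofrac R S s \<one>) = inv\<^bsub>M\<^esub> (h (iloc R S s))" if h: "h \<in> ring_hom (loc R S) M" for h
  proof -
    have "h (iloc R S s) \<otimes>\<^bsub>M\<^esub> h (ofrac R S s \<one>) = \<one>\<^bsub>M\<^esub>"
      using iloc_inv(1)[OF sr(1)] ring_hom_mult[OF h c] ring_hom_one[OF h] by simp
    moreover have "h (ofrac R S s \<one>) \<otimes>\<^bsub>M\<^esub> h (iloc R S s) = \<one>\<^bsub>M\<^esub>"
      using iloc_inv(2)[OF sr(1)] ring_hom_mult[OF h c(2) c(1)] ring_hom_one[OF h] by simp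
    ultimately show ?thesis
      using monoid.inv_unique'[OF M ring_hom_closed[OF h c(1)] ring_hom_closed[OF h c(2)]] by simp
  qed
  have ir: "iloc R S r \<in> carrier (loc R S)" using sr S_one by (simp add: iloc_def ofrac_carrier)
  have "h1 x = h1 (ofrac R S s \<one>) \<otimes>\<^bsub>M\<^esub> h1 (iloc R S r)"
    unfolding sr(3) ofrac_eq_inv_mult[OF sr(1,2)] by (rule ring_hom_mult[OF h1 c(2) ir])
  also have "\<dots> = h2 (ofrac R S s \<one>) \<otimes>\<^bsub>M\<^esub> h2 (iloc R S r)"
    using inv[OF h1] inv[OF h2] eq[OF sc] eq[OF sr(2)] by simp
  also have "\<dots> = h2 x"
    unfolding sr(3) ofrac_eq_inv_mult[OF sr(1,2)] by (rule ring_hom_mult[OF h2 c(2) ir, symmetric])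
  finally show ?thesis .
qed

lemma frac_lift_ofrac:
  assumes M: "ring M" and f: "f \<in> ring_hom R M" and U: "\<And>s. s \<in> S \<Longrightarrow> f s \<in> Units M"
    and sr: "s \<in> S" "r \<in> carrier R"
  shows "frac_lift M f (ofrac R S s r) = inv\<^bsub>M\<^esub> (f s) \<otimes>\<^bsub>M\<^esub> f r"
proof -
  interpret M: ring M by (rule M)
  have expand: "inv\<^bsub>M\<^esub> (f (c \<otimes> s)) \<otimes>\<^bsub>M\<^esub> f (c \<otimes> r) = inv\<^bsub>M\<^esub> (f s) \<otimes>\<^bsub>M\<^esub> f r"
    if "c \<in> carrier R" "c \<otimes> s \<in> S" "s \<in> S" "r \<in> carrier R" for c s r
    using M.Units_frac_expand[OF U[OF that(3)] _ ring_hom_closed[OF f that(1)] ring_hom_closed[OF f that(4)]]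
      U[OF that(2)] ring_hom_mult[OF f that(1) S_carrier[OF that(3)]] ring_hom_mult[OF f that(1,4)]
    by simp
  obtain s0 r0 where o1: "orep (ofrac R S s r) = (s0, r0)" "s0 \<in> S" "r0 \<in> carrier R" "oeq R S (s, r) (s0, r0)"
    using orep_ofrac[OF sr] by blast
  obtain c c' where c: "c \<in> carrier R" "c' \<in> carrier R" "c \<otimes> s = c' \<otimes> s0" "c \<otimes> s \<in> S" "c \<otimes> r = c' \<otimes> r0"
    using o1(4) unfolding oeq_def' by blast
  have "inv\<^bsub>M\<^esub> (f s) \<otimes>\<^bsub>M\<^esub> f r = inv\<^bsub>M\<^esub> (f (c \<otimes> s)) \<otimes>\<^bsub>M\<^esub> f (c \<otimes> r)"
    using expand[OF c(1,4) sr] by simp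
  also have "\<dots> = inv\<^bsub>M\<^esub> (f (c' \<otimes> s0)) \<otimes>\<^bsub>M\<^esub> f (c' \<otimes> r0)" using c by simp
  also have "\<dots> = inv\<^bsub>M\<^esub> (f s0) \<otimes>\<^bsub>M\<^esub> f r0" using expand[OF c(2) _ o1(2,3)] c by simp
  finally show ?thesis by (simp add: frac_lift_def o1(1))
qed

lemma frac_lift_ring_hom:
  assumes M: "ring M" and f: "f \<in> ring_hom R M" and U: "\<And>s. s \<in> S \<Longrightarrow> f s \<in> Units M"
  shows "frac_lift M f \<in> ring_hom (loc R S) M"
proof -
  interpret M: ring M by (rule M)
  have val: "\<And>s r. s \<in> S \<Longrightarrow> r \<in> carrier R \<Longrightarrow>
      frac_lift M f (ofrac R S s r) = inv\<^bsub>M\<^esub> (f s) \<otimes>\<^bsub>M\<^esub> f r"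
    by (rule frac_lift_ofrac[OF M f U])
  note fc = ring_hom_closed[OF f]
  show ?thesis
  proof (rule ring_hom_memI)
    fix x assume "x \<in> carrier (loc R S)"
    then show "frac_lift M f x \<in> carrier M" using val U fc by (auto elim: loc_carrierE)
  next
    fix x y assume xy: "x \<in> carrier (loc R S)" "y \<in> carrier (loc R S)"
    obtain s a where x: "s \<in> S" "a \<in> carrier R" "x = ofrac R S s a" using xy(1) by (auto elim: loc_carrierE)
    obtain t b where y: "t \<in> S" "b \<in> carrier R" "y = ofrac R S t b" using xy(2) by (auto elim: loc_carrierE)
    obtain u v where m: "mult_data a t u v" using mult_data_exists[OF y(1) x(2)] by blast
    have uv: "u \<in> S" "v \<in> carrier R" "u \<otimes> a = v \<otimes> t" using m by (auto simp: mult_data_def)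
    have e: "f u \<otimes>\<^bsub>M\<^esub> f a = f v \<otimes>\<^bsub>M\<^esub> f t"
      using uv x y S_carrier by (metis ring_hom_mult[OF f])
    have "frac_lift M f (x \<otimes>\<^bsub>loc R S\<^esub> y) = inv\<^bsub>M\<^esub> (f u \<otimes>\<^bsub>M\<^esub> f s) \<otimes>\<^bsub>M\<^esub> (f v \<otimes>\<^bsub>M\<^esub> f b)"
      using loc_mult_ofrac[OF x(1) y(1) x(2) y(2) m] x y uv S_mult[OF uv(1) x(1)] S_carrier
      by (simp add: val ring_hom_mult[OF f])
    also have "\<dots> = (inv\<^bsub>M\<^esub> (f s) \<otimes>\<^bsub>M\<^esub> f a) \<otimes>\<^bsub>M\<^esub> (inv\<^bsub>M\<^esub> (f t) \<otimes>\<^bsub>M\<^esub> f b)"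
      by (rule M.Units_frac_mult[OF U[OF uv(1)] U[OF x(1)] U[OF y(1)] fc[OF x(2)] fc[OF y(2)] fc[OF uv(2)] e])
    also have "\<dots> = frac_lift M f x \<otimes>\<^bsub>M\<^esub> frac_lift M f y" using val x y by simp
    finally show "frac_lift M f (x \<otimes>\<^bsub>loc R S\<^esub> y) = frac_lift M f x \<otimes>\<^bsub>M\<^esub> frac_lift M f y" .
    obtain \<sigma> a' b' where c: "\<sigma> \<in> S" "a' \<in> carrier R" "b' \<in> carrier R" "x = ofrac R S \<sigma> a'" "y = ofrac R S \<sigma> b'"
      using loc_common_denom2[OF xy] by blast
    then show "frac_lift M f (x \<oplus>\<^bsub>loc R S\<^esub> y) = frac_lift M f x \<oplus>\<^bsub>M\<^esub> frac_lift M f y"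
      using U[OF c(1)] fc by (simp add: ofrac_add_same_denom val ring_hom_add[OF f] M.r_distr)
  next
    show "frac_lift M f \<one>\<^bsub>loc R S\<^esub> = \<one>\<^bsub>M\<^esub>"
      using val[OF S_one one_closed] ring_hom_one[OF f] by (simp add: one_loc)
  qed
qed

lemma loc_universal:
  assumes kR': "kalgebra R'" and f: "alg_hom R R' f" and U: "\<And>s. s \<in> S \<Longrightarrow> f s \<in> Units R'"
  shows "\<exists>g. alg_hom (loc R S) R' g \<and> (\<forall>r\<in>carrier R. g (iloc R S r) = f r)"
proof -
  have M: "ring R'" and hf: "f \<in> ring_hom R R'" using kR' f by (simp_all add: kalg_ring alg_hom_def)
  interpret M: ring R' by (rule M)
  have val: "\<And>s r. s \<in> S \<Longrightarrow> r \<in> carrier R \<Longrightarrow>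
      frac_lift R' f (ofrac R S s r) = inv\<^bsub>R'\<^esub> (f s) \<otimes>\<^bsub>R'\<^esub> f r"
    by (rule frac_lift_ofrac[OF M hf U])
  note fc = ring_hom_closed[OF hf]
  have "frac_lift R' f (c \<odot>\<^bsub>loc R S\<^esub> x) = c \<odot>\<^bsub>R'\<^esub> frac_lift R' f x" if x0: "x \<in> carrier (loc R S)" for c x
  proof -
    obtain s a where x: "s \<in> S" "a \<in> carrier R" "x = ofrac R S s a" using x0 by (auto elim: loc_carrierE)
    have "frac_lift R' f (c \<odot>\<^bsub>loc R S\<^esub> x) = inv\<^bsub>R'\<^esub> (f s) \<otimes>\<^bsub>R'\<^esub> (c \<odot>\<^bsub>R'\<^esub> f a)"
      using x f kalg_smul_closed[OF kalg] by (simp add: loc_smult_ofrac val alg_hom_def)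
    also have "\<dots> = c \<odot>\<^bsub>R'\<^esub> frac_lift R' f x"
      using kalg_smul_mult_r[OF kR' M.Units_inv_closed[OF U[OF x(1)]] fc[OF x(2)]] x by (simp add: val)
    finally show ?thesis .
  qed
  moreover have "\<forall>r\<in>carrier R. frac_lift R' f (iloc R S r) = f r"
    using val S_one ring_hom_one[OF hf] fc by (simp add: iloc_def)
  ultimately show ?thesis
    using frac_lift_ring_hom[OF M hf U] by (auto simp: alg_hom_def)
qed
end

section \<open>Compatibility of an Ore set with a coaction\<close>

context ore
begin

lemma alg_hom_coaction_loc:
  assumes B: "kalgebra B" and \<rho>: "alg_hom R (tensor_alg R B) \<rho>"
  shows "alg_hom R (tensor_alg (loc R S) B) (tmap (loc R S) B (iloc R S) id \<circ> \<rho>)"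
  by (rule alg_hom_comp[OF \<rho> tmap_alg_hom[OF iloc_alg_hom alg_hom_id[OF B] kalg B kalgebra_loc B]])

lemma coassoc_loc_iloc:
  assumes B: "bialgebra B \<Delta> \<epsilon>" and E: "comod_alg B \<Delta> \<epsilon> R \<rho>"
    and \<rho>T: "alg_hom (loc R S) (tensor_alg (loc R S) B) \<rho>T"
    and ext: "\<And>r. r \<in> carrier R \<Longrightarrow> \<rho>T (iloc R S r) = tmap (loc R S) B (iloc R S) id (\<rho> r)"
    and r: "r \<in> carrier R"
  shows "tassoc (loc R S) B B (tmap (tensor_alg (loc R S) B) B \<rho>T id (\<rho>T (iloc R S r)))
       = tmap (loc R S) (tensor_alg B B) id \<Delta> (\<rho>T (iloc R S r))"
proof -
  let ?L = "loc R S" and ?i = "iloc R S"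
  have kB: "kalgebra B" and \<Delta>: "alg_hom B (tensor_alg B B) \<Delta>"
    using B unfolding bialgebra_def by blast+
  have \<rho>: "alg_hom R (tensor_alg R B) \<rho>"
    and coass: "tassoc R B B (tmap (tensor_alg R B) B \<rho> id (\<rho> r)) = tmap R (tensor_alg B B) id \<Delta> (\<rho> r)"
    using E r unfolding comod_alg_def by blast+
  have lin: "klinear R ?L ?i" "klinear ?L (tensor_alg ?L B) \<rho>T" "klinear R (tensor_alg R B) \<rho>"
    "klinear B (tensor_alg B B) \<Delta>"
    using iloc_alg_hom \<rho>T \<rho> \<Delta> by (simp_all add: alg_hom_klinear)
  have X: "\<rho> r \<in> carrier (tensor_alg R B)" using klinear_closed[OF lin(3) r] .
  have "tmap (tensor_alg ?L B) B \<rho>T id (tmap ?L B ?i id (\<rho> r))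
      = tmap (tensor_alg ?L B) B (\<rho>T \<circ> ?i) (id \<circ> id) (\<rho> r)"
    by (rule tmap_comp[OF lin(1) klinear_id lin(2) klinear_id X])
  also have "\<dots> = tmap (tensor_alg ?L B) B (tmap ?L B ?i id \<circ> \<rho>) (id \<circ> id) (\<rho> r)"
    by (rule tmap_cong[OF kalg kB X]) (simp_all add: ext)
  also have "\<dots> = tmap (tensor_alg ?L B) B (tmap ?L B ?i id) id (tmap (tensor_alg R B) B \<rho> id (\<rho> r))"
    by (rule tmap_comp[OF lin(3) klinear_id klinear_tmap[OF lin(1) klinear_id] klinear_id X, symmetric])
  finally have "tassoc ?L B B (tmap (tensor_alg ?L B) B \<rho>T id (\<rho>T (?i r)))
      = tassoc ?L B B (tmap (tensor_alg ?L B) B (tmap ?L B ?i id) id (tmap (tensor_alg R B) B \<rho> id (\<rho> r)))"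
    using ext[OF r] by simp
  also have "\<dots> = tmap ?L (tensor_alg B B) ?i (tmap B B id id)
       (tassoc R B B (tmap (tensor_alg R B) B \<rho> id (\<rho> r)))"
    by (rule tassoc_natural[OF kalg kB kB kalgebra_loc kB kB lin(1) klinear_id klinear_id
          tmap_closed[OF lin(3) klinear_id X]])
  also have "\<dots> = tmap ?L (tensor_alg B B) (?i \<circ> id) (tmap B B id id \<circ> \<Delta>) (\<rho> r)"
    unfolding coass by (rule tmap_comp[OF klinear_id lin(4) lin(1) klinear_tmap[OF klinear_id klinear_id] X])
  also have "\<dots> = tmap ?L (tensor_alg B B) (id \<circ> ?i) (\<Delta> \<circ> id) (\<rho> r)"
    by (rule tmap_cong[OF kalg kB X]) (simp_all add: tmap_id klinear_closed[OF lin(4)])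
  also have "\<dots> = tmap ?L (tensor_alg B B) id \<Delta> (\<rho>T (?i r))"
    using tmap_comp[OF lin(1) klinear_id klinear_id lin(4) X] ext[OF r] by simp
  finally show ?thesis .
qed

lemma coassoc_loc:
  assumes B: "bialgebra B \<Delta> \<epsilon>" and E: "comod_alg B \<Delta> \<epsilon> R \<rho>"
    and \<rho>T: "alg_hom (loc R S) (tensor_alg (loc R S) B) \<rho>T"
    and ext: "\<And>r. r \<in> carrier R \<Longrightarrow> \<rho>T (iloc R S r) = tmap (loc R S) B (iloc R S) id (\<rho> r)"
    and x: "x \<in> carrier (loc R S)"
  shows "tassoc (loc R S) B B (tmap (tensor_alg (loc R S) B) B \<rho>T id (\<rho>T x))
       = tmap (loc R S) (tensor_alg B B) id \<Delta> (\<rho>T x)"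
proof -
  let ?L = "loc R S"
  have kB: "kalgebra B" and \<Delta>: "alg_hom B (tensor_alg B B) \<Delta>"
    using B unfolding bialgebra_def by blast+
  have kL: "kalgebra ?L" and kBB: "kalgebra (tensor_alg B B)" and kLB: "kalgebra (tensor_alg ?L B)"
    using kalgebra_loc kalgebra_tensor kB by blast+
  let ?h1 = "tassoc ?L B B \<circ> (tmap (tensor_alg ?L B) B \<rho>T id \<circ> \<rho>T)"
  let ?h2 = "tmap ?L (tensor_alg B B) id \<Delta> \<circ> \<rho>T"
  have h1: "?h1 \<in> ring_hom ?L (tensor_alg ?L (tensor_alg B B))"
    using \<rho>T tmap_alg_hom[OF \<rho>T alg_hom_id[OF kB] kL kB kLB kB] tassoc_alg_hom[OF kL kB kB]
    by (auto simp: alg_hom_def intro: ring_hom_trans)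
  have h2: "?h2 \<in> ring_hom ?L (tensor_alg ?L (tensor_alg B B))"
    using \<rho>T tmap_alg_hom[OF alg_hom_id[OF kL] \<Delta> kL kB kL kBB]
    by (auto simp: alg_hom_def intro: ring_hom_trans)
  have "?h1 x = ?h2 x"
    using coassoc_loc_iloc[OF B E \<rho>T ext]
    by (intro loc_hom_unique[OF ring.axioms(2)[OF ring_tensor[OF kL kBB]] h1 h2 _ x]) simp
  then show ?thesis by simp
qed

lemma counit_loc:
  assumes B: "bialgebra B \<Delta> \<epsilon>" and E: "comod_alg B \<Delta> \<epsilon> R \<rho>"
    and \<rho>T: "alg_hom (loc R S) (tensor_alg (loc R S) B) \<rho>T"
    and ext: "\<And>r. r \<in> carrier R \<Longrightarrow> \<rho>T (iloc R S r) = tmap (loc R S) B (iloc R S) id (\<rho> r)"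
    and x: "x \<in> carrier (loc R S)"
  shows "tmap (loc R S) kfield id \<epsilon> (\<rho>T x) = tens (loc R S) kfield x 1"
proof -
  let ?L = "loc R S" and ?i = "iloc R S"
  have kB: "kalgebra B" and \<epsilon>: "alg_hom B kfield \<epsilon>"
    using B unfolding bialgebra_def by blast+
  have \<rho>: "alg_hom R (tensor_alg R B) \<rho>"
    and coun: "\<And>r. r \<in> carrier R \<Longrightarrow> tmap R kfield id \<epsilon> (\<rho> r) = tens R kfield r 1"
    using E unfolding comod_alg_def by blast+
  have kL: "kalgebra ?L" by (rule kalgebra_loc)
  have lin: "klinear R ?L ?i" "klinear R (tensor_alg R B) \<rho>" "klinear B kfield \<epsilon>"
    using iloc_alg_hom \<rho> \<epsilon> by (simp_all add: alg_hom_klinear)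
  let ?h1 = "tmap ?L kfield id \<epsilon> \<circ> \<rho>T"
  have h1: "?h1 \<in> ring_hom ?L (tensor_alg ?L kfield)"
    using \<rho>T tmap_alg_hom[OF alg_hom_id[OF kL] \<epsilon> kL kB kL kalgebra_kfield]
    by (auto simp: alg_hom_def intro: ring_hom_trans)
  have "?h1 (?i r) = tens ?L kfield (?i r) 1" if r: "r \<in> carrier R" for r
  proof -
    have X: "\<rho> r \<in> carrier (tensor_alg R B)" using klinear_closed[OF lin(2) r] .
    have "?h1 (?i r) = tmap ?L kfield id \<epsilon> (tmap ?L B ?i id (\<rho> r))" using ext[OF r] by simp
    also have "\<dots> = tmap ?L kfield (?i \<circ> id) (id \<circ> \<epsilon>) (\<rho> r)"
      using tmap_comp[OF lin(1) klinear_id klinear_id lin(3) X] by (simp add: comp_def)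
    also have "\<dots> = tmap ?L kfield ?i id (tmap R kfield id \<epsilon> (\<rho> r))"
      by (rule tmap_comp[OF klinear_id lin(3) lin(1) klinear_id X, symmetric])
    also have "\<dots> = tens ?L kfield (?i r) 1"
      using coun[OF r] tmap_tens[OF lin(1) klinear_id] by simp
    finally show ?thesis .
  qed
  then have "?h1 x = tens ?L kfield x 1"
    by (intro loc_hom_unique[OF ring.axioms(2)[OF ring_tensor[OF kL kalgebra_kfield]] h1
          tens_kfield_one_ring_hom[OF kL] _ x])
  then show ?thesis by simp
qed

lemma comod_alg_loc:
  assumes B: "bialgebra B \<Delta> \<epsilon>" and E: "comod_alg B \<Delta> \<epsilon> R \<rho>"
    and \<rho>T: "alg_hom (loc R S) (tensor_alg (loc R S) B) \<rho>T"
    and ext: "\<And>r. r \<in> carrier R \<Longrightarrow> \<rho>T (iloc R S r) = tmap (loc R S) B (iloc R S) id (\<rho> r)"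
  shows "comod_alg B \<Delta> \<epsilon> (loc R S) \<rho>T"
  unfolding comod_alg_def
  using kalgebra_loc \<rho>T coassoc_loc[OF B E \<rho>T ext] counit_loc[OF B E \<rho>T ext] by blast

lemma Units_of_rho_compatible:
  assumes "rho_compatible B \<Delta> \<epsilon> R \<rho> S" and s: "s \<in> S"
  shows "tmap (loc R S) B (iloc R S) id (\<rho> s) \<in> Units (tensor_alg (loc R S) B)"
proof -
  obtain \<rho>T where "comod_alg B \<Delta> \<epsilon> (loc R S) \<rho>T"
    and ext: "\<forall>r\<in>carrier R. \<rho>T (iloc R S r) = tmap (loc R S) B (iloc R S) id (\<rho> r)"
    using assms(1) unfolding rho_compatible_def by blast
  then have "\<rho>T \<in> ring_hom (loc R S) (tensor_alg (loc R S) B)"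
    by (simp add: comod_alg_def alg_hom_def)
  from ring_hom_Units[OF this iloc_Units[OF s]] show ?thesis
    using ext S_carrier[OF s] by simp
qed

lemma rho_compatible_of_Units:
  assumes B: "bialgebra B \<Delta> \<epsilon>" and E: "comod_alg B \<Delta> \<epsilon> R \<rho>"
    and U: "\<And>s. s \<in> S \<Longrightarrow> tmap (loc R S) B (iloc R S) id (\<rho> s) \<in> Units (tensor_alg (loc R S) B)"
  shows "rho_compatible B \<Delta> \<epsilon> R \<rho> S"
proof -
  let ?L = "loc R S" and ?i = "iloc R S"
  have kB: "kalgebra B" using B by (simp add: bialgebra_def)
  have "alg_hom R (tensor_alg ?L B) (tmap ?L B ?i id \<circ> \<rho>)"
    using alg_hom_coaction_loc[OF kB] E by (simp add: comod_alg_def)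
  then obtain \<rho>T where \<rho>T: "alg_hom ?L (tensor_alg ?L B) \<rho>T"
    and ext: "\<forall>r\<in>carrier R. \<rho>T (?i r) = tmap ?L B ?i id (\<rho> r)"
    using loc_universal[OF kalgebra_tensor[OF kalgebra_loc kB]] U by fastforce
  have "\<forall>x\<in>carrier ?L. \<rho>' x = \<rho>T x"
    if "comod_alg B \<Delta> \<epsilon> ?L \<rho>' \<and> (\<forall>r\<in>carrier R. \<rho>' (?i r) = tmap ?L B ?i id (\<rho> r))" for \<rho>'
    using that \<rho>T ext loc_hom_unique[OF ring.axioms(2)[OF ring_tensor[OF kalgebra_loc kB]]]
    by (simp add: comod_alg_def alg_hom_def)
  then show ?thesis
    unfolding rho_compatible_def using comod_alg_loc[OF B E \<rho>T] ext by blast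
qed

end

theorem mainTheorem1:
  fixes B :: "('k::field,'b) kalg" and \<Delta> :: "'b \<Rightarrow> ('b \<times> 'b \<Rightarrow> 'k) set" and \<epsilon> :: "'b \<Rightarrow> 'k"
    and E :: "('k,'e) kalg" and \<rho> :: "'e \<Rightarrow> ('e \<times> 'b \<Rightarrow> 'k) set" and T :: "'e set"
  assumes "bialgebra B \<Delta> \<epsilon>"
    and "comod_alg B \<Delta> \<epsilon> E \<rho>"
    and "left_ore E T"
  shows "rho_compatible B \<Delta> \<epsilon> E \<rho> T \<longleftrightarrow>
    (\<forall>t\<in>T. tmap (loc E T) B (iloc E T) id (\<rho> t) \<in> Units (tensor_alg (loc E T) B))"
proof -
  interpret ore E T using assms(2,3) by unfold_locales (simp add: comod_alg_def)
  show ?thesis using Units_of_rho_compatible rho_compatible_of_Units[OF assms(1,2)] by blast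
qed

end
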